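(* Let $R$ and $H$ be hyperdomains, $X=\operatorname{Spec}R$ and $Y=\operatorname{Spec}H$ with their structure sheaves $\mathcal{O}_X,\mathcal{O}_Y$. Then there is a natural bijection \[\operatorname{Hom}(R,H)\cong\operatorname{Hom}(Y,X)\] between homomorphisms of hyperrings $R\to H$ and morphisms of locally hyperringed spaces $(Y,\mathcal{O}_Y)\to(X,\mathcal{O}_X)$; a homomorphism $\varphi$ corresponds to the morphism with underlying map $\mathfrak{p}\mapsto\varphi^{-1}(\mathfrak{p})$, and a morphism to the homomorphism obtained on global sections.
   Context: Hyperring: a set with a hyperoperation $+$ into nonempty subsets (extended to subsets by $A+B=\bigcup a+b$) making $(R,+,0)$ a canonical hypergroup (commutative, associative, unique $0$ with $0+x=\{x\}$, unique $-x$ with $0\in x+(-x)$, $x\in y+z\iff z\in x+(-y)$), and a commutative monoid $(R,\cdot,1)$, with $x(y+z)=xy+xz$, $0x=0$, $0\ne1$. Homomorphisms satisfy $\varphi(a+b)\subseteq\varphi(a)+\varphi(b)$, $\varphi(ab)=\varphi(a)\varphi(b)$. A hyperdomain has no zero-divisors. Hyperideals, primes, $\operatorname{Spec}$ with the Zariski topology and $D(f)$ are as for rings. Localization $T^{-1}R$ at a multiplicative submonoid $T$: pairs modulo $(r_1,t_1)\sim(r_2,t_2)\iff xr_1t_2=xr_2t_1$ for some $x\in T$, with $\frac{r_1}{t_1}+\frac{r_2}{t_2}=\{\frac y{t_1t_2}\mid y\in r_1t_2+t_1r_2\}$; $R_\mathfrak{p}=(R\setminus\mathfrak{p})^{-1}R$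 has a unique maximal hyperideal. The structure sheaf: $\mathcal{O}_X(U)$ is the set of maps $s:U\to\bigsqcup_{\mathfrak{p}\in U}R_\mathfrak{p}$, $s(\mathfrak{p})\in R_\mathfrak{p}$, locally of the form $\mathfrak{q}\mapsto\frac af$ with $f\notin\mathfrak{q}$, with pointwise multiplication and $s+t=\{r\mid r(\mathfrak{p})\in s(\mathfrak{p})+t(\mathfrak{p})\ \forall\mathfrak{p}\}$; for a hyperdomain this is a sheaf of hyperrings with $\mathcal{O}_X(X)\cong R$ and stalks $\mathcal{O}_{X,\mathfrak{p}}\cong R_\mathfrak{p}$. A morphism of locally hyperringed spaces $(Y,\mathcal{O}_Y)\to(X,\mathcal{O}_X)$ is a pair $(f,f^\#)$ of a continuous map $f:Y\to X$ and a morphism of sheaves of hyperrings $f^\#:\mathcal{O}_X\to f_*\mathcal{O}_Y$ (hyperring homomorphisms compatible with restrictions) such that each induced stalk map $\mathcal{O}_{X,f(\mathfrak{p})}\to\mathcal{O}_{Y,\mathfrak{p}}$ is local, i.e. the preimage of the maximal hyperideal is the maximal hyperideal. *)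

theory Defs
  imports Main "HOL-Library.FuncSet"
begin

record 'a hyperring =
  carrier :: "'a set"
  hadd :: "'a \<Rightarrow> 'a \<Rightarrow> 'a set"
  hmul :: "'a \<Rightarrow> 'a \<Rightarrow> 'a"
  hzero :: 'a
  hone :: 'a

definition hadd_set :: "'a hyperring \<Rightarrow> 'a set \<Rightarrow> 'a set \<Rightarrow> 'a set" where
  "hadd_set A X Y = (\<Union>x\<in>X. \<Union>y\<in>Y. hadd A x y)"

definition hneg :: "'a hyperring \<Rightarrow> 'a \<Rightarrow> 'a" where
  "hneg A x = (THE y. y \<in> carrier A \<and> hzero A \<in> hadd A x y)"

definition canonical_hypergroup :: "'a hyperring \<Rightarrow> bool" where
  "canonical_hypergroup A \<longleftrightarrow>
     hzero A \<in> carrier A \<and>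
     (\<forall>a\<in>carrier A. \<forall>b\<in>carrier A. hadd A a b \<noteq> {} \<and> hadd A a b \<subseteq> carrier A) \<and>
     (\<forall>a\<in>carrier A. \<forall>b\<in>carrier A. hadd A a b = hadd A b a) \<and>
     (\<forall>a\<in>carrier A. \<forall>b\<in>carrier A. \<forall>c\<in>carrier A.
        hadd_set A (hadd A a b) {c} = hadd_set A {a} (hadd A b c)) \<and>
     (\<forall>x\<in>carrier A. hadd A (hzero A) x = {x}) \<and>
     (\<forall>e\<in>carrier A. (\<forall>x\<in>carrier A. hadd A e x = {x}) \<longrightarrow> e = hzero A) \<and>
     (\<forall>x\<in>carrier A. \<exists>!y. y \<in> carrier A \<and> hzero A \<in> hadd A x y) \<and>
     (\<forall>x\<in>carrier A. \<forall>y\<in>carrier A. \<forall>z\<in>carrier A.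
        x \<in> hadd A y z \<longleftrightarrow> z \<in> hadd A x (hneg A y))"

definition hyperring :: "'a hyperring \<Rightarrow> bool" where
  "hyperring A \<longleftrightarrow>
     canonical_hypergroup A \<and>
     (\<forall>a\<in>carrier A. \<forall>b\<in>carrier A. hmul A a b \<in> carrier A) \<and>
     (\<forall>a\<in>carrier A. \<forall>b\<in>carrier A. \<forall>c\<in>carrier A.
        hmul A (hmul A a b) c = hmul A a (hmul A b c)) \<and>
     (\<forall>a\<in>carrier A. \<forall>b\<in>carrier A. hmul A a b = hmul A b a) \<and>
     hone A \<in> carrier A \<and>
     (\<forall>x\<in>carrier A. hmul A (hone A) x = x) \<and>
     (\<forall>x\<in>carrier A. \<forall>y\<in>carrier A. \<forall>z\<in>carrier A.
        hmul A x ` hadd A y z = hadd A (hmul A x y) (hmul A x z)) \<and>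
     (\<forall>x\<in>carrier A. hmul A (hzero A) x = hzero A) \<and>
     hzero A \<noteq> hone A"

definition hyperdomain :: "'a hyperring \<Rightarrow> bool" where
  "hyperdomain A \<longleftrightarrow> hyperring A \<and>
     (\<forall>a\<in>carrier A. \<forall>b\<in>carrier A. hmul A a b = hzero A \<longrightarrow> a = hzero A \<or> b = hzero A)"

definition hyperring_hom :: "'a hyperring \<Rightarrow> 'b hyperring \<Rightarrow> ('a \<Rightarrow> 'b) \<Rightarrow> bool" where
  "hyperring_hom A B \<phi> \<longleftrightarrow>
     \<phi> \<in> carrier A \<rightarrow> carrier B \<and>
     (\<forall>a\<in>carrier A. \<forall>b\<in>carrier A. \<phi> ` hadd A a b \<subseteq> hadd B (\<phi> a) (\<phi> b)) \<and>
     (\<forall>a\<in>carrier A. \<forall>b\<in>carrier A. \<phi> (hmul A a b) = hmul B (\<phi> a) (\<phi> b)) \<and>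
     \<phi> (hzero A) = hzero B \<and> \<phi> (hone A) = hone B"

definition hyperring_homs :: "'a hyperring \<Rightarrow> 'b hyperring \<Rightarrow> ('a \<Rightarrow> 'b) set" where
  "hyperring_homs A B = {\<phi>. hyperring_hom A B \<phi> \<and> \<phi> \<in> extensional (carrier A)}"

definition hyperideal :: "'a hyperring \<Rightarrow> 'a set \<Rightarrow> bool" where
  "hyperideal A I \<longleftrightarrow> I \<subseteq> carrier A \<and> I \<noteq> {} \<and>
     (\<forall>a\<in>I. \<forall>b\<in>I. hadd A a b \<subseteq> I) \<and>
     (\<forall>a\<in>I. hneg A a \<in> I) \<and>
     (\<forall>r\<in>carrier A. \<forall>a\<in>I. hmul A r a \<in> I)"

definition prime_hyperideal :: "'a hyperring \<Rightarrow> 'a set \<Rightarrow> bool" where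
  "prime_hyperideal A P \<longleftrightarrow> hyperideal A P \<and> P \<noteq> carrier A \<and>
     (\<forall>a\<in>carrier A. \<forall>b\<in>carrier A. hmul A a b \<in> P \<longrightarrow> a \<in> P \<or> b \<in> P)"

definition maximal_hyperideal :: "'a hyperring \<Rightarrow> 'a set \<Rightarrow> bool" where
  "maximal_hyperideal A M \<longleftrightarrow> hyperideal A M \<and> M \<noteq> carrier A \<and>
     (\<forall>J. hyperideal A J \<and> M \<subseteq> J \<longrightarrow> J = M \<or> J = carrier A)"

definition Spec :: "'a hyperring \<Rightarrow> 'a set set" where
  "Spec A = {P. prime_hyperideal A P}"

definition zariski_open :: "'a hyperring \<Rightarrow> 'a set set \<Rightarrow> bool" where
  "zariski_open A U \<longleftrightarrow> (\<exists>S\<subseteq>carrier A. U = {P\<in>Spec A. \<not> S \<subseteq> P})"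

definition loc_rel :: "'a hyperring \<Rightarrow> 'a set \<Rightarrow> 'a \<times> 'a \<Rightarrow> 'a \<times> 'a \<Rightarrow> bool" where
  "loc_rel A T p q \<longleftrightarrow> (case p of (r1, t1) \<Rightarrow> case q of (r2, t2) \<Rightarrow>
     r1 \<in> carrier A \<and> r2 \<in> carrier A \<and> t1 \<in> T \<and> t2 \<in> T \<and>
     (\<exists>x\<in>T. hmul A x (hmul A r1 t2) = hmul A x (hmul A r2 t1)))"

definition loc_class :: "'a hyperring \<Rightarrow> 'a set \<Rightarrow> 'a \<Rightarrow> 'a \<Rightarrow> ('a \<times> 'a) set" where
  "loc_class A T r t = {p. loc_rel A T p (r, t)}"

definition loc_carrier :: "'a hyperring \<Rightarrow> 'a set \<Rightarrow> ('a \<times> 'a) set set" where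
  "loc_carrier A T = {loc_class A T r t | r t. r \<in> carrier A \<and> t \<in> T}"

definition loc_rep :: "('a \<times> 'a) set \<Rightarrow> 'a \<times> 'a" where
  "loc_rep c = (SOME p. p \<in> c)"

definition loc_mul :: "'a hyperring \<Rightarrow> 'a set \<Rightarrow> ('a \<times> 'a) set \<Rightarrow> ('a \<times> 'a) set \<Rightarrow> ('a \<times> 'a) set" where
  "loc_mul A T c d = (case loc_rep c of (r1, t1) \<Rightarrow> case loc_rep d of (r2, t2) \<Rightarrow>
     loc_class A T (hmul A r1 r2) (hmul A t1 t2))"

definition loc_add :: "'a hyperring \<Rightarrow> 'a set \<Rightarrow> ('a \<times> 'a) set \<Rightarrow> ('a \<times> 'a) set \<Rightarrow> ('a \<times> 'a) set set" where
  "loc_add A T c d = (case loc_rep c of (r1, t1) \<Rightarrow> case loc_rep d of (r2, t2) \<Rightarrow>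
     {loc_class A T y (hmul A t1 t2) | y. y \<in> hadd A (hmul A r1 t2) (hmul A t1 r2)})"

text \<open>The localization T^{-1}A; R_p is localization A (carrier A - p).\<close>
definition localization :: "'a hyperring \<Rightarrow> 'a set \<Rightarrow> ('a \<times> 'a) set hyperring" where
  "localization A T = \<lparr> carrier = loc_carrier A T, hadd = loc_add A T, hmul = loc_mul A T,
     hzero = loc_class A T (hzero A) (hone A), hone = loc_class A T (hone A) (hone A) \<rparr>"

type_synonym 'a sect = "'a set \<Rightarrow> ('a \<times> 'a) set"

definition sections :: "'a hyperring \<Rightarrow> 'a set set \<Rightarrow> 'a sect set" where
  "sections A U = {s. s \<in> extensional U \<and>
     (\<forall>P\<in>U. s P \<in> loc_carrier A (carrier A - P)) \<and>
     (\<forall>P\<in>U. \<exists>V. zariski_open A V \<and> P \<in> V \<and> V \<subseteq> U \<and>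
        (\<exists>a\<in>carrier A. \<exists>f\<in>carrier A. \<forall>Q\<in>V. f \<notin> Q \<and> s Q = loc_class A (carrier A - Q) a f))}"

definition OX :: "'a hyperring \<Rightarrow> 'a set set \<Rightarrow> 'a sect hyperring" where
  "OX A U = \<lparr> carrier = sections A U,
     hadd = (\<lambda>s t. {r \<in> sections A U. \<forall>P\<in>U. r P \<in> loc_add A (carrier A - P) (s P) (t P)}),
     hmul = (\<lambda>s t. (\<lambda>P\<in>U. loc_mul A (carrier A - P) (s P) (t P))),
     hzero = (\<lambda>P\<in>U. loc_class A (carrier A - P) (hzero A) (hone A)),
     hone = (\<lambda>P\<in>U. loc_class A (carrier A - P) (hone A) (hone A)) \<rparr>"

definition germ :: "'a hyperring \<Rightarrow> 'a set \<Rightarrow> 'a set set \<Rightarrow> 'a sect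
    \<Rightarrow> ('a set set \<times> 'a sect) set" where
  "germ A P U s = {(V, t). zariski_open A V \<and> P \<in> V \<and> t \<in> sections A V \<and>
     (\<exists>W. zariski_open A W \<and> P \<in> W \<and> W \<subseteq> U \<inter> V \<and> restrict s W = restrict t W)}"

definition stalk_carrier :: "'a hyperring \<Rightarrow> 'a set \<Rightarrow> ('a set set \<times> 'a sect) set set" where
  "stalk_carrier A P = {germ A P U s | U s. zariski_open A U \<and> P \<in> U \<and> s \<in> sections A U}"

definition stalk :: "'a hyperring \<Rightarrow> 'a set \<Rightarrow> ('a set set \<times> 'a sect) set hyperring" where
  "stalk A P = \<lparr> carrier = stalk_carrier A P,
     hadd = (\<lambda>g h. {germ A P W r | W r. zariski_open A W \<and> P \<in> W \<and>
        (\<exists>s t. s \<in> sections A W \<and> t \<in> sections A W \<and> germ A P W s = g \<and> germ A P W t = h \<and>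
               r \<in> hadd (OX A W) s t)}),
     hmul = (\<lambda>g h. case (SOME x. x \<in> g) of (U, s) \<Rightarrow> case (SOME y. y \<in> h) of (V, t) \<Rightarrow>
        germ A P (U \<inter> V) (hmul (OX A (U \<inter> V)) (restrict s (U \<inter> V)) (restrict t (U \<inter> V)))),
     hzero = germ A P (Spec A) (hzero (OX A (Spec A))),
     hone = germ A P (Spec A) (hone (OX A (Spec A))) \<rparr>"

definition preimg :: "('b \<Rightarrow> 'a) \<Rightarrow> 'b set \<Rightarrow> 'a set \<Rightarrow> 'b set" where
  "preimg f Y U = {q \<in> Y. f q \<in> U}"

type_synonym ('a, 'b) sheaf_map = "'a set set \<Rightarrow> 'a sect \<Rightarrow> 'b sect"

definition stalk_map :: "'b hyperring \<Rightarrow> ('b set \<Rightarrow> 'a set) \<Rightarrow> ('a, 'b) sheaf_map \<Rightarrow> 'b set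
    \<Rightarrow> ('a set set \<times> 'a sect) set \<Rightarrow> ('b set set \<times> 'b sect) set" where
  "stalk_map H f fs P g = (case (SOME x. x \<in> g) of (U, s) \<Rightarrow>
     germ H P (preimg f (Spec H) U) (fs U s))"

definition is_lhs_morphism :: "'b hyperring \<Rightarrow> 'a hyperring \<Rightarrow> ('b set \<Rightarrow> 'a set) \<Rightarrow> ('a, 'b) sheaf_map \<Rightarrow> bool" where
  "is_lhs_morphism H R f fs \<longleftrightarrow>
     f \<in> Spec H \<rightarrow> Spec R \<and>
     (\<forall>U. zariski_open R U \<longrightarrow> zariski_open H (preimg f (Spec H) U)) \<and>
     (\<forall>U. zariski_open R U \<longrightarrow> hyperring_hom (OX R U) (OX H (preimg f (Spec H) U)) (fs U)) \<and>
     (\<forall>U V. zariski_open R U \<and> zariski_open R V \<and> V \<subseteq> U \<longrightarrow>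
        (\<forall>s\<in>sections R U. fs V (restrict s V) = restrict (fs U s) (preimg f (Spec H) V))) \<and>
     (\<forall>P\<in>Spec H. \<forall>m n. maximal_hyperideal (stalk R (f P)) m \<and> maximal_hyperideal (stalk H P) n \<longrightarrow>
        {g \<in> carrier (stalk R (f P)). stalk_map H f fs P g \<in> n} = m)"

text \<open>Hom(Y,X), with the data taken extensional so that equality is equality of morphisms.\<close>
definition lhs_morphisms :: "'b hyperring \<Rightarrow> 'a hyperring \<Rightarrow> (('b set \<Rightarrow> 'a set) \<times> ('a, 'b) sheaf_map) set" where
  "lhs_morphisms H R = {(f, fs). is_lhs_morphism H R f fs \<and> f \<in> extensional (Spec H) \<and>
     (\<forall>U. if zariski_open R U then fs U \<in> extensional (sections R U) else fs U = undefined)}"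

definition spec_map :: "'a hyperring \<Rightarrow> 'b hyperring \<Rightarrow> ('a \<Rightarrow> 'b) \<Rightarrow> 'b set \<Rightarrow> 'a set" where
  "spec_map R H \<phi> = (\<lambda>Q\<in>Spec H. {x \<in> carrier R. \<phi> x \<in> Q})"

definition global_canon :: "'a hyperring \<Rightarrow> 'a \<Rightarrow> 'a sect" where
  "global_canon A r = (\<lambda>P\<in>Spec A. loc_class A (carrier A - P) r (hone A))"

text \<open>The homomorphism R \<rightarrow> H obtained on global sections (via O_X(X) = R, O_Y(Y) = H).\<close>
definition global_hom :: "'a hyperring \<Rightarrow> 'b hyperring \<Rightarrow> (('b set \<Rightarrow> 'a set) \<times> ('a, 'b) sheaf_map) \<Rightarrow> 'a \<Rightarrow> 'b" where
  "global_hom R H m = (\<lambda>r\<in>carrier R. THE h. h \<in> carrier H \<and>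
     global_canon H h = snd m (Spec R) (global_canon R r))"

end

theory Submission
  imports Defs
begin

(* In a hyperdomain every nonempty Zariski-open set contains the generic point {0}, whose
   localization is the field of fractions. Hence a section of the structure sheaf over an open
   set U is a single fraction a/f with f outside every prime of U; the global sections are R,
   because the admissible denominators of a global fraction form a hyperideal contained in no
   prime; and the stalk at p is R_p, whose unique maximal hyperideal consists of the fractions
   with numerator in p.

   A homomorphism phi therefore induces phi^-1 on spectra and a/f |-> phi(a)/phi(f) on sections.
   Conversely, a morphism (f, f#) yields psi = f# on global sections. Locality of the stalk map,
   tested on the germ of r/1, gives r \<in> f(p) iff psi(r) \<in> p; and f# commutes with restriction
   and multiplication, so applying it to the identity s * (g/1) = a/1 on the set where s = a/g
   forces f#(s) = psi(a)/psi(g). *)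

locale hdomain = fixes A :: "'a hyperring" assumes hyperdomain: "hyperdomain A"
begin

abbreviation "K \<equiv> carrier A"
abbreviation mul (infixl "\<cdot>" 70) where "mul \<equiv> hmul A"
abbreviation add (infixl "\<oplus>" 65) where "add \<equiv> hadd A"
abbreviation zero_A ("\<zero>") where "zero_A \<equiv> hzero A"
abbreviation one_A ("\<one>") where "one_A \<equiv> hone A"
abbreviation neg_A ("\<ominus>_" [81] 80) where "neg_A \<equiv> hneg A"

lemma hypergroup: "canonical_hypergroup A" and hyperring: "hyperring A"
  using hyperdomain unfolding hyperdomain_def hyperring_def by auto

lemma zero_closed [simp]: "\<zero> \<in> K"
  using hypergroup unfolding canonical_hypergroup_def by auto
lemma one_closed [simp]: "\<one> \<in> K"
  using hyperring unfolding hyperring_def by auto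
lemma mul_closed [simp]: "a \<in> K \<Longrightarrow> b \<in> K \<Longrightarrow> a \<cdot> b \<in> K"
  using hyperring unfolding hyperring_def by auto
lemma add_closed: "a \<in> K \<Longrightarrow> b \<in> K \<Longrightarrow> x \<in> a \<oplus> b \<Longrightarrow> x \<in> K"
  using hypergroup unfolding canonical_hypergroup_def by auto
lemma add_comm: "a \<in> K \<Longrightarrow> b \<in> K \<Longrightarrow> a \<oplus> b = b \<oplus> a"
  using hypergroup unfolding canonical_hypergroup_def by auto
lemma zero_add [simp]: "x \<in> K \<Longrightarrow> \<zero> \<oplus> x = {x}"
  using hypergroup unfolding canonical_hypergroup_def by auto
lemma add_zero [simp]: "x \<in> K \<Longrightarrow> x \<oplus> \<zero> = {x}"
  using add_comm[of x \<zero>] by simp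
lemma neg_ex1: "x \<in> K \<Longrightarrow> \<exists>!y. y \<in> K \<and> \<zero> \<in> x \<oplus> y"
  using hypergroup unfolding canonical_hypergroup_def by auto
lemma add_reversible: "x \<in> K \<Longrightarrow> y \<in> K \<Longrightarrow> z \<in> K \<Longrightarrow> x \<in> y \<oplus> z \<longleftrightarrow> z \<in> x \<oplus> \<ominus>y"
  using hypergroup unfolding canonical_hypergroup_def by auto

lemma add_assoc_mem:
  assumes "a \<in> K" "b \<in> K" "c \<in> K"
  shows "(\<exists>u\<in>a \<oplus> b. z \<in> u \<oplus> c) \<longleftrightarrow> (\<exists>v\<in>b \<oplus> c. z \<in> a \<oplus> v)"
proof -
  have "hadd_set A (a \<oplus> b) {c} = hadd_set A {a} (b \<oplus> c)"
    using assms hypergroup unfolding canonical_hypergroup_def by auto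
  thus ?thesis unfolding hadd_set_def by blast
qed

lemma mul_assoc: "a \<in> K \<Longrightarrow> b \<in> K \<Longrightarrow> c \<in> K \<Longrightarrow> a \<cdot> b \<cdot> c = a \<cdot> (b \<cdot> c)"
  using hyperring unfolding hyperring_def by auto
lemma mul_comm: "a \<in> K \<Longrightarrow> b \<in> K \<Longrightarrow> a \<cdot> b = b \<cdot> a"
  using hyperring unfolding hyperring_def by auto
lemma mul_left_commute: "a \<in> K \<Longrightarrow> b \<in> K \<Longrightarrow> c \<in> K \<Longrightarrow> a \<cdot> (b \<cdot> c) = b \<cdot> (a \<cdot> c)"
  using mul_assoc[of a b c] mul_assoc[of b a c] mul_comm[of a b] by simp
lemmas mul_ac = mul_assoc mul_comm mul_left_commute

lemma one_mul [simp]: "x \<in> K \<Longrightarrow> \<one> \<cdot> x = x"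
  using hyperring unfolding hyperring_def by auto
lemma mul_one [simp]: "x \<in> K \<Longrightarrow> x \<cdot> \<one> = x"
  using mul_comm[of x \<one>] by simp
lemma zero_mul [simp]: "x \<in> K \<Longrightarrow> \<zero> \<cdot> x = \<zero>"
  using hyperring unfolding hyperring_def by auto
lemma mul_zero [simp]: "x \<in> K \<Longrightarrow> x \<cdot> \<zero> = \<zero>"
  using mul_comm[of x \<zero>] by simp
lemma zero_neq_one [simp]: "\<zero> \<noteq> \<one>" "\<one> \<noteq> \<zero>"
  using hyperring unfolding hyperring_def by auto
lemma distrib: "x \<in> K \<Longrightarrow> y \<in> K \<Longrightarrow> z \<in> K \<Longrightarrow> mul x ` (y \<oplus> z) = (x \<cdot> y) \<oplus> (x \<cdot> z)"
  using hyperring unfolding hyperring_def by auto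

lemma no_zero_divisors: "a \<in> K \<Longrightarrow> b \<in> K \<Longrightarrow> a \<cdot> b = \<zero> \<Longrightarrow> a = \<zero> \<or> b = \<zero>"
  using hyperdomain unfolding hyperdomain_def by auto
lemma mul_nonzero: "a \<in> K \<Longrightarrow> b \<in> K \<Longrightarrow> a \<noteq> \<zero> \<Longrightarrow> b \<noteq> \<zero> \<Longrightarrow> a \<cdot> b \<noteq> \<zero>"
  using no_zero_divisors by blast

lemma neg_closed [simp]: "x \<in> K \<Longrightarrow> \<ominus>x \<in> K"
  and zero_in_add_neg: "x \<in> K \<Longrightarrow> \<zero> \<in> x \<oplus> \<ominus>x"
proof -
  assume x: "x \<in> K"
  have "\<ominus>x \<in> K \<and> \<zero> \<in> x \<oplus> \<ominus>x"
    unfolding hneg_def by (rule theI'[OF neg_ex1[OF x]])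
  thus "\<ominus>x \<in> K" "\<zero> \<in> x \<oplus> \<ominus>x" by auto
qed

lemma neg_unique: "x \<in> K \<Longrightarrow> y \<in> K \<Longrightarrow> \<zero> \<in> x \<oplus> y \<Longrightarrow> y = \<ominus>x"
  using neg_ex1 neg_closed zero_in_add_neg by blast

lemma zero_in_mul_add_neg: "x \<in> K \<Longrightarrow> y \<in> K \<Longrightarrow> \<zero> \<in> (x \<cdot> y) \<oplus> (x \<cdot> \<ominus>y)"
  using imageI[OF zero_in_add_neg[of y], of "mul x"] distrib[of x y "\<ominus>y"] by simp

text \<open>Cancellation holds although the additive structure is only a hypergroup: the difference
  \<open>r - s\<close> is replaced by an element of the hypersum \<open>r \<oplus> \<ominus>s\<close> that is killed by \<open>x\<close>.\<close>

lemma mul_left_cancel: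
  assumes "x \<in> K" "r \<in> K" "s \<in> K" "x \<noteq> \<zero>" "x \<cdot> r = x \<cdot> s"
  shows "r = s"
proof -
  have "\<zero> \<in> (x \<cdot> s) \<oplus> (x \<cdot> \<ominus>s)" using zero_in_mul_add_neg assms by simp
  also have "\<dots> = mul x ` (r \<oplus> \<ominus>s)" using distrib[of x r "\<ominus>s"] assms by simp
  finally obtain z where z: "z \<in> r \<oplus> \<ominus>s" "x \<cdot> z = \<zero>" by (metis imageE)
  have "z = \<zero>" using no_zero_divisors[of x z] add_closed[OF _ _ z(1)] z(2) assms by auto
  hence "r \<in> s \<oplus> \<zero>" using add_reversible[of r s \<zero>] z(1) assms by simp
  thus ?thesis using assms by simp
qed

lemma mul_right_cancel: "x \<in> K \<Longrightarrow> r \<in> K \<Longrightarrow> s \<in> K \<Longrightarrow> x \<noteq> \<zero> \<Longrightarrow> r \<cdot> x = s \<cdot> x \<Longrightarrow> r = s"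
  using mul_left_cancel[of x r s] mul_comm[of r x] mul_comm[of s x] by simp

lemma mul_neg: "x \<in> K \<Longrightarrow> y \<in> K \<Longrightarrow> x \<cdot> \<ominus>y = \<ominus>(x \<cdot> y)"
  using neg_unique zero_in_mul_add_neg by simp

lemma neg_add:
  assumes "x \<in> y \<oplus> z" "y \<in> K" "z \<in> K"
  shows "\<ominus>x \<in> \<ominus>y \<oplus> \<ominus>z"
proof -
  have x: "x \<in> K" using add_closed[OF assms(2,3,1)] .
  have "\<ominus>\<one> \<cdot> x \<in> mul (\<ominus>\<one>) ` (y \<oplus> z)" using assms by auto
  also have "\<dots> = (\<ominus>\<one> \<cdot> y) \<oplus> (\<ominus>\<one> \<cdot> z)"
    using distrib assms by simp
  finally show ?thesis using assms x mul_neg[of _ \<one>] mul_comm[of "\<ominus>\<one>"] by simp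
qed

end


context hdomain begin

lemma SpecD:
  assumes "P \<in> Spec A"
  shows "P \<subseteq> K" "P \<noteq> K" "\<And>a b. a \<in> P \<Longrightarrow> b \<in> P \<Longrightarrow> a \<oplus> b \<subseteq> P"
    "\<And>a. a \<in> P \<Longrightarrow> \<ominus>a \<in> P" "\<And>r a. r \<in> K \<Longrightarrow> a \<in> P \<Longrightarrow> r \<cdot> a \<in> P"
    "\<And>a b. a \<in> K \<Longrightarrow> b \<in> K \<Longrightarrow> a \<cdot> b \<in> P \<Longrightarrow> a \<in> P \<or> b \<in> P" "P \<noteq> {}"
  using assms unfolding Spec_def prime_hyperideal_def hyperideal_def by auto

lemma zero_in_prime [simp]: "P \<in> Spec A \<Longrightarrow> \<zero> \<in> P"
proof -
  assume P: "P \<in> Spec A"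
  then obtain a where "a \<in> P" using SpecD(7) by blast
  thus ?thesis using SpecD(1)[OF P] SpecD(5)[OF P, of \<zero> a] by auto
qed

lemma one_notin_prime [simp]: "P \<in> Spec A \<Longrightarrow> \<one> \<notin> P"
proof
  assume P: "P \<in> Spec A" and "\<one> \<in> P"
  hence "K \<subseteq> P" using SpecD(5)[OF P, of _ \<one>] by auto
  thus False using SpecD(1,2)[OF P] by blast
qed

lemma prime_mul_right: "P \<in> Spec A \<Longrightarrow> a \<in> P \<Longrightarrow> r \<in> K \<Longrightarrow> a \<cdot> r \<in> P"
  using SpecD(1,5)[of P] mul_comm[of a r] by auto

lemma prime_mul_notin: "P \<in> Spec A \<Longrightarrow> a \<in> K \<Longrightarrow> b \<in> K \<Longrightarrow> a \<notin> P \<Longrightarrow> b \<notin> P \<Longrightarrow> a \<cdot> b \<notin> P"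
  using SpecD(6) by blast

lemma zero_ideal_prime: "{\<zero>} \<in> Spec A"
proof -
  have "\<zero> = \<ominus>\<zero>" using neg_unique[of \<zero> \<zero>] by simp
  thus ?thesis using no_zero_divisors zero_neq_one(2) one_closed
    unfolding Spec_def prime_hyperideal_def hyperideal_def by (auto simp del: zero_neq_one)
qed

lemma zariski_open_Int:
  assumes "zariski_open A U" "zariski_open A V"
  shows "zariski_open A (U \<inter> V)"
proof -
  obtain S S' where S: "S \<subseteq> K" "U = {P\<in>Spec A. \<not> S \<subseteq> P}" and S': "S' \<subseteq> K" "V = {P\<in>Spec A. \<not> S' \<subseteq> P}"
    using assms unfolding zariski_open_def by blast
  let ?T = "{a \<cdot> b | a b. a \<in> S \<and> b \<in> S'}"
  have "U \<inter> V = {P\<in>Spec A. \<not> ?T \<subseteq> P}"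
  proof (intro set_eqI iffI)
    fix P assume "P \<in> U \<inter> V"
    then obtain a b where "a \<in> S" "b \<in> S'" "a \<notin> P" "b \<notin> P" "P \<in> Spec A"
      using S S' by auto
    thus "P \<in> {P\<in>Spec A. \<not> ?T \<subseteq> P}" using prime_mul_notin S S' by blast
  next
    fix P assume "P \<in> {P\<in>Spec A. \<not> ?T \<subseteq> P}"
    then obtain a b where "a \<in> S" "b \<in> S'" "a \<cdot> b \<notin> P" "P \<in> Spec A" by blast
    thus "P \<in> U \<inter> V" using S S' prime_mul_right SpecD(5) by blast
  qed
  moreover have "?T \<subseteq> K" using S S' mul_closed by blast
  ultimately show ?thesis unfolding zariski_open_def by blast
qed

lemma zariski_open_basic: "f \<in> K \<Longrightarrow> zariski_open A {P\<in>Spec A. f \<notin> P}"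
  unfolding zariski_open_def by (rule exI[of _ "{f}"]) auto

lemma zariski_open_Spec: "zariski_open A (Spec A)"
  unfolding zariski_open_def by (rule exI[of _ "{\<one>}"]) auto

lemma zariski_open_subset: "zariski_open A U \<Longrightarrow> U \<subseteq> Spec A"
  unfolding zariski_open_def by auto

lemma generic_point_in_open:
  assumes "zariski_open A U" "P \<in> U"
  shows "{\<zero>} \<in> U"
proof -
  obtain S where S: "S \<subseteq> K" "U = {P\<in>Spec A. \<not> S \<subseteq> P}"
    using assms(1) unfolding zariski_open_def by blast
  then obtain a where "a \<in> S" "a \<notin> P" using assms by auto
  hence "a \<noteq> \<zero>" using S assms zero_in_prime by auto
  thus ?thesis using S zero_ideal_prime \<open>a \<in> S\<close> by auto
qed

end

text \<open>In a hyperdomain the class of \<open>a/f\<close> in a localization is the set of pairs with the same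
  cross products; \<open>frac\<close> is this set, defined for arbitrary \<open>a\<close> and \<open>f\<close>.\<close>

definition frac :: "'a hyperring \<Rightarrow> 'a set \<Rightarrow> 'a \<Rightarrow> 'a \<Rightarrow> ('a \<times> 'a) set" where
  "frac A T a f = {(r,t). r \<in> carrier A \<and> t \<in> T \<and> hmul A r f = hmul A a t}"

context hdomain begin

lemma frac_mem: "(r,t) \<in> frac A T a f \<longleftrightarrow> r \<in> K \<and> t \<in> T \<and> r \<cdot> f = a \<cdot> t"
  unfolding frac_def by simp

lemma frac_self: "a \<in> K \<Longrightarrow> f \<in> T \<Longrightarrow> (a,f) \<in> frac A T a f"
  unfolding frac_def by simp

lemma loc_class_eq_frac:
  assumes "Q \<in> Spec A" "a \<in> K" "f \<in> K" "f \<notin> Q"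
  shows "loc_class A (K - Q) a f = frac A (K - Q) a f"
proof -
  have "(r,t) \<in> loc_class A (K - Q) a f \<longleftrightarrow> (r,t) \<in> frac A (K - Q) a f" for r t
  proof
    assume "(r,t) \<in> loc_class A (K - Q) a f"
    then obtain x where x: "x \<in> K - Q" "x \<cdot> (r \<cdot> f) = x \<cdot> (a \<cdot> t)" and rt: "r \<in> K" "t \<in> K - Q"
      unfolding loc_class_def loc_rel_def by auto
    have "x \<noteq> \<zero>" using x assms(1) by auto
    hence "r \<cdot> f = a \<cdot> t" using mul_left_cancel[OF _ _ _ _ x(2)] x(1) rt assms(2,3) by simp
    thus "(r,t) \<in> frac A (K - Q) a f" using rt frac_mem by simp
  next
    assume "(r,t) \<in> frac A (K - Q) a f"
    thus "(r,t) \<in> loc_class A (K - Q) a f" unfolding loc_class_def loc_rel_def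
      using assms frac_mem by (auto intro!: bexI[of _ \<one>])
  qed
  thus ?thesis by (intro set_eqI) (metis surj_pair)
qed

lemma frac_eqI:
  assumes "T \<subseteq> K" "a \<in> K" "b \<in> K" "f \<in> K" "g \<in> K" "f \<noteq> \<zero>" "g \<noteq> \<zero>" "a \<cdot> g = b \<cdot> f"
  shows "frac A T a f = frac A T b g"
proof -
  have "r \<cdot> f = a \<cdot> t \<longleftrightarrow> r \<cdot> g = b \<cdot> t" if "r \<in> K" "t \<in> K" for r t
  proof -
    have "(b \<cdot> t) \<cdot> f = (b \<cdot> f) \<cdot> t" "(a \<cdot> t) \<cdot> g = (a \<cdot> g) \<cdot> t"
      using that assms(2-5) by (simp_all add: mul_ac)
    hence 1: "r \<cdot> g \<cdot> f = (r \<cdot> f) \<cdot> g" "(b \<cdot> t) \<cdot> f = (a \<cdot> t) \<cdot> g" "r \<cdot> f \<cdot> g = (r \<cdot> g) \<cdot> f"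
      using that assms(2-5,8) by (simp_all add: mul_ac)
    show ?thesis
    proof
      assume "r \<cdot> f = a \<cdot> t"
      thus "r \<cdot> g = b \<cdot> t"
        using 1 mul_right_cancel[of f "r \<cdot> g" "b \<cdot> t"] that assms by simp
    next
      assume "r \<cdot> g = b \<cdot> t"
      thus "r \<cdot> f = a \<cdot> t"
        using 1 mul_right_cancel[of g "r \<cdot> f" "a \<cdot> t"] that assms by simp
    qed
  qed
  thus ?thesis unfolding frac_def using assms(1) by blast
qed

lemma frac_eqD:
  assumes "T \<subseteq> K - {\<zero>}" "a \<in> K" "b \<in> K" "f \<in> K" "g \<in> K"
    "frac A T a f = frac A T b g" "p \<in> frac A T a f"
  shows "a \<cdot> g = b \<cdot> f"
proof -
  obtain r t where p: "p = (r,t)" by fastforce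
  have h: "r \<in> K" "t \<in> T" "r \<cdot> f = a \<cdot> t" using assms(7) p frac_mem by auto
  have h': "r \<cdot> g = b \<cdot> t" using assms(6,7) p frac_mem[of r t T b g] by simp
  have t: "t \<in> K" "t \<noteq> \<zero>" using h(2) assms(1) by auto
  have "a \<cdot> g \<cdot> t = (a \<cdot> t) \<cdot> g" "b \<cdot> f \<cdot> t = (b \<cdot> t) \<cdot> f" "(r \<cdot> f) \<cdot> g = (r \<cdot> g) \<cdot> f"
    using h(1) t assms(2-5) by (simp_all add: mul_ac)
  hence "a \<cdot> g \<cdot> t = b \<cdot> f \<cdot> t" using h(3) h' by simp
  thus ?thesis using mul_right_cancel[of t "a \<cdot> g" "b \<cdot> f"] t assms by simp
qed

lemma frac_eq_fracD:
  "Q \<in> Spec A \<Longrightarrow> a \<in> K \<Longrightarrow> b \<in> K \<Longrightarrow> f \<in> K \<Longrightarrow> g \<in> K \<Longrightarrow>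
    frac A (K - Q) a f = frac A (K - Q) b g \<Longrightarrow> p \<in> frac A (K - Q) a f \<Longrightarrow> a \<cdot> g = b \<cdot> f"
  using frac_eqD[of "K - Q"] zero_in_prime by blast

lemma frac_of_member:
  assumes "Q \<in> Spec A" "a \<in> K" "f \<in> K" "f \<noteq> \<zero>" "p \<in> frac A (K - Q) a f"
  shows "frac A (K - Q) (fst p) (snd p) = frac A (K - Q) a f" "fst p \<in> K" "snd p \<in> K" "snd p \<notin> Q"
    "fst p \<cdot> f = a \<cdot> snd p"
proof -
  show h: "fst p \<in> K" "snd p \<in> K" "snd p \<notin> Q" "fst p \<cdot> f = a \<cdot> snd p"
    using assms(5) frac_mem[of "fst p" "snd p"] by auto
  have "snd p \<noteq> \<zero>" using h(3) assms(1) by auto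
  thus "frac A (K - Q) (fst p) (snd p) = frac A (K - Q) a f"
    using frac_eqI[of "K - Q" "fst p" a "snd p" f] h assms by auto
qed

lemma frac_good_representative:
  assumes "Q \<in> Spec A" "a \<in> K" "f \<in> K" "f \<noteq> \<zero>" "frac A (K - Q) a f \<noteq> {}"
  obtains a' f' where "a' \<in> K" "f' \<in> K" "f' \<notin> Q" "frac A (K - Q) a f = frac A (K - Q) a' f'" "a' \<cdot> f = a \<cdot> f'"
proof -
  obtain p where "p \<in> frac A (K - Q) a f" using assms(5) by auto
  thus ?thesis using that frac_of_member[OF assms(1-4)] by blast
qed

lemma frac_nonempty: "Q \<in> Spec A \<Longrightarrow> a \<in> K \<Longrightarrow> f \<in> K \<Longrightarrow> f \<notin> Q \<Longrightarrow> frac A (K - Q) a f \<noteq> {}"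
  using frac_self[of a f "K - Q"] by auto

lemma loc_carrier_iff:
  assumes "Q \<in> Spec A"
  shows "c \<in> loc_carrier A (K - Q) \<longleftrightarrow> (\<exists>a f. a \<in> K \<and> f \<in> K \<and> f \<notin> Q \<and> c = frac A (K - Q) a f)"
  unfolding loc_carrier_def using loc_class_eq_frac[OF assms] by blast

lemma loc_carrier_fracE:
  assumes "Q \<in> Spec A" "c \<in> loc_carrier A (K - Q)"
  obtains a f where "a \<in> K" "f \<in> K" "f \<notin> Q" "c = frac A (K - Q) a f"
  using assms loc_carrier_iff by blast

lemma frac_in_loc_carrier:
  "Q \<in> Spec A \<Longrightarrow> a \<in> K \<Longrightarrow> f \<in> K \<Longrightarrow> f \<notin> Q \<Longrightarrow> frac A (K - Q) a f \<in> loc_carrier A (K - Q)"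
  using loc_carrier_iff by blast

text \<open>\<open>loc_mul\<close> and \<open>loc_add\<close> compute with the chosen representatives \<open>loc_rep\<close>; the following
  lemmas say that any good representatives may be used instead.\<close>

lemma loc_rep_frac:
  assumes "Q \<in> Spec A" "a \<in> K" "f \<in> K" "f \<notin> Q"
  obtains r t where "loc_rep (frac A (K - Q) a f) = (r,t)" "r \<in> K" "t \<in> K" "t \<notin> Q" "r \<cdot> f = a \<cdot> t"
proof -
  have "loc_rep (frac A (K - Q) a f) \<in> frac A (K - Q) a f"
    unfolding loc_rep_def using frac_self[of a f] assms by (intro someI) auto
  thus ?thesis using that frac_mem[of "fst _" "snd _"] by (cases "loc_rep (frac A (K - Q) a f)") auto
qed

lemma loc_mul_frac:
  assumes Q: "Q \<in> Spec A" and ab: "a \<in> K" "b \<in> K" and fg: "f \<in> K" "g \<in> K" "f \<notin> Q" "g \<notin> Q"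
  shows "loc_mul A (K - Q) (frac A (K - Q) a f) (frac A (K - Q) b g) = frac A (K - Q) (a \<cdot> b) (f \<cdot> g)"
proof -
  obtain r1 t1 where 1: "loc_rep (frac A (K - Q) a f) = (r1,t1)" "r1 \<in> K" "t1 \<in> K" "t1 \<notin> Q" "r1 \<cdot> f = a \<cdot> t1"
    using loc_rep_frac[OF Q ab(1) fg(1,3)] .
  obtain r2 t2 where 2: "loc_rep (frac A (K - Q) b g) = (r2,t2)" "r2 \<in> K" "t2 \<in> K" "t2 \<notin> Q" "r2 \<cdot> g = b \<cdot> t2"
    using loc_rep_frac[OF Q ab(2) fg(2,4)] .
  have t12: "t1 \<cdot> t2 \<notin> Q" "f \<cdot> g \<notin> Q" using prime_mul_notin Q 1 2 fg by auto
  have "r1 \<cdot> r2 \<cdot> (f \<cdot> g) = (r1 \<cdot> f) \<cdot> (r2 \<cdot> g)" "a \<cdot> b \<cdot> (t1 \<cdot> t2) = (a \<cdot> t1) \<cdot> (b \<cdot> t2)"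
    using 1(2,3) 2(2,3) ab fg(1,2) by (simp_all add: mul_ac)
  moreover have "t1 \<cdot> t2 \<noteq> \<zero>" "f \<cdot> g \<noteq> \<zero>"
    using t12 Q zero_in_prime by metis+
  ultimately have "frac A (K - Q) (r1 \<cdot> r2) (t1 \<cdot> t2) = frac A (K - Q) (a \<cdot> b) (f \<cdot> g)"
    using frac_eqI[of "K - Q" "r1 \<cdot> r2" "a \<cdot> b" "t1 \<cdot> t2" "f \<cdot> g"] 1 2 ab fg by auto
  thus ?thesis unfolding loc_mul_def 1(1) 2(1) using loc_class_eq_frac[OF Q] 1 2 t12 by simp
qed

lemma frac_family_subset:
  assumes T: "T \<subseteq> K" and uv: "u \<in> K" "v \<in> K" "u \<noteq> \<zero>" "v \<noteq> \<zero>"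
    and S: "S \<subseteq> K" "S' \<subseteq> K" and img: "mul u ` S \<subseteq> mul v ` S'"
  shows "{frac A T y v | y. y \<in> S} \<subseteq> {frac A T y' u | y'. y' \<in> S'}"
proof safe
  fix y assume y: "y \<in> S"
  then obtain y' where y': "y' \<in> S'" "u \<cdot> y = v \<cdot> y'" using img by blast
  have "y \<in> K" "y' \<in> K" using y y' S by auto
  hence "frac A T y v = frac A T y' u"
    using frac_eqI[OF T _ _ uv(2,1,4,3), of y y'] y'(2) mul_comm[of y u] mul_comm[of y' v] uv by simp
  thus "\<exists>y'. frac A T y v = frac A T y' u \<and> y' \<in> S'" using y' by blast
qed

lemma loc_add_frac:
  assumes Q: "Q \<in> Spec A" and ab: "a \<in> K" "b \<in> K" and fg: "f \<in> K" "g \<in> K" "f \<notin> Q" "g \<notin> Q"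
  shows "loc_add A (K - Q) (frac A (K - Q) a f) (frac A (K - Q) b g) =
     {frac A (K - Q) y (f \<cdot> g) | y. y \<in> (a \<cdot> g) \<oplus> (f \<cdot> b)}"
proof -
  obtain r1 t1 where 1: "loc_rep (frac A (K - Q) a f) = (r1,t1)" "r1 \<in> K" "t1 \<in> K" "t1 \<notin> Q" "r1 \<cdot> f = a \<cdot> t1"
    using loc_rep_frac[OF Q ab(1) fg(1,3)] .
  obtain r2 t2 where 2: "loc_rep (frac A (K - Q) b g) = (r2,t2)" "r2 \<in> K" "t2 \<in> K" "t2 \<notin> Q" "r2 \<cdot> g = b \<cdot> t2"
    using loc_rep_frac[OF Q ab(2) fg(2,4)] .
  define u v where "u = f \<cdot> g" and "v = t1 \<cdot> t2"
  have uv': "u \<in> K" "v \<in> K" "u \<notin> Q" "v \<notin> Q"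
    using prime_mul_notin[OF Q] 1 2 fg unfolding u_def v_def by auto
  hence uv: "u \<in> K" "v \<in> K" "u \<notin> Q" "v \<notin> Q" "u \<noteq> \<zero>" "v \<noteq> \<zero>"
    using zero_in_prime[OF Q] by metis+
  have "u \<cdot> (r1 \<cdot> t2) = (r1 \<cdot> f) \<cdot> (g \<cdot> t2)" "v \<cdot> (a \<cdot> g) = (a \<cdot> t1) \<cdot> (g \<cdot> t2)"
    "u \<cdot> (t1 \<cdot> r2) = (r2 \<cdot> g) \<cdot> (f \<cdot> t1)" "v \<cdot> (f \<cdot> b) = (b \<cdot> t2) \<cdot> (f \<cdot> t1)"
    unfolding u_def v_def using 1(2,3) 2(2,3) ab fg(1,2) by (simp_all add: mul_ac)
  hence "u \<cdot> (r1 \<cdot> t2) = v \<cdot> (a \<cdot> g)" "u \<cdot> (t1 \<cdot> r2) = v \<cdot> (f \<cdot> b)"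
    using 1(5) 2(5) by simp_all
  hence img: "mul u ` ((r1 \<cdot> t2) \<oplus> (t1 \<cdot> r2)) = mul v ` ((a \<cdot> g) \<oplus> (f \<cdot> b))"
    using distrib[of u "r1 \<cdot> t2" "t1 \<cdot> r2"] distrib[of v "a \<cdot> g" "f \<cdot> b"] 1(2,3) 2(2,3) ab fg(1,2) uv(1,2)
    by simp
  have sums: "(r1 \<cdot> t2) \<oplus> (t1 \<cdot> r2) \<subseteq> K" "(a \<cdot> g) \<oplus> (f \<cdot> b) \<subseteq> K"
    using add_closed 1 2 ab fg by (meson mul_closed subsetI)+
  have "loc_add A (K - Q) (frac A (K - Q) a f) (frac A (K - Q) b g) =
     {frac A (K - Q) y v | y. y \<in> (r1 \<cdot> t2) \<oplus> (t1 \<cdot> r2)}"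
  proof -
    have "loc_class A (K - Q) y v = frac A (K - Q) y v" if "y \<in> (r1 \<cdot> t2) \<oplus> (t1 \<cdot> r2)" for y
      using loc_class_eq_frac[OF Q _ uv(2,4)] sums that by blast
    thus ?thesis unfolding loc_add_def 1(1) 2(1) v_def by auto
  qed
  also have "\<dots> = {frac A (K - Q) y u | y. y \<in> (a \<cdot> g) \<oplus> (f \<cdot> b)}"
  proof (rule equalityI)
    show "{frac A (K - Q) y v | y. y \<in> (r1 \<cdot> t2) \<oplus> (t1 \<cdot> r2)} \<subseteq> {frac A (K - Q) y u | y. y \<in> (a \<cdot> g) \<oplus> (f \<cdot> b)}"
      by (rule frac_family_subset) (use img uv sums in auto)
    show "{frac A (K - Q) y u | y. y \<in> (a \<cdot> g) \<oplus> (f \<cdot> b)} \<subseteq> {frac A (K - Q) y v | y. y \<in> (r1 \<cdot> t2) \<oplus> (t1 \<cdot> r2)}"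
      by (rule frac_family_subset) (use img uv sums in auto)
  qed
  finally show ?thesis unfolding u_def .
qed

end

section \<open>Sections of the structure sheaf are fractions\<close>

definition has_fraction :: "'a hyperring \<Rightarrow> 'a set set \<Rightarrow> 'a sect \<Rightarrow> 'a \<Rightarrow> 'a \<Rightarrow> bool" where
  "has_fraction A U s a f \<longleftrightarrow> a \<in> carrier A \<and> f \<in> carrier A \<and> f \<noteq> hzero A \<and>
     (\<forall>Q\<in>U. s Q = frac A (carrier A - Q) a f \<and> frac A (carrier A - Q) a f \<noteq> {})"

context hdomain begin

lemma has_fractionD:
  assumes "has_fraction A U s a f"
  shows "a \<in> K" "f \<in> K" "f \<noteq> \<zero>" "\<And>Q. Q \<in> U \<Longrightarrow> s Q = frac A (K - Q) a f"
    "\<And>Q. Q \<in> U \<Longrightarrow> frac A (K - Q) a f \<noteq> {}"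
  using assms unfolding has_fraction_def by auto

lemma section_extensional: "s \<in> sections A U \<Longrightarrow> s \<in> extensional U"
  unfolding sections_def by simp

lemma section_domain_Spec: "s \<in> sections A U \<Longrightarrow> P \<in> U \<Longrightarrow> P \<in> Spec A"
  unfolding sections_def using zariski_open_subset by blast

lemma section_value: "s \<in> sections A U \<Longrightarrow> P \<in> U \<Longrightarrow> s P \<in> loc_carrier A (K - P)"
  unfolding sections_def by simp

lemma section_locally_frac:
  assumes "s \<in> sections A U" "P \<in> U"
  obtains V a f where "zariski_open A V" "P \<in> V" "V \<subseteq> U" "a \<in> K" "f \<in> K" "f \<noteq> \<zero>"
    "\<forall>Q\<in>V. f \<notin> Q \<and> s Q = frac A (K - Q) a f"
proof -
  obtain V a f where "zariski_open A V \<and> P \<in> V \<and> V \<subseteq> U \<and> a \<in> K \<and> f \<in> K \<and>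
      (\<forall>Q\<in>V. f \<notin> Q \<and> s Q = loc_class A (K - Q) a f)"
    using assms unfolding sections_def by blast
  hence V: "zariski_open A V" "P \<in> V" "V \<subseteq> U" "a \<in> K" "f \<in> K"
    "\<And>Q. Q \<in> V \<Longrightarrow> f \<notin> Q \<and> s Q = loc_class A (K - Q) a f"
    by auto
  have "f \<noteq> \<zero>" using V(6)[OF generic_point_in_open[OF V(1,2)]] by blast
  moreover have "f \<notin> Q \<and> s Q = frac A (K - Q) a f" if "Q \<in> V" for Q
  proof -
    have "Q \<in> Spec A" using zariski_open_subset[OF V(1)] that by blast
    thus ?thesis using V(6)[OF that] loc_class_eq_frac[of Q a f] V(4,5) by simp
  qed
  ultimately show ?thesis using that[OF V(1-5)] by blast
qed

text \<open>Any two local fractions of a section agree at the generic point \<open>{\<zero>}\<close>, whose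
  localization is the field of fractions; hence one fraction serves on all of \<open>U\<close>.\<close>

lemma section_has_fraction:
  assumes s: "s \<in> sections A U" and U: "U \<noteq> {}"
  shows "\<exists>a f. has_fraction A U s a f"
proof -
  obtain P0 where P0: "P0 \<in> U" using U by blast
  obtain V0 a0 f0 where V0: "zariski_open A V0" "P0 \<in> V0" "V0 \<subseteq> U" "a0 \<in> K" "f0 \<in> K" "f0 \<noteq> \<zero>"
    "\<forall>Q\<in>V0. f0 \<notin> Q \<and> s Q = frac A (K - Q) a0 f0"
    by (rule section_locally_frac[OF s P0])
  have "s P = frac A (K - P) a0 f0 \<and> frac A (K - P) a0 f0 \<noteq> {}" if P: "P \<in> U" for P
  proof -
    obtain V a f where V: "zariski_open A V" "P \<in> V" "V \<subseteq> U" "a \<in> K" "f \<in> K" "f \<noteq> \<zero>"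
      "\<forall>Q\<in>V. f \<notin> Q \<and> s Q = frac A (K - Q) a f"
      by (rule section_locally_frac[OF s P])
    have g: "{\<zero>} \<in> V" "{\<zero>} \<in> V0" using generic_point_in_open V(1,2) V0(1,2) by blast+
    have "frac A (K - {\<zero>}) a f = frac A (K - {\<zero>}) a0 f0" using V(7) V0(7) g by force
    moreover have "(a,f) \<in> frac A (K - {\<zero>}) a f" using frac_self V(4-6) by simp
    ultimately have "a \<cdot> f0 = a0 \<cdot> f"
      using frac_eq_fracD[OF zero_ideal_prime V(4) V0(4) V(5) V0(5)] by blast
    hence "frac A (K - P) a f = frac A (K - P) a0 f0" by (intro frac_eqI) (use V(4-6) V0(4-6) in auto)
    moreover have "P \<in> Spec A" using V(1,2) zariski_open_subset by blast
    ultimately show ?thesis using V(2,7) frac_nonempty[OF _ V(4,5)] by auto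
  qed
  thus ?thesis unfolding has_fraction_def using V0(4-6) by blast
qed

lemma fraction_section:
  assumes U: "zariski_open A U" and s: "s \<in> extensional U" and v: "has_fraction A U s a f"
  shows "s \<in> sections A U"
  unfolding sections_def
proof (intro CollectI conjI s ballI)
  fix P assume P: "P \<in> U"
  have PS: "P \<in> Spec A" using P zariski_open_subset[OF U] by blast
  obtain a' f' where r: "a' \<in> K" "f' \<in> K" "f' \<notin> P" "frac A (K - P) a f = frac A (K - P) a' f'" "a' \<cdot> f = a \<cdot> f'"
    using frac_good_representative[OF PS has_fractionD(1-3)[OF v] has_fractionD(5)[OF v P]] by blast
  show "s P \<in> loc_carrier A (K - P)" using loc_carrier_iff[OF PS] has_fractionD(4)[OF v P] r by blast
  let ?V = "U \<inter> {Q\<in>Spec A. f' \<notin> Q}"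
  have "zariski_open A ?V" using zariski_open_Int[OF U zariski_open_basic[OF r(2)]] .
  moreover have "P \<in> ?V" using P PS r by blast
  moreover have "\<forall>Q\<in>?V. f' \<notin> Q \<and> s Q = loc_class A (K - Q) a' f'"
  proof
    fix Q assume Q: "Q \<in> ?V"
    hence QS: "Q \<in> Spec A" "f' \<notin> Q" by auto
    have f'z: "f' \<noteq> \<zero>" using QS by auto
    have "s Q = frac A (K - Q) a f" using has_fractionD(4)[OF v] Q by blast
    also have "\<dots> = frac A (K - Q) a' f'"
      using frac_eqI[of "K - Q" a a' f f', OF _ has_fractionD(1)[OF v] r(1) has_fractionD(2)[OF v] r(2) has_fractionD(3)[OF v] f'z]
        r(5) mul_comm[of a' f] mul_comm[of a f'] has_fractionD(1,2)[OF v] r(1,2) by simp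
    also have "\<dots> = loc_class A (K - Q) a' f'" using loc_class_eq_frac[OF QS(1) r(1,2) QS(2)] by simp
    finally show "f' \<notin> Q \<and> s Q = loc_class A (K - Q) a' f'" using QS by simp
  qed
  ultimately show "\<exists>V. zariski_open A V \<and> P \<in> V \<and> V \<subseteq> U \<and>
        (\<exists>a\<in>K. \<exists>f\<in>K. \<forall>Q\<in>V. f \<notin> Q \<and> s Q = loc_class A (K - Q) a f)"
    using r(1,2) by blast
qed

lemma has_fraction_empty: "a \<in> K \<Longrightarrow> f \<in> K \<Longrightarrow> f \<noteq> \<zero> \<Longrightarrow> has_fraction A {} s a f"
  unfolding has_fraction_def by simp

lemma sections_iff_fraction:
  assumes U: "zariski_open A U"
  shows "s \<in> sections A U \<longleftrightarrow> s \<in> extensional U \<and> (\<exists>a f. has_fraction A U s a f)"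
proof
  assume s: "s \<in> sections A U"
  show "s \<in> extensional U \<and> (\<exists>a f. has_fraction A U s a f)"
  proof (cases "U = {}")
    case True thus ?thesis using section_extensional[OF s] has_fraction_empty[of \<zero> \<one> s] by (simp, blast)
  next
    case False thus ?thesis using s section_extensional section_has_fraction by blast
  qed
next
  assume "s \<in> extensional U \<and> (\<exists>a f. has_fraction A U s a f)"
  thus "s \<in> sections A U" using fraction_section[OF U] by blast
qed

lemma has_fraction_unique:
  assumes "has_fraction A U s a f" "has_fraction A U s b g" "P \<in> U" "P \<in> Spec A"
  shows "a \<cdot> g = b \<cdot> f"
proof -
  have "frac A (K - P) a f = frac A (K - P) b g"
    using has_fractionD(4)[OF assms(1,3)] has_fractionD(4)[OF assms(2,3)] by simp
  moreover obtain p where "p \<in> frac A (K - P) a f" using has_fractionD(5)[OF assms(1,3)] by blast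
  ultimately show ?thesis
    using frac_eq_fracD[OF assms(4)] has_fractionD(1,2)[OF assms(1)] has_fractionD(1,2)[OF assms(2)] by blast
qed

lemma has_fraction_cong:
  assumes v: "has_fraction A U s a f"
    and b: "b \<in> K" "g \<in> K" "g \<noteq> \<zero>" "a \<cdot> g = b \<cdot> f"
  shows "has_fraction A U s b g"
proof -
  have "frac A T a f = frac A T b g" if "T \<subseteq> K" for T
    using frac_eqI[OF that has_fractionD(1)[OF v] b(1) has_fractionD(2)[OF v] b(2) has_fractionD(3)[OF v] b(3,4)] .
  thus ?thesis using v b unfolding has_fraction_def by (metis Diff_subset)
qed

lemma has_fraction_mono:
  "has_fraction A U s a f \<Longrightarrow> V \<subseteq> U \<Longrightarrow> (\<And>Q. Q \<in> V \<Longrightarrow> t Q = s Q) \<Longrightarrow> has_fraction A V t a f"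
  unfolding has_fraction_def by (metis subsetD)

lemma has_fraction_eq:
  assumes "s \<in> extensional U" "t \<in> extensional U" "has_fraction A U s a f" "has_fraction A U t b g"
    "a \<cdot> g = b \<cdot> f"
  shows "s = t"
proof (rule extensionalityI[OF assms(1,2)])
  fix Q assume Q: "Q \<in> U"
  have "s Q = frac A (K - Q) a f" using has_fractionD(4)[OF assms(3) Q] .
  also have "\<dots> = frac A (K - Q) b g"
    using frac_eqI[of "K - Q" a b f g] has_fractionD(1-3)[OF assms(3)] has_fractionD(1-3)[OF assms(4)] assms(5) by blast
  also have "\<dots> = t Q" using has_fractionD(4)[OF assms(4) Q] by simp
  finally show "s Q = t Q" .
qed

lemma restrict_section:
  assumes "zariski_open A V" "zariski_open A U" "V \<subseteq> U" "s \<in> sections A U"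
  shows "restrict s V \<in> sections A V"
proof -
  obtain a f where "has_fraction A U s a f" using sections_iff_fraction[OF assms(2)] assms(4) by blast
  hence "has_fraction A V (restrict s V) a f" using has_fraction_mono assms(3) by (metis restrict_apply')
  thus ?thesis using sections_iff_fraction[OF assms(1)] by auto
qed

lemma loc_mul_frac_nonempty:
  assumes Q: "Q \<in> Spec A"
    and K: "a \<in> K" "b \<in> K" "f \<in> K" "g \<in> K" "f \<noteq> \<zero>" "g \<noteq> \<zero>"
    and ne: "frac A (K - Q) a f \<noteq> {}" "frac A (K - Q) b g \<noteq> {}"
  shows "loc_mul A (K - Q) (frac A (K - Q) a f) (frac A (K - Q) b g) = frac A (K - Q) (a \<cdot> b) (f \<cdot> g)"
    "frac A (K - Q) (a \<cdot> b) (f \<cdot> g) \<noteq> {}"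
proof -
  obtain a' f' where 1: "a' \<in> K" "f' \<in> K" "f' \<notin> Q" "frac A (K - Q) a f = frac A (K - Q) a' f'" "a' \<cdot> f = a \<cdot> f'"
    using frac_good_representative[OF Q K(1,3,5) ne(1)] by blast
  obtain b' g' where 2: "b' \<in> K" "g' \<in> K" "g' \<notin> Q" "frac A (K - Q) b g = frac A (K - Q) b' g'" "b' \<cdot> g = b \<cdot> g'"
    using frac_good_representative[OF Q K(2,4,6) ne(2)] by blast
  have fg: "f \<cdot> g \<noteq> \<zero>" using mul_nonzero K by simp
  have fg': "f' \<cdot> g' \<notin> Q" using prime_mul_notin[OF Q 1(2) 2(2) 1(3) 2(3)] .
  hence fg'z: "f' \<cdot> g' \<noteq> \<zero>" using zero_in_prime[OF Q] by metis
  have "frac A (K - Q) (a' \<cdot> b') (f' \<cdot> g') = frac A (K - Q) (a \<cdot> b) (f \<cdot> g)"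
  proof (rule frac_eqI)
    have "a' \<cdot> b' \<cdot> (f \<cdot> g) = (a' \<cdot> f) \<cdot> (b' \<cdot> g)"
      using 1(1) 2(1) K by (simp add: mul_ac)
    also have "\<dots> = (a \<cdot> f') \<cdot> (b \<cdot> g')" using 1(5) 2(5) by simp
    also have "\<dots> = a \<cdot> b \<cdot> (f' \<cdot> g')" using 1(2) 2(2) K by (simp add: mul_ac)
    finally show "a' \<cdot> b' \<cdot> (f \<cdot> g) = a \<cdot> b \<cdot> (f' \<cdot> g')" .
  qed (use 1 2 K fg fg'z in simp_all)
  thus "loc_mul A (K - Q) (frac A (K - Q) a f) (frac A (K - Q) b g) = frac A (K - Q) (a \<cdot> b) (f \<cdot> g)"
    using loc_mul_frac[OF Q 1(1) 2(1) 1(2) 2(2) 1(3) 2(3)] 1(4) 2(4) by simp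
  have "(a' \<cdot> b', f' \<cdot> g') \<in> frac A (K - Q) (a' \<cdot> b') (f' \<cdot> g')"
    using frac_self 1 2 fg' by simp
  thus "frac A (K - Q) (a \<cdot> b) (f \<cdot> g) \<noteq> {}"
    using \<open>frac A (K - Q) (a' \<cdot> b') (f' \<cdot> g') = _\<close> by blast
qed

lemma OX_mul_has_fraction:
  assumes U: "U \<subseteq> Spec A"
    and s: "has_fraction A U s a f"
    and t: "has_fraction A U t b g"
  shows "has_fraction A U (hmul (OX A U) s t) (a \<cdot> b) (f \<cdot> g)"
  unfolding has_fraction_def
proof (intro conjI ballI)
  show "a \<cdot> b \<in> K" "f \<cdot> g \<in> K" "f \<cdot> g \<noteq> \<zero>"
    using has_fractionD(1-3)[OF s] has_fractionD(1-3)[OF t] mul_nonzero by auto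
  fix Q assume Q: "Q \<in> U"
  have QS: "Q \<in> Spec A" using U Q by blast
  note m = loc_mul_frac_nonempty[OF QS has_fractionD(1)[OF s] has_fractionD(1)[OF t] has_fractionD(2)[OF s] has_fractionD(2)[OF t]
        has_fractionD(3)[OF s] has_fractionD(3)[OF t] has_fractionD(5)[OF s Q] has_fractionD(5)[OF t Q]]
  show "hmul (OX A U) s t Q = frac A (K - Q) (a \<cdot> b) (f \<cdot> g)"
    unfolding OX_def using Q has_fractionD(4)[OF s Q] has_fractionD(4)[OF t Q] m(1) by simp
  show "frac A (K - Q) (a \<cdot> b) (f \<cdot> g) \<noteq> {}" using m(2) .
qed

lemma const_has_fraction:
  assumes U: "U \<subseteq> Spec A" and a: "a \<in> K"
  shows "has_fraction A U (\<lambda>P\<in>U. loc_class A (K - P) a \<one>) a \<one>"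
  unfolding has_fraction_def
proof (intro conjI ballI a one_closed zero_neq_one(2))
  fix Q assume Q: "Q \<in> U"
  hence QS: "Q \<in> Spec A" using U by blast
  show "(\<lambda>P\<in>U. loc_class A (K - P) a \<one>) Q = frac A (K - Q) a \<one>"
    using Q loc_class_eq_frac[OF QS a one_closed one_notin_prime[OF QS]] by simp
  show "frac A (K - Q) a \<one> \<noteq> {}" using frac_nonempty[OF QS a one_closed one_notin_prime[OF QS]] .
qed

lemma OX_zero_has_fraction: "U \<subseteq> Spec A \<Longrightarrow> has_fraction A U (hzero (OX A U)) \<zero> \<one>"
  unfolding OX_def using const_has_fraction[of U \<zero>] by simp

lemma OX_zero_section:
  assumes "zariski_open A U"
  shows "hzero (OX A U) \<in> sections A U"
proof -
  have "hzero (OX A U) \<in> extensional U" unfolding OX_def by simp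
  thus ?thesis
    using sections_iff_fraction[OF assms] OX_zero_has_fraction[OF zariski_open_subset[OF assms]] by blast
qed

lemma OX_mul_section:
  assumes U: "zariski_open A U" and "s \<in> sections A U" "t \<in> sections A U"
  shows "hmul (OX A U) s t \<in> sections A U"
proof -
  obtain a f b g where "has_fraction A U s a f" "has_fraction A U t b g"
    using assms sections_iff_fraction[OF U] by blast
  hence "has_fraction A U (hmul (OX A U) s t) (a \<cdot> b) (f \<cdot> g)"
    using OX_mul_has_fraction[OF zariski_open_subset[OF U]] by blast
  moreover have "hmul (OX A U) s t \<in> extensional U" unfolding OX_def by simp
  ultimately show ?thesis using sections_iff_fraction[OF U] by blast
qed

end

definition sect_rep :: "'a sect \<Rightarrow> 'a set \<Rightarrow> 'a \<times> 'a" where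
  "sect_rep s P = (SOME p. p \<in> s P)"

context hdomain begin

lemma sect_rep_frac:
  assumes s: "s \<in> sections A U" and P: "P \<in> U"
  shows "fst (sect_rep s P) \<in> K" "snd (sect_rep s P) \<in> K" "snd (sect_rep s P) \<notin> P"
    "s P = frac A (K - P) (fst (sect_rep s P)) (snd (sect_rep s P))" "sect_rep s P \<in> s P"
proof -
  have PS: "P \<in> Spec A" using section_domain_Spec[OF s P] .
  obtain a f where 1: "a \<in> K" "f \<in> K" "f \<notin> P" "s P = frac A (K - P) a f"
    using loc_carrier_fracE[OF PS section_value[OF s P]] by blast
  have "(a,f) \<in> s P" using frac_self[of a f "K - P"] 1 by simp
  hence p: "sect_rep s P \<in> s P" unfolding sect_rep_def by (rule someI)
  have fz: "f \<noteq> \<zero>" using 1(3) PS by auto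
  note c = frac_of_member[OF PS 1(1,2) fz p[unfolded 1(4)]]
  show "fst (sect_rep s P) \<in> K" using c(2) .
  show "snd (sect_rep s P) \<in> K" using c(3) .
  show "snd (sect_rep s P) \<notin> P" using c(4) .
  show "sect_rep s P \<in> s P" using p .
  show "s P = frac A (K - P) (fst (sect_rep s P)) (snd (sect_rep s P))" using c(1) 1(4) by simp
qed

lemma sect_rep_cross:
  assumes s: "s \<in> sections A U" and P: "P \<in> U" "P' \<in> U"
  shows "fst (sect_rep s P) \<cdot> snd (sect_rep s P') = fst (sect_rep s P') \<cdot> snd (sect_rep s P)"
proof -
  obtain a f where v: "has_fraction A U s a f" using section_has_fraction[OF s] P by blast
  note af = has_fractionD(1-3)[OF v]
  have PS: "P \<in> Spec A" "P' \<in> Spec A" using section_domain_Spec[OF s] P by auto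
  have 1: "fst (sect_rep s P) \<cdot> f = a \<cdot> snd (sect_rep s P)"
    using frac_of_member(5)[OF PS(1) af sect_rep_frac(5)[OF s P(1), unfolded has_fractionD(4)[OF v P(1)]]] .
  have 2: "fst (sect_rep s P') \<cdot> f = a \<cdot> snd (sect_rep s P')"
    using frac_of_member(5)[OF PS(2) af sect_rep_frac(5)[OF s P(2), unfolded has_fractionD(4)[OF v P(2)]]] .
  note k = sect_rep_frac(1,2)[OF s P(1)] sect_rep_frac(1,2)[OF s P(2)]
  have "fst (sect_rep s P) \<cdot> snd (sect_rep s P') \<cdot> f = (fst (sect_rep s P) \<cdot> f) \<cdot> snd (sect_rep s P')"
    using k af by (simp add: mul_ac)
  also have "\<dots> = (a \<cdot> snd (sect_rep s P)) \<cdot> snd (sect_rep s P')" using 1 by simp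
  also have "\<dots> = (a \<cdot> snd (sect_rep s P')) \<cdot> snd (sect_rep s P)"
    using k af by (simp add: mul_ac)
  also have "\<dots> = (fst (sect_rep s P') \<cdot> f) \<cdot> snd (sect_rep s P)" using 2 by simp
  also have "\<dots> = fst (sect_rep s P') \<cdot> snd (sect_rep s P) \<cdot> f"
    using k af by (simp add: mul_ac)
  finally show ?thesis using mul_right_cancel[OF af(2) _ _ af(3)] k by simp
qed

text \<open>Both sections are single fractions on their whole domains.\<close>

lemma sections_agree:
  assumes s: "s \<in> sections A U" and t: "t \<in> sections A V"
    and P: "P \<in> U" "P \<in> V" "s P = t P" and Q: "Q \<in> U" "Q \<in> V"
  shows "s Q = t Q"
proof -
  obtain a f where 1: "has_fraction A U s a f" using section_has_fraction[OF s] P(1) by blast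
  obtain b g where 2: "has_fraction A V t b g" using section_has_fraction[OF t] P(2) by blast
  note af = has_fractionD(1-3)[OF 1] and bg = has_fractionD(1-3)[OF 2]
  have "frac A (K - P) a f = frac A (K - P) b g"
    using has_fractionD(4)[OF 1 P(1)] has_fractionD(4)[OF 2 P(2)] P(3) by simp
  moreover obtain p where "p \<in> frac A (K - P) a f" using has_fractionD(5)[OF 1 P(1)] by blast
  ultimately have "a \<cdot> g = b \<cdot> f"
    using frac_eq_fracD[OF section_domain_Spec[OF s P(1)] af(1) bg(1) af(2) bg(2)] by blast
  hence "frac A (K - Q) a f = frac A (K - Q) b g" using frac_eqI[of "K - Q"] af bg by blast
  thus ?thesis using has_fractionD(4)[OF 1 Q(1)] has_fractionD(4)[OF 2 Q(2)] by simp
qed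

lemma section_eq_restrict:
  assumes "U \<subseteq> U'" and s: "s \<in> sections A U" and t: "t \<in> sections A U'"
    and P: "P \<in> U" "s P = t P"
  shows "s = restrict t U"
  using sections_agree[OF s t P(1) subsetD[OF assms(1) P(1)] P(2)] assms(1) section_extensional[OF s]
  by (intro extensionalityI[of _ U]) auto

lemma global_canon_apply: "P \<in> Spec A \<Longrightarrow> r \<in> K \<Longrightarrow> global_canon A r P = frac A (K - P) r \<one>"
  unfolding global_canon_def using loc_class_eq_frac[of P r \<one>] by simp

lemma OX_zero_global_canon: "hzero (OX A (Spec A)) = global_canon A \<zero>"
  unfolding OX_def global_canon_def by simp
lemma OX_one_global_canon: "hone (OX A (Spec A)) = global_canon A \<one>"
  unfolding OX_def global_canon_def by simp

lemma global_canon_has_fraction: "has_fraction A (Spec A) (global_canon A r) r \<one>" if "r \<in> K"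
  unfolding global_canon_def using const_has_fraction[OF subset_refl that] .

lemma global_canon_section: "r \<in> K \<Longrightarrow> global_canon A r \<in> sections A (Spec A)"
  using sections_iff_fraction[OF zariski_open_Spec] global_canon_has_fraction unfolding global_canon_def by fastforce

lemma global_canon_inj:
  assumes "r \<in> K" "r' \<in> K" "global_canon A r = global_canon A r'"
  shows "r = r'"
proof -
  have "has_fraction A (Spec A) (global_canon A r) r' \<one>"
    using global_canon_has_fraction[OF assms(2)] assms(3) by simp
  hence "r \<cdot> \<one> = r' \<cdot> \<one>"
    using has_fraction_unique[OF global_canon_has_fraction[OF assms(1)] _ zero_ideal_prime zero_ideal_prime] by blast
  thus ?thesis using assms by simp
qed

lemma global_canon_mul:
  assumes "a \<in> K" "b \<in> K"
  shows "hmul (OX A (Spec A)) (global_canon A a) (global_canon A b) = global_canon A (a \<cdot> b)"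
proof -
  have "has_fraction A (Spec A) (hmul (OX A (Spec A)) (global_canon A a) (global_canon A b)) (a \<cdot> b) (\<one> \<cdot> \<one>)"
    using OX_mul_has_fraction[OF subset_refl global_canon_has_fraction[OF assms(1)] global_canon_has_fraction[OF assms(2)]] .
  moreover have "hmul (OX A (Spec A)) (global_canon A a) (global_canon A b) \<in> extensional (Spec A)"
    unfolding OX_def by simp
  ultimately show ?thesis
    using has_fraction_eq[OF _ section_extensional[OF global_canon_section[OF mul_closed[OF assms]]] _ global_canon_has_fraction[OF mul_closed[OF assms]]] assms by simp
qed

lemma global_canon_add:
  assumes "a \<in> K" "b \<in> K" "y \<in> a \<oplus> b"
  shows "global_canon A y \<in> hadd (OX A (Spec A)) (global_canon A a) (global_canon A b)"
proof -
  have y: "y \<in> K" using add_closed[OF assms] .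
  have "global_canon A y P \<in> loc_add A (K - P) (global_canon A a P) (global_canon A b P)" if P: "P \<in> Spec A" for P
    unfolding global_canon_apply[OF P y] global_canon_apply[OF P assms(1)] global_canon_apply[OF P assms(2)]
      loc_add_frac[OF P assms(1,2) one_closed one_closed one_notin_prime[OF P] one_notin_prime[OF P]]
    using assms y by auto
  thus ?thesis unfolding OX_def using global_canon_section[OF y] by simp
qed

lemma global_canon_addD:
  assumes "a \<in> K" "b \<in> K" "y \<in> K"
    and h: "global_canon A y \<in> hadd (OX A (Spec A)) (global_canon A a) (global_canon A b)"
  shows "y \<in> a \<oplus> b"
proof -
  have "global_canon A y {\<zero>} \<in> loc_add A (K - {\<zero>}) (global_canon A a {\<zero>}) (global_canon A b {\<zero>})"
    using h zero_ideal_prime unfolding OX_def by simp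
  hence "frac A (K - {\<zero>}) y \<one> \<in> {frac A (K - {\<zero>}) y' (\<one> \<cdot> \<one>) | y'. y' \<in> (a \<cdot> \<one>) \<oplus> (\<one> \<cdot> b)}"
    unfolding global_canon_apply[OF zero_ideal_prime assms(3)] global_canon_apply[OF zero_ideal_prime assms(1)] global_canon_apply[OF zero_ideal_prime assms(2)]
      loc_add_frac[OF zero_ideal_prime assms(1,2) one_closed one_closed one_notin_prime[OF zero_ideal_prime] one_notin_prime[OF zero_ideal_prime]] .
  then obtain y' where y': "y' \<in> a \<oplus> b" "frac A (K - {\<zero>}) y \<one> = frac A (K - {\<zero>}) y' \<one>"
    using assms by auto
  have y'K: "y' \<in> K" using add_closed[OF assms(1,2) y'(1)] .
  have "(y, \<one>) \<in> frac A (K - {\<zero>}) y \<one>"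
    using frac_self[of y \<one> "K - {\<zero>}"] assms(3) by simp
  hence "y \<cdot> \<one> = y' \<cdot> \<one>"
    using frac_eq_fracD[OF zero_ideal_prime assms(3) y'K one_closed one_closed y'(2)] by blast
  thus ?thesis using y' assms(3) y'K by simp
qed


section \<open>Every proper hyperideal lies in a prime\<close>

lemma hyperidealD:
  assumes "hyperideal A J"
  shows "J \<subseteq> K" "J \<noteq> {}" "\<And>a b. a \<in> J \<Longrightarrow> b \<in> J \<Longrightarrow> a \<oplus> b \<subseteq> J"
    "\<And>a. a \<in> J \<Longrightarrow> \<ominus> a \<in> J" "\<And>r a. r \<in> K \<Longrightarrow> a \<in> J \<Longrightarrow> r \<cdot> a \<in> J"
  using assms unfolding hyperideal_def by auto

lemma zero_in_hyperideal:
  assumes "hyperideal A J"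
  shows "\<zero> \<in> J"
proof -
  obtain m where m: "m \<in> J" using hyperidealD(2)[OF assms] by blast
  have "m \<in> K" using hyperidealD(1)[OF assms] m by blast
  thus ?thesis using hyperidealD(5)[OF assms zero_closed m] by simp
qed

lemma adjoin_add_closed:
  assumes M: "hyperideal A M" and a: "a \<in> K"
    and x: "m1 \<in> M" "r1 \<in> K" "x \<in> m1 \<oplus> (a \<cdot> r1)" and y: "m2 \<in> M" "r2 \<in> K" "y \<in> m2 \<oplus> (a \<cdot> r2)"
    and z: "z \<in> x \<oplus> y"
  shows "\<exists>m\<in>M. \<exists>r\<in>K. z \<in> m \<oplus> (a \<cdot> r)"
proof -
  have m: "m1 \<in> K" "m2 \<in> K" using x y hyperidealD(1)[OF M] by auto
  have p: "a \<cdot> r1 \<in> K" "a \<cdot> r2 \<in> K" using a x y by auto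
  have yK: "y \<in> K" using add_closed[OF m(2) p(2) y(3)] .
  obtain v where v: "v \<in> (a \<cdot> r1) \<oplus> y" "z \<in> m1 \<oplus> v"
    using add_assoc_mem[OF m(1) p(1) yK] x(3) z by blast
  have "v \<in> y \<oplus> (a \<cdot> r1)" using v(1) add_comm[OF p(1) yK] by simp
  then obtain w where w: "w \<in> (a \<cdot> r2) \<oplus> (a \<cdot> r1)" "v \<in> m2 \<oplus> w"
    using add_assoc_mem[OF m(2) p(2,1)] y(3) by blast
  have wK: "w \<in> K" using add_closed[OF p(2,1) w(1)] .
  obtain u where u: "u \<in> m1 \<oplus> m2" "z \<in> u \<oplus> w"
    using add_assoc_mem[OF m wK] v(2) w(2) by blast
  have "w \<in> mul a ` (r2 \<oplus> r1)" using w(1) distrib[OF a y(2) x(2)] by simp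
  then obtain r where "r \<in> r2 \<oplus> r1" "w = a \<cdot> r" by blast
  moreover have "u \<in> M" using hyperidealD(3)[OF M x(1) y(1)] u(1) by blast
  ultimately show ?thesis using add_closed[OF y(2) x(2)] u(2) by blast
qed

lemma hyperideal_adjoin:
  assumes M: "hyperideal A M" and a: "a \<in> K"
  defines "J \<equiv> {z. \<exists>m\<in>M. \<exists>r\<in>K. z \<in> m \<oplus> (a \<cdot> r)}"
  shows "hyperideal A J" "M \<subseteq> J" "a \<in> J"
proof -
  note MK = hyperidealD(1)[OF M]
  show MJ: "M \<subseteq> J"
  proof
    fix m assume m: "m \<in> M"
    hence "m \<in> m \<oplus> (a \<cdot> \<zero>)" using MK a by auto
    thus "m \<in> J" unfolding J_def using m zero_closed by blast
  qed
  have "a \<in> \<zero> \<oplus> (a \<cdot> \<one>)" using a by simp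
  thus "a \<in> J" unfolding J_def using zero_in_hyperideal[OF M] one_closed by blast
  show "hyperideal A J" unfolding hyperideal_def
  proof (intro conjI ballI subsetI)
    fix z assume "z \<in> J"
    then obtain m r where "m \<in> M" "r \<in> K" "z \<in> m \<oplus> (a \<cdot> r)" unfolding J_def by blast
    thus "z \<in> K" using add_closed[OF _ mul_closed[OF a]] MK by blast
  next
    show "J \<noteq> {}" using MJ hyperidealD(2)[OF M] by blast
  next
    fix x y z assume "x \<in> J" "y \<in> J" "z \<in> x \<oplus> y"
    thus "z \<in> J" using adjoin_add_closed[OF M a] unfolding J_def by blast
  next
    fix x assume x: "x \<in> J"
    obtain m r where 1: "m \<in> M" "r \<in> K" "x \<in> m \<oplus> (a \<cdot> r)"
      using x unfolding J_def by blast
    have "\<ominus>x \<in> \<ominus>m \<oplus> \<ominus>(a \<cdot> r)" using neg_add[OF 1(3)] 1 MK a by auto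
    hence "\<ominus>x \<in> \<ominus>m \<oplus> (a \<cdot> \<ominus>r)" using mul_neg[OF a 1(2)] by simp
    thus "\<ominus>x \<in> J" unfolding J_def using hyperidealD(4)[OF M 1(1)] neg_closed[OF 1(2)] by blast
  next
    fix s x assume s: "s \<in> K" and x: "x \<in> J"
    obtain m r where 1: "m \<in> M" "r \<in> K" "x \<in> m \<oplus> (a \<cdot> r)"
      using x unfolding J_def by blast
    have "s \<cdot> x \<in> mul s ` (m \<oplus> (a \<cdot> r))" using 1(3) by blast
    also have "\<dots> = (s \<cdot> m) \<oplus> (a \<cdot> (s \<cdot> r))"
      using distrib[OF s, of m "a \<cdot> r"] mul_left_commute[OF s a 1(2)] 1 MK a by auto
    finally show "s \<cdot> x \<in> J" unfolding J_def
      using hyperidealD(5)[OF M s 1(1)] mul_closed[OF s 1(2)] by blast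
  qed
qed

lemma hyperideal_chain_Union:
  assumes "C \<noteq> {}" "\<And>X. X \<in> C \<Longrightarrow> hyperideal A X" "chain\<^sub>\<subseteq> C"
  shows "hyperideal A (\<Union>C)"
  unfolding hyperideal_def
proof (intro conjI ballI)
  show "\<Union>C \<subseteq> K" "\<Union>C \<noteq> {}"
    using assms(1) hyperidealD(1,2)[OF assms(2)] by blast+
next
  fix x y assume "x \<in> \<Union>C" "y \<in> \<Union>C"
  then obtain X Y where X: "X \<in> C" "x \<in> X" and Y: "Y \<in> C" "y \<in> Y" by blast
  show "x \<oplus> y \<subseteq> \<Union>C"
  proof (cases "X \<subseteq> Y")
    case True thus ?thesis using hyperidealD(3)[OF assms(2)[OF Y(1)], of x y] X Y by blast
  next
    case False
    hence "Y \<subseteq> X" using assms(3) X(1) Y(1) unfolding chain_subset_def by blast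
    thus ?thesis using hyperidealD(3)[OF assms(2)[OF X(1)], of x y] X Y by blast
  qed
next
  fix r x assume "x \<in> \<Union>C"
  then obtain X where "X \<in> C" "x \<in> X" by blast
  thus "\<ominus>x \<in> \<Union>C" "r \<in> K \<Longrightarrow> r \<cdot> x \<in> \<Union>C"
    using hyperidealD(4,5)[OF assms(2)] by blast+
qed

lemma maximal_avoiding_one_prime:
  assumes M: "hyperideal A M" "\<one> \<notin> M"
    and max: "\<And>J. hyperideal A J \<Longrightarrow> M \<subseteq> J \<Longrightarrow> \<one> \<notin> J \<Longrightarrow> J = M"
  shows "M \<in> Spec A"
proof -
  have "b \<in> M" if a: "a \<in> K" "a \<notin> M" and b: "b \<in> K" and ab: "a \<cdot> b \<in> M" for a b
  proof -
    define J where "J = {z. \<exists>m\<in>M. \<exists>r\<in>K. z \<in> m \<oplus> (a \<cdot> r)}"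
    note J = hyperideal_adjoin[OF M(1) a(1), folded J_def]
    have "\<one> \<in> J" using max[OF J(1,2)] J(3) a(2) by blast
    then obtain m r where mr: "m \<in> M" "r \<in> K" "\<one> \<in> m \<oplus> (a \<cdot> r)"
      unfolding J_def by blast
    have mK: "m \<in> K" using mr hyperidealD(1)[OF M(1)] by blast
    have "b \<cdot> \<one> \<in> mul b ` (m \<oplus> (a \<cdot> r))" using mr(3) by blast
    also have "\<dots> = (b \<cdot> m) \<oplus> (r \<cdot> (a \<cdot> b))"
      using distrib[OF b mK, of "a \<cdot> r"] a b mr(2) by (simp add: mul_ac)
    finally have "b \<in> (b \<cdot> m) \<oplus> (r \<cdot> (a \<cdot> b))" using b by simp
    thus "b \<in> M" using hyperidealD(3,5)[OF M(1)] b mr(1,2) ab by blast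
  qed
  moreover have "M \<noteq> K" using M(2) one_closed by blast
  ultimately show ?thesis unfolding Spec_def prime_hyperideal_def using M(1) by blast
qed

lemma prime_above_hyperideal:
  assumes I: "hyperideal A I" "\<one> \<notin> I"
  shows "\<exists>P\<in>Spec A. I \<subseteq> P"
proof -
  define MM where "MM = {J. hyperideal A J \<and> I \<subseteq> J \<and> \<one> \<notin> J}"
  have "\<exists>U\<in>MM. \<forall>X\<in>C. X \<subseteq> U" if C: "C \<in> chains MM" for C
  proof (cases "C = {}")
    case True thus ?thesis using I unfolding MM_def by blast
  next
    case False
    have "C \<subseteq> MM" "chain\<^sub>\<subseteq> C" using C unfolding chains_def by auto
    hence "\<Union>C \<in> MM" using hyperideal_chain_Union[OF False] False unfolding MM_def by blast
    thus ?thesis by blast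
  qed
  then obtain M where "M \<in> MM" "\<forall>X\<in>MM. M \<subseteq> X \<longrightarrow> X = M"
    using Zorn_Lemma2[of MM] by blast
  hence "hyperideal A M" "\<one> \<notin> M" "I \<subseteq> M" "\<And>J. hyperideal A J \<Longrightarrow> M \<subseteq> J \<Longrightarrow> \<one> \<notin> J \<Longrightarrow> J = M"
    unfolding MM_def by auto
  thus ?thesis using maximal_avoiding_one_prime by blast
qed

lemma hyperideal_denominators:
  assumes af: "a \<in> K" "f \<in> K"
  shows "hyperideal A {t \<in> K. \<exists>r\<in>K. r \<cdot> f = a \<cdot> t}" (is "hyperideal A ?I")
  unfolding hyperideal_def
proof (intro conjI ballI)
  show "?I \<subseteq> K" by blast
  show "?I \<noteq> {}" using af by (auto intro!: exI[of _ \<zero>] bexI[of _ \<zero>])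
next
  fix t1 t2 assume "t1 \<in> ?I" "t2 \<in> ?I"
  then obtain r1 r2 where 1: "t1 \<in> K" "r1 \<in> K" "r1 \<cdot> f = a \<cdot> t1" and 2: "t2 \<in> K" "r2 \<in> K" "r2 \<cdot> f = a \<cdot> t2"
    by blast
  show "t1 \<oplus> t2 \<subseteq> ?I"
  proof
    fix t assume t: "t \<in> t1 \<oplus> t2"
    have "a \<cdot> t \<in> mul a ` (t1 \<oplus> t2)" using t by blast
    also have "\<dots> = mul f ` (r1 \<oplus> r2)"
      using distrib[OF af(1) 1(1) 2(1)] distrib[OF af(2) 1(2) 2(2)] 1 2 af mul_comm[of r1 f] mul_comm[of r2 f]
      by simp
    finally obtain r where r: "r \<in> r1 \<oplus> r2" "a \<cdot> t = f \<cdot> r" by blast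
    have "r \<in> K" using add_closed[OF 1(2) 2(2) r(1)] .
    thus "t \<in> ?I" using add_closed[OF 1(1) 2(1) t] r(2) mul_comm[of r f] af by auto
  qed
next
  fix t assume "t \<in> ?I"
  then obtain r where 1: "t \<in> K" "r \<in> K" "r \<cdot> f = a \<cdot> t" by blast
  have "\<ominus>r \<cdot> f = a \<cdot> \<ominus>t"
    using mul_neg[OF af(2) 1(2)] mul_neg[OF af(1) 1(1)] mul_comm[OF af(2) 1(2)] mul_comm[OF af(2) neg_closed[OF 1(2)]] 1(3)
    by simp
  thus "\<ominus>t \<in> ?I" using 1 by auto
next
  fix r' t assume r': "r' \<in> K" and "t \<in> ?I"
  then obtain r where 1: "t \<in> K" "r \<in> K" "r \<cdot> f = a \<cdot> t" by blast
  have "(r' \<cdot> r) \<cdot> f = a \<cdot> (r' \<cdot> t)"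
    using 1 r' af by (simp add: mul_assoc mul_left_commute)
  thus "r' \<cdot> t \<in> ?I" using 1 r' by auto
qed

text \<open>A global section \<open>a/f\<close> is defined at every prime, so the ideal of admissible
  denominators lies in no prime and thus contains \<open>\<one>\<close>.\<close>

lemma global_section_canon:
  assumes s: "s \<in> sections A (Spec A)"
  shows "\<exists>h\<in>K. s = global_canon A h"
proof -
  obtain a f where v: "has_fraction A (Spec A) s a f"
    using section_has_fraction[OF s] zero_ideal_prime by blast
  note af = has_fractionD(1-3)[OF v]
  define I where "I = {t \<in> K. \<exists>r\<in>K. r \<cdot> f = a \<cdot> t}"
  have "\<not> I \<subseteq> Q" if Q: "Q \<in> Spec A" for Q
  proof -
    obtain p where "p \<in> frac A (K - Q) a f" using has_fractionD(5)[OF v Q] by blast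
    thus ?thesis using frac_of_member(2-5)[OF Q af] unfolding I_def by blast
  qed
  hence "\<one> \<in> I"
    using prime_above_hyperideal hyperideal_denominators[OF af(1,2)] unfolding I_def by blast
  then obtain r where r: "r \<in> K" "r \<cdot> f = a" unfolding I_def using af by auto
  have "has_fraction A (Spec A) s r \<one>"
    using has_fraction_cong[OF v r(1) one_closed zero_neq_one(2)] r af by simp
  hence "s = global_canon A r"
    using has_fraction_eq[OF section_extensional[OF s] _ _ global_canon_has_fraction[OF r(1)]] r(1)
    unfolding global_canon_def by simp
  thus ?thesis using r by blast
qed

end

text \<open>Only the structure actually transported is assumed; in particular \<open>A\<close> need not be
  known to be a hyperring.\<close>

locale hyperring_iso =
  fixes A :: "'a hyperring" and B :: "'b hyperring" and e :: "'a \<Rightarrow> 'b"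
  assumes bij: "bij_betw e (carrier A) (carrier B)"
    and add_subset: "\<And>x y. x \<in> carrier A \<Longrightarrow> y \<in> carrier A \<Longrightarrow> hadd A x y \<subseteq> carrier A"
    and image_add: "\<And>x y. x \<in> carrier A \<Longrightarrow> y \<in> carrier A \<Longrightarrow> e ` hadd A x y = hadd B (e x) (e y)"
    and mul_closed: "\<And>x y. x \<in> carrier A \<Longrightarrow> y \<in> carrier A \<Longrightarrow> hmul A x y \<in> carrier A"
    and map_mul: "\<And>x y. x \<in> carrier A \<Longrightarrow> y \<in> carrier A \<Longrightarrow> e (hmul A x y) = hmul B (e x) (e y)"
    and zero_closed: "hzero A \<in> carrier A"
    and map_zero: "e (hzero A) = hzero B"
    and neg_ex1: "\<And>x. x \<in> carrier B \<Longrightarrow> \<exists>!y. y \<in> carrier B \<and> hzero B \<in> hadd B x y"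
begin

lemma map_closed: "x \<in> carrier A \<Longrightarrow> e x \<in> carrier B"
  using bij bij_betwE by blast
lemma map_inj: "x \<in> carrier A \<Longrightarrow> y \<in> carrier A \<Longrightarrow> e x = e y \<Longrightarrow> x = y"
  using bij unfolding bij_betw_def inj_on_def by blast
lemma image_carrier: "e ` carrier A = carrier B"
  using bij unfolding bij_betw_def by blast

lemma zero_in_add_iff:
  assumes "x \<in> carrier A" "y \<in> carrier A"
  shows "hzero A \<in> hadd A x y \<longleftrightarrow> hzero B \<in> hadd B (e x) (e y)"
proof
  assume "hzero A \<in> hadd A x y"
  thus "hzero B \<in> hadd B (e x) (e y)" using image_add[OF assms] map_zero by force
next
  assume "hzero B \<in> hadd B (e x) (e y)"
  then obtain z where z: "z \<in> hadd A x y" "e z = hzero B" using image_add[OF assms] by force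
  have "z \<in> carrier A" using add_subset[OF assms] z by blast
  hence "z = hzero A" using map_inj[OF _ zero_closed] z map_zero by simp
  thus "hzero A \<in> hadd A x y" using z by simp
qed

lemma map_neg:
  assumes x: "x \<in> carrier A"
  shows "hneg A x \<in> carrier A" "e (hneg A x) = hneg B (e x)"
proof -
  obtain y where y: "y \<in> carrier B" "hzero B \<in> hadd B (e x) y"
    using neg_ex1[OF map_closed[OF x]] by blast
  obtain y' where y': "y' \<in> carrier A" "y = e y'" using y(1) image_carrier by blast
  have ex: "\<exists>!y. y \<in> carrier A \<and> hzero A \<in> hadd A x y"
  proof (rule ex1I[of _ y'])
    show "y' \<in> carrier A \<and> hzero A \<in> hadd A x y'" using y y' zero_in_add_iff[OF x y'(1)] by simp
  next
    fix z assume z: "z \<in> carrier A \<and> hzero A \<in> hadd A x z"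
    hence "hzero B \<in> hadd B (e x) (e z)" using zero_in_add_iff[OF x] by blast
    hence "e z = y" using neg_ex1[OF map_closed[OF x]] y map_closed z by blast
    thus "z = y'" using map_inj z y' by blast
  qed
  have h: "hneg A x \<in> carrier A \<and> hzero A \<in> hadd A x (hneg A x)"
    unfolding hneg_def by (rule theI'[OF ex])
  thus "hneg A x \<in> carrier A" by blast
  have "e (hneg A x) \<in> carrier B \<and> hzero B \<in> hadd B (e x) (e (hneg A x))"
    using h zero_in_add_iff[OF x] map_closed by blast
  thus "e (hneg A x) = hneg B (e x)" unfolding hneg_def[of B]
    using the1_equality[OF neg_ex1[OF map_closed[OF x]]] by simp
qed

lemma hyperideal_image_iff:
  assumes I: "I \<subseteq> carrier A"
  shows "hyperideal A I \<longleftrightarrow> hyperideal B (e ` I)"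
proof -
  have sub: "\<And>S. S \<subseteq> carrier A \<Longrightarrow> (S \<subseteq> I \<longleftrightarrow> e ` S \<subseteq> e ` I)"
  proof -
    fix S assume S: "S \<subseteq> carrier A"
    show "S \<subseteq> I \<longleftrightarrow> e ` S \<subseteq> e ` I"
    proof
      assume "e ` S \<subseteq> e ` I"
      thus "S \<subseteq> I" using S I map_inj by blast
    qed blast
  qed
  have mem: "\<And>x. x \<in> carrier A \<Longrightarrow> x \<in> I \<longleftrightarrow> e x \<in> e ` I"
    using I map_inj by blast
  have c1: "(\<forall>a\<in>I. \<forall>b\<in>I. hadd A a b \<subseteq> I) \<longleftrightarrow> (\<forall>a\<in>e ` I. \<forall>b\<in>e ` I. hadd B a b \<subseteq> e ` I)"
  proof -
    have "hadd A a b \<subseteq> I \<longleftrightarrow> hadd B (e a) (e b) \<subseteq> e ` I" if "a \<in> I" "b \<in> I" for a b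
    proof -
      have ab: "a \<in> carrier A" "b \<in> carrier A" using that I by auto
      show ?thesis using sub[OF add_subset[OF ab]] image_add[OF ab] by simp
    qed
    thus ?thesis by blast
  qed
  have c2: "(\<forall>a\<in>I. hneg A a \<in> I) \<longleftrightarrow> (\<forall>a\<in>e ` I. hneg B a \<in> e ` I)"
  proof -
    have "hneg A a \<in> I \<longleftrightarrow> hneg B (e a) \<in> e ` I" if "a \<in> I" for a
    proof -
      have a: "a \<in> carrier A" using that I by auto
      show ?thesis using mem[OF map_neg(1)[OF a]] map_neg(2)[OF a] by simp
    qed
    thus ?thesis by blast
  qed
  have c3: "(\<forall>r\<in>carrier A. \<forall>a\<in>I. hmul A r a \<in> I) \<longleftrightarrow> (\<forall>r\<in>carrier B. \<forall>a\<in>e ` I. hmul B r a \<in> e ` I)"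
  proof -
    have "hmul A r a \<in> I \<longleftrightarrow> hmul B (e r) (e a) \<in> e ` I" if "r \<in> carrier A" "a \<in> I" for r a
    proof -
      have a: "a \<in> carrier A" using that I by auto
      show ?thesis using mem[OF mul_closed[OF that(1) a]] map_mul[OF that(1) a] by simp
    qed
    thus ?thesis unfolding image_carrier[symmetric] ball_simps(9) by blast
  qed
  have c0: "e ` I \<subseteq> carrier B" using I map_closed by blast
  show ?thesis unfolding hyperideal_def using c0 c1 c2 c3 I by auto
qed

lemma image_preimage:
  assumes "J \<subseteq> carrier B"
  shows "e ` {x \<in> carrier A. e x \<in> J} = J"
proof (intro equalityI subsetI)
  fix z assume "z \<in> J"
  then obtain x where "x \<in> carrier A" "z = e x" using assms image_carrier by blast
  thus "z \<in> e ` {x \<in> carrier A. e x \<in> J}" using \<open>z \<in> J\<close> by blast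
qed auto

lemma image_eq_iff: "I \<subseteq> carrier A \<Longrightarrow> J \<subseteq> carrier A \<Longrightarrow> e ` I = e ` J \<longleftrightarrow> I = J"
  using bij inj_on_image_eq_iff unfolding bij_betw_def by blast

lemma image_eq_iff_preimage:
  assumes "M \<subseteq> carrier A" "N \<subseteq> carrier B"
  shows "e ` M = N \<longleftrightarrow> M = {x \<in> carrier A. e x \<in> N}"
proof
  assume "e ` M = N"
  hence "e ` M = e ` {x \<in> carrier A. e x \<in> N}" using image_preimage[OF assms(2)] by simp
  thus "M = {x \<in> carrier A. e x \<in> N}" using image_eq_iff assms(1) by blast
qed (use image_preimage[OF assms(2)] in simp)

lemma maximal_hyperideal_imageI:
  assumes M: "maximal_hyperideal A M"
  shows "maximal_hyperideal B (e ` M)"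
proof -
  have hM: "hyperideal A M" "M \<noteq> carrier A" using M unfolding maximal_hyperideal_def by blast+
  have MA: "M \<subseteq> carrier A" using hM(1) unfolding hyperideal_def by blast
  have "J = e ` M \<or> J = carrier B" if J: "hyperideal B J" "e ` M \<subseteq> J" for J
  proof -
    let ?J' = "{x \<in> carrier A. e x \<in> J}"
    have JB: "J \<subseteq> carrier B" using J(1) unfolding hyperideal_def by blast
    have "hyperideal A ?J'" using hyperideal_image_iff[of ?J'] image_preimage[OF JB] J(1) by simp
    moreover have "M \<subseteq> ?J'" using MA J(2) by blast
    ultimately have "?J' = M \<or> ?J' = carrier A" using M unfolding maximal_hyperideal_def by blast
    hence "e ` ?J' = e ` M \<or> e ` ?J' = carrier B" using image_carrier by (elim disjE) simp_all
    thus ?thesis unfolding image_preimage[OF JB] .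
  qed
  moreover have "e ` M \<noteq> carrier B"
    using image_eq_iff[OF MA subset_refl] hM(2) image_carrier by simp
  ultimately show ?thesis
    using hyperideal_image_iff[OF MA] hM(1) unfolding maximal_hyperideal_def by blast
qed

lemma maximal_hyperideal_imageD:
  assumes MA: "M \<subseteq> carrier A" and M: "maximal_hyperideal B (e ` M)"
  shows "maximal_hyperideal A M"
proof -
  have hM: "hyperideal B (e ` M)" "e ` M \<noteq> carrier B"
    and max: "\<And>J. hyperideal B J \<Longrightarrow> e ` M \<subseteq> J \<Longrightarrow> J = e ` M \<or> J = carrier B"
    using M unfolding maximal_hyperideal_def by blast+
  have "J = M \<or> J = carrier A" if J: "hyperideal A J" "M \<subseteq> J" for J
  proof -
    have JA: "J \<subseteq> carrier A" using J(1) unfolding hyperideal_def by blast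
    have "e ` J = e ` M \<or> e ` J = e ` carrier A"
      using max[of "e ` J"] J hyperideal_image_iff[OF JA] image_carrier by blast
    thus ?thesis using image_eq_iff[OF JA] MA by blast
  qed
  moreover have "M \<noteq> carrier A" using hM(2) image_carrier by blast
  ultimately show ?thesis using hM(1) hyperideal_image_iff[OF MA] unfolding maximal_hyperideal_def by blast
qed

lemma maximal_hyperideal_image_iff:
  "maximal_hyperideal A M \<longleftrightarrow> M \<subseteq> carrier A \<and> maximal_hyperideal B (e ` M)"
proof
  assume M: "maximal_hyperideal A M"
  hence "hyperideal A M" unfolding maximal_hyperideal_def by blast
  hence "M \<subseteq> carrier A" unfolding hyperideal_def by blast
  thus "M \<subseteq> carrier A \<and> maximal_hyperideal B (e ` M)"
    using maximal_hyperideal_imageI[OF M] by blast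
qed (use maximal_hyperideal_imageD in blast)

end

definition loc_maximal_ideal :: "'a hyperring \<Rightarrow> 'a set \<Rightarrow> ('a \<times> 'a) set set" where
  "loc_maximal_ideal A P = {c \<in> loc_carrier A (carrier A - P). \<forall>p\<in>c. fst p \<in> P}"

context hdomain begin

lemma frac_in_loc_maximal_ideal:
  assumes P: "P \<in> Spec A" and a: "a \<in> K" "f \<in> K" "f \<notin> P"
  shows "frac A (K - P) a f \<in> loc_maximal_ideal A P \<longleftrightarrow> a \<in> P"
proof
  assume "frac A (K - P) a f \<in> loc_maximal_ideal A P"
  moreover have "(a,f) \<in> frac A (K - P) a f" using frac_self a by simp
  ultimately show "a \<in> P" unfolding loc_maximal_ideal_def by fastforce
next
  assume aP: "a \<in> P"
  have "\<forall>p\<in>frac A (K - P) a f. fst p \<in> P"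
  proof
    fix p assume p: "p \<in> frac A (K - P) a f"
    obtain r t where rt: "p = (r,t)" by fastforce
    hence h: "r \<in> K" "t \<in> K" "t \<notin> P" "r \<cdot> f = a \<cdot> t" using p frac_mem by auto
    have "a \<cdot> t \<in> P" using prime_mul_right[OF P aP h(2)] .
    hence "r \<cdot> f \<in> P" using h(4) by simp
    hence "r \<in> P" using SpecD(6)[OF P h(1) a(2)] a(3) by blast
    thus "fst p \<in> P" using rt by simp
  qed
  moreover have "frac A (K - P) a f \<in> loc_carrier A (K - P)" using loc_carrier_iff[OF P] a by blast
  ultimately show "frac A (K - P) a f \<in> loc_maximal_ideal A P" unfolding loc_maximal_ideal_def by blast
qed

lemma localization_simps: "carrier (localization A T) = loc_carrier A T" "hadd (localization A T) = loc_add A T"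
  "hmul (localization A T) = loc_mul A T" "hzero (localization A T) = loc_class A T \<zero> \<one>"
  "hone (localization A T) = loc_class A T \<one> \<one>"
  unfolding localization_def by simp_all

lemma localization_zero: "P \<in> Spec A \<Longrightarrow> hzero (localization A (K - P)) = frac A (K - P) \<zero> \<one>"
  using localization_simps(4) loc_class_eq_frac[of P \<zero> \<one>] by simp

lemma loc_neg_unique:
  assumes P: "P \<in> Spec A" and a: "a \<in> K" "f \<in> K" "f \<notin> P"
    and d: "d \<in> loc_carrier A (K - P)" "frac A (K - P) \<zero> \<one> \<in> loc_add A (K - P) (frac A (K - P) a f) d"
  shows "d = frac A (K - P) (\<ominus> a) f"
proof -
  have fz: "f \<noteq> \<zero>" using a(3) P by auto
  obtain b g where 2: "b \<in> K" "g \<in> K" "g \<notin> P" "d = frac A (K - P) b g"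
    using loc_carrier_fracE[OF P d(1)] by blast
  have gz: "g \<noteq> \<zero>" using 2(3) P by auto
  obtain y where y: "y \<in> (a \<cdot> g) \<oplus> (f \<cdot> b)" "frac A (K - P) \<zero> \<one> = frac A (K - P) y (f \<cdot> g)"
    using d(2) unfolding 2(4) loc_add_frac[OF P a(1) 2(1) a(2) 2(2) a(3) 2(3)] by blast
  have yK: "y \<in> K" using add_closed[OF _ _ y(1)] a 2 by simp
  have "(\<zero>, \<one>) \<in> frac A (K - P) \<zero> \<one>"
    using frac_self[of \<zero> \<one> "K - P"] P by simp
  hence "\<zero> \<cdot> (f \<cdot> g) = y \<cdot> \<one>"
    using frac_eq_fracD[OF P zero_closed yK one_closed mul_closed[OF a(2) 2(2)] y(2)] by simp
  hence "y = \<zero>" using yK a 2 by simp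
  hence "\<zero> \<in> (a \<cdot> g) \<oplus> (f \<cdot> b)" using y(1) by simp
  hence "f \<cdot> b = \<ominus> (a \<cdot> g)" using neg_unique[of "a \<cdot> g" "f \<cdot> b"] a 2 by simp
  also have "\<dots> = g \<cdot> \<ominus> a" using mul_neg[OF 2(2) a(1)] mul_comm[OF a(1) 2(2)] by simp
  finally have fb: "f \<cdot> b = g \<cdot> \<ominus> a" .
  show "d = frac A (K - P) (\<ominus> a) f" unfolding 2(4)
    by (rule frac_eqI) (use 2 a gz fz fb mul_comm[OF 2(1) a(2)] mul_comm[OF neg_closed[OF a(1)] 2(2)] in simp_all)
qed

lemma localization_neg:
  assumes P: "P \<in> Spec A" and a: "a \<in> K" "f \<in> K" "f \<notin> P"
  shows "\<exists>!d. d \<in> loc_carrier A (K - P) \<and> frac A (K - P) \<zero> \<one> \<in> loc_add A (K - P) (frac A (K - P) a f) d"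
    "hneg (localization A (K - P)) (frac A (K - P) a f) = frac A (K - P) (\<ominus> a) f"
proof -
  have fz: "f \<noteq> \<zero>" using a(3) P by auto
  have ex: "frac A (K - P) (\<ominus> a) f \<in> loc_carrier A (K - P) \<and>
      frac A (K - P) \<zero> \<one> \<in> loc_add A (K - P) (frac A (K - P) a f) (frac A (K - P) (\<ominus> a) f)"
  proof
    show "frac A (K - P) (\<ominus> a) f \<in> loc_carrier A (K - P)"
      using frac_in_loc_carrier[OF P neg_closed[OF a(1)] a(2,3)] .
    have "f \<cdot> \<zero> \<in> mul f ` (a \<oplus> \<ominus> a)"
      using zero_in_add_neg[OF a(1)] by (rule imageI)
    hence "\<zero> \<in> (f \<cdot> a) \<oplus> (f \<cdot> \<ominus> a)"
      using distrib[OF a(2) a(1) neg_closed[OF a(1)]] a by simp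
    hence z: "\<zero> \<in> (a \<cdot> f) \<oplus> (f \<cdot> \<ominus> a)" using mul_comm[OF a(1,2)] by simp
    have "frac A (K - P) \<zero> (f \<cdot> f) = frac A (K - P) \<zero> \<one>"
      by (rule frac_eqI) (use a fz mul_nonzero[OF a(2) a(2) fz fz] in simp_all)
    thus "frac A (K - P) \<zero> \<one> \<in> loc_add A (K - P) (frac A (K - P) a f) (frac A (K - P) (\<ominus> a) f)"
      unfolding loc_add_frac[OF P a(1) neg_closed[OF a(1)] a(2) a(2) a(3) a(3)] using z by blast
  qed
  have un: "d = frac A (K - P) (\<ominus> a) f" if "d \<in> loc_carrier A (K - P)"
    "frac A (K - P) \<zero> \<one> \<in> loc_add A (K - P) (frac A (K - P) a f) d" for d
    using loc_neg_unique[OF P a that] .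
  show ex1: "\<exists>!d. d \<in> loc_carrier A (K - P) \<and> frac A (K - P) \<zero> \<one> \<in> loc_add A (K - P) (frac A (K - P) a f) d"
    using ex un by blast
  show "hneg (localization A (K - P)) (frac A (K - P) a f) = frac A (K - P) (\<ominus> a) f"
    unfolding hneg_def[of "localization A (K - P)"] localization_simps localization_zero[OF P, unfolded localization_simps]
    using the1_equality[OF ex1 ex] by simp
qed

lemma localization_neg_ex1:
  assumes P: "P \<in> Spec A" and c: "c \<in> loc_carrier A (K - P)"
  shows "\<exists>!d. d \<in> carrier (localization A (K - P)) \<and>
     hzero (localization A (K - P)) \<in> hadd (localization A (K - P)) c d"
  using localization_neg(1)[OF P] loc_carrier_fracE[OF P c] localization_zero[OF P] unfolding localization_simps by metis

lemma loc_maximal_idealE: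
  assumes P: "P \<in> Spec A" and c: "c \<in> loc_maximal_ideal A P"
  obtains a f where "a \<in> P" "a \<in> K" "f \<in> K" "f \<notin> P" "c = frac A (K - P) a f"
proof -
  obtain a f where 1: "a \<in> K" "f \<in> K" "f \<notin> P" "c = frac A (K - P) a f"
    using loc_carrier_fracE[OF P] c unfolding loc_maximal_ideal_def by blast
  moreover have "a \<in> P" using c frac_in_loc_maximal_ideal[OF P 1(1-3)] 1(4) by simp
  ultimately show ?thesis using that by blast
qed

lemma loc_add_loc_maximal_ideal:
  assumes P: "P \<in> Spec A" and c: "c \<in> loc_maximal_ideal A P" and d: "d \<in> loc_maximal_ideal A P"
  shows "loc_add A (K - P) c d \<subseteq> loc_maximal_ideal A P"
proof -
  obtain a f where 1: "a \<in> P" "a \<in> K" "f \<in> K" "f \<notin> P" "c = frac A (K - P) a f"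
    using loc_maximal_idealE[OF P c] .
  obtain b g where 2: "b \<in> P" "b \<in> K" "g \<in> K" "g \<notin> P" "d = frac A (K - P) b g"
    using loc_maximal_idealE[OF P d] .
  have fg: "f \<cdot> g \<in> K" "f \<cdot> g \<notin> P" using prime_mul_notin[OF P 1(3) 2(3) 1(4) 2(4)] 1 2 by auto
  show ?thesis unfolding 1(5) 2(5) loc_add_frac[OF P 1(2) 2(2) 1(3) 2(3) 1(4) 2(4)]
  proof
    fix x assume "x \<in> {frac A (K - P) y (f \<cdot> g) | y. y \<in> (a \<cdot> g) \<oplus> (f \<cdot> b)}"
    then obtain y where y: "y \<in> (a \<cdot> g) \<oplus> (f \<cdot> b)" "x = frac A (K - P) y (f \<cdot> g)" by blast
    have "a \<cdot> g \<in> P" "f \<cdot> b \<in> P" using prime_mul_right[OF P 1(1) 2(3)] SpecD(5)[OF P 1(3) 2(1)] .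
    hence "y \<in> P" using SpecD(3)[OF P] y(1) by blast
    thus "x \<in> loc_maximal_ideal A P"
      using frac_in_loc_maximal_ideal[OF P _ fg] add_closed[OF _ _ y(1)] 1 2 y(2) by simp
  qed
qed

lemma hyperideal_loc_maximal_ideal:
  assumes P: "P \<in> Spec A"
  shows "hyperideal (localization A (K - P)) (loc_maximal_ideal A P)"
  unfolding hyperideal_def localization_simps
proof (intro conjI ballI)
  show "loc_maximal_ideal A P \<subseteq> loc_carrier A (K - P)" unfolding loc_maximal_ideal_def by blast
  have "frac A (K - P) \<zero> \<one> \<in> loc_maximal_ideal A P"
    using frac_in_loc_maximal_ideal[OF P zero_closed one_closed one_notin_prime[OF P]] P by simp
  thus "loc_maximal_ideal A P \<noteq> {}" by blast
next
  fix c d assume "c \<in> loc_maximal_ideal A P" "d \<in> loc_maximal_ideal A P"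
  thus "loc_add A (K - P) c d \<subseteq> loc_maximal_ideal A P" using loc_add_loc_maximal_ideal[OF P] by blast
next
  fix c assume c: "c \<in> loc_maximal_ideal A P"
  then obtain a f where 1: "a \<in> P" "a \<in> K" "f \<in> K" "f \<notin> P" "c = frac A (K - P) a f"
    using loc_maximal_idealE[OF P] by blast
  have "hneg (localization A (K - P)) c = frac A (K - P) (\<ominus> a) f"
    using localization_neg(2)[OF P 1(2-4)] 1(5) by simp
  thus "hneg (localization A (K - P)) c \<in> loc_maximal_ideal A P"
    using frac_in_loc_maximal_ideal[OF P neg_closed[OF 1(2)] 1(3,4)] SpecD(4)[OF P 1(1)] by simp
next
  fix r c assume r: "r \<in> loc_carrier A (K - P)" and c: "c \<in> loc_maximal_ideal A P"
  obtain a f where 1: "a \<in> P" "a \<in> K" "f \<in> K" "f \<notin> P" "c = frac A (K - P) a f"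
    using loc_maximal_idealE[OF P c] .
  obtain b g where 2: "b \<in> K" "g \<in> K" "g \<notin> P" "r = frac A (K - P) b g"
    using loc_carrier_fracE[OF P r] by blast
  have fg: "g \<cdot> f \<in> K" "g \<cdot> f \<notin> P" using prime_mul_notin[OF P 2(2) 1(3) 2(3) 1(4)] 1 2 by auto
  show "loc_mul A (K - P) r c \<in> loc_maximal_ideal A P"
    unfolding 1(5) 2(4) loc_mul_frac[OF P 2(1) 1(2) 2(2) 1(3) 2(3) 1(4)]
    using frac_in_loc_maximal_ideal[OF P mul_closed[OF 2(1) 1(2)] fg] SpecD(5)[OF P 2(1) 1(1)] by simp
qed

lemma hyperideal_loc_not_in_maximal:
  assumes P: "P \<in> Spec A" and J: "hyperideal (localization A (K - P)) J"
    and c: "c \<in> J" "c \<notin> loc_maximal_ideal A P"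
  shows "J = loc_carrier A (K - P)"
proof -
  have JL: "J \<subseteq> loc_carrier A (K - P)" and Jm: "\<And>r x. r \<in> loc_carrier A (K - P) \<Longrightarrow> x \<in> J \<Longrightarrow> loc_mul A (K - P) r x \<in> J"
    using J unfolding hyperideal_def localization_simps by auto
  obtain a f where 1: "a \<in> K" "f \<in> K" "f \<notin> P" "c = frac A (K - P) a f"
    using loc_carrier_fracE[OF P] c JL by blast
  have aP: "a \<notin> P" using c frac_in_loc_maximal_ideal[OF P 1(1-3)] 1(4) by simp
  have az: "a \<noteq> \<zero>" using aP P by auto
  have fz: "f \<noteq> \<zero>" using 1(3) P by auto
  show ?thesis
  proof
    show "loc_carrier A (K - P) \<subseteq> J"
    proof
      fix d assume d: "d \<in> loc_carrier A (K - P)"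
      obtain b g where 2: "b \<in> K" "g \<in> K" "g \<notin> P" "d = frac A (K - P) b g"
        using loc_carrier_fracE[OF P d] by blast
      have gz: "g \<noteq> \<zero>" using 2(3) P by auto
      have ga: "g \<cdot> a \<in> K" "g \<cdot> a \<notin> P"
        using prime_mul_notin[OF P 2(2) 1(1) 2(3) aP] 1 2 by auto
      have "loc_mul A (K - P) (frac A (K - P) (b \<cdot> f) (g \<cdot> a)) c = frac A (K - P) (b \<cdot> f \<cdot> a) (g \<cdot> a \<cdot> f)"
        unfolding 1(4) using loc_mul_frac[OF P mul_closed[OF 2(1) 1(2)] 1(1) ga(1) 1(2) ga(2) 1(3)] .
      also have "\<dots> = d" unfolding 2(4)
      proof (rule frac_eqI)
        show "b \<cdot> f \<cdot> a \<cdot> g = b \<cdot> (g \<cdot> a \<cdot> f)"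
          using 1(1,2) 2(1,2) by (simp add: mul_ac)
      qed (use 1 2 gz mul_nonzero[OF mul_closed[OF 2(2) 1(1)] 1(2) mul_nonzero[OF 2(2) 1(1) gz az] fz] in simp_all)
      finally show "d \<in> J" using Jm[OF frac_in_loc_carrier[OF P mul_closed[OF 2(1) 1(2)] ga] c(1)] by simp
    qed
  qed (use JL in blast)
qed

lemma maximal_hyperideal_localization_iff:
  assumes P: "P \<in> Spec A"
  shows "maximal_hyperideal (localization A (K - P)) m \<longleftrightarrow> m = loc_maximal_ideal A P"
proof -
  have ne: "loc_maximal_ideal A P \<noteq> loc_carrier A (K - P)"
  proof
    assume "loc_maximal_ideal A P = loc_carrier A (K - P)"
    hence "frac A (K - P) \<one> \<one> \<in> loc_maximal_ideal A P"
      using frac_in_loc_carrier[OF P one_closed one_closed one_notin_prime[OF P]] by simp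
    thus False using frac_in_loc_maximal_ideal[OF P one_closed one_closed one_notin_prime[OF P]] one_notin_prime[OF P] by simp
  qed
  have sub: "J \<subseteq> loc_maximal_ideal A P" if "hyperideal (localization A (K - P)) J" "J \<noteq> loc_carrier A (K - P)" for J
    using hyperideal_loc_not_in_maximal[OF P that(1)] that(2) by blast
  have mN: "maximal_hyperideal (localization A (K - P)) (loc_maximal_ideal A P)"
    unfolding maximal_hyperideal_def localization_simps(1)
  proof (intro conjI allI impI)
    show "hyperideal (localization A (K - P)) (loc_maximal_ideal A P)"
      using hyperideal_loc_maximal_ideal[OF P] .
    show "loc_maximal_ideal A P \<noteq> loc_carrier A (K - P)" using ne .
    fix J assume J: "hyperideal (localization A (K - P)) J \<and> loc_maximal_ideal A P \<subseteq> J"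
    show "J = loc_maximal_ideal A P \<or> J = loc_carrier A (K - P)"
    proof (cases "J = loc_carrier A (K - P)")
      case False thus ?thesis using sub[of J] J by blast
    qed simp
  qed
  show ?thesis
  proof
    assume m: "maximal_hyperideal (localization A (K - P)) m"
    have hm: "hyperideal (localization A (K - P)) m" and mne: "m \<noteq> loc_carrier A (K - P)"
      and mx: "\<And>J. hyperideal (localization A (K - P)) J \<Longrightarrow> m \<subseteq> J \<Longrightarrow> J = m \<or> J = loc_carrier A (K - P)"
      using m unfolding maximal_hyperideal_def localization_simps(1) by blast+
    have "m \<subseteq> loc_maximal_ideal A P" using sub[OF hm mne] .
    thus "m = loc_maximal_ideal A P" using mx[OF hyperideal_loc_maximal_ideal[OF P]] ne by blast
  qed (use mN in simp)
qed

end

section \<open>Stalks are localizations\<close>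

text \<open>All representatives of a germ agree at the point (\<open>germ_mem\<close>), so \<open>germ_value\<close> does not
  depend on the choice made by \<open>SOME\<close>.\<close>

definition germ_value :: "'a hyperring \<Rightarrow> 'a set \<Rightarrow> ('a set set \<times> 'a sect) set \<Rightarrow> ('a \<times> 'a) set" where
  "germ_value A P g = snd (SOME x. x \<in> g) P"

lemma carrier_stalk: "carrier (stalk A P) = stalk_carrier A P"
  unfolding stalk_def by simp

definition stalk_maximal_ideal :: "'a hyperring \<Rightarrow> 'a set \<Rightarrow> ('a set set \<times> 'a sect) set set" where
  "stalk_maximal_ideal A P = {g \<in> stalk_carrier A P. germ_value A P g \<in> loc_maximal_ideal A P}"

definition frac_sect :: "'a hyperring \<Rightarrow> 'a set set \<Rightarrow> 'a \<Rightarrow> 'a \<Rightarrow> 'a sect" where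
  "frac_sect A U a f = (\<lambda>Q\<in>U. frac A (carrier A - Q) a f)"

context hdomain begin

lemma frac_sect_section:
  assumes U: "zariski_open A U"
    and a: "a \<in> K" "f \<in> K" "f \<noteq> \<zero>"
    and nf: "\<And>Q. Q \<in> U \<Longrightarrow> f \<notin> Q"
  shows "frac_sect A U a f \<in> sections A U" "has_fraction A U (frac_sect A U a f) a f"
proof -
  show v: "has_fraction A U (frac_sect A U a f) a f" unfolding has_fraction_def frac_sect_def
    using a nf frac_nonempty zariski_open_subset[OF U] by auto
  have "frac_sect A U a f \<in> extensional U" unfolding frac_sect_def by simp
  thus "frac_sect A U a f \<in> sections A U" using sections_iff_fraction[OF U] v by blast
qed

lemma germ_self: "zariski_open A U \<Longrightarrow> P \<in> U \<Longrightarrow> s \<in> sections A U \<Longrightarrow> (U,s) \<in> germ A P U s"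
  unfolding germ_def by blast

lemma germ_mem:
  assumes "x \<in> germ A P U s"
  shows "zariski_open A (fst x)" "P \<in> fst x" "snd x \<in> sections A (fst x)" "snd x P = s P"
proof -
  obtain V t where x: "x = (V,t)" by fastforce
  obtain W where W: "zariski_open A W" "P \<in> W" "W \<subseteq> U \<inter> V" "restrict s W = restrict t W"
    "zariski_open A V" "P \<in> V" "t \<in> sections A V" using assms unfolding germ_def x by blast
  have "restrict s W P = restrict t W P" using W(4) by simp
  hence "s P = t P" using W(2) by simp
  thus "zariski_open A (fst x)" "P \<in> fst x" "snd x \<in> sections A (fst x)" "snd x P = s P"
    using x W by auto
qed

lemma germ_agree:
  assumes W0: "zariski_open A W0" "P \<in> W0" "W0 \<subseteq> U \<inter> V"
    and eq: "\<And>Q. Q \<in> W0 \<Longrightarrow> s Q = t Q"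
  shows "germ A P U s \<subseteq> germ A P V t"
proof
  fix x assume x: "x \<in> germ A P U s"
  obtain V' t' where xx: "x = (V',t')" by fastforce
  obtain W where W: "zariski_open A W" "P \<in> W" "W \<subseteq> U \<inter> V'" "restrict s W = restrict t' W"
    "zariski_open A V'" "P \<in> V'" "t' \<in> sections A V'" using x unfolding germ_def xx by blast
  let ?W = "W \<inter> W0"
  have "zariski_open A ?W" using zariski_open_Int[OF W(1) W0(1)] .
  moreover have "P \<in> ?W" using W W0 by blast
  moreover have "?W \<subseteq> V \<inter> V'" using W W0 by blast
  moreover have "restrict t ?W = restrict t' ?W"
  proof (rule ext)
    fix Q show "restrict t ?W Q = restrict t' ?W Q"
    proof (cases "Q \<in> ?W")
      case True
      hence "restrict s W Q = restrict t' W Q" using W(4) by simp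
      hence "s Q = t' Q" using True by simp
      moreover have "Q \<in> W0" using True by blast
      ultimately have tQ: "t Q = t' Q" using eq by metis
      show ?thesis using True tQ by (simp only: restrict_apply')
    next
      case False thus ?thesis by (simp only: restrict_apply if_False)
    qed
  qed
  ultimately show "x \<in> germ A P V t" unfolding germ_def xx using W(5-7) by blast
qed

lemma germ_eq:
  assumes U: "zariski_open A U" "P \<in> U" "s \<in> sections A U"
    and V: "zariski_open A V" "P \<in> V" "t \<in> sections A V" and st: "s P = t P"
  shows "germ A P U s = germ A P V t"
proof -
  have eq: "s Q = t Q" if "Q \<in> U \<inter> V" for Q using sections_agree[OF U(3) V(3) U(2) V(2) st] that by blast
  have o: "zariski_open A (U \<inter> V)" using zariski_open_Int[OF U(1) V(1)] .
  show ?thesis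
  proof
    show "germ A P U s \<subseteq> germ A P V t" using germ_agree[OF o _ subset_refl] U V eq by blast
    show "germ A P V t \<subseteq> germ A P U s"
      using germ_agree[OF o _ _, of P V U t s] U V eq by (simp add: Int_commute)
  qed
qed

lemma germ_value_germ:
  assumes "zariski_open A U" "P \<in> U" "s \<in> sections A U"
  shows "germ_value A P (germ A P U s) = s P"
proof -
  have "(SOME x. x \<in> germ A P U s) \<in> germ A P U s" using germ_self[OF assms] by (rule someI)
  thus ?thesis unfolding germ_value_def using germ_mem(4) by blast
qed

lemma stalk_carrierE:
  assumes "g \<in> stalk_carrier A P"
  obtains U s where "zariski_open A U" "P \<in> U" "s \<in> sections A U" "g = germ A P U s"
  using assms unfolding stalk_carrier_def by blast

lemma stalk_some_rep:
  assumes g: "g \<in> stalk_carrier A P"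
  shows "(SOME x. x \<in> g) \<in> g" "zariski_open A (fst (SOME x. x \<in> g))" "P \<in> fst (SOME x. x \<in> g)"
    "snd (SOME x. x \<in> g) \<in> sections A (fst (SOME x. x \<in> g))" "snd (SOME x. x \<in> g) P = germ_value A P g"
proof -
  obtain U s where U: "zariski_open A U" "P \<in> U" "s \<in> sections A U" "g = germ A P U s"
    using stalk_carrierE[OF g] by blast
  show i: "(SOME x. x \<in> g) \<in> g" using germ_self[OF U(1-3)] U(4) by (metis someI)
  show "zariski_open A (fst (SOME x. x \<in> g))" "P \<in> fst (SOME x. x \<in> g)"
    "snd (SOME x. x \<in> g) \<in> sections A (fst (SOME x. x \<in> g))" using germ_mem(1-3) i U(4) by blast+
  show "snd (SOME x. x \<in> g) P = germ_value A P g" unfolding germ_value_def ..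
qed

lemma stalk_carrier_Spec: "g \<in> stalk_carrier A P \<Longrightarrow> P \<in> Spec A"
  using stalk_carrierE zariski_open_subset by blast

lemma germ_value_closed:
  assumes g: "g \<in> stalk_carrier A P"
  shows "germ_value A P g \<in> loc_carrier A (K - P)"
proof -
  obtain U s where U: "zariski_open A U" "P \<in> U" "s \<in> sections A U" "g = germ A P U s"
    using stalk_carrierE[OF g] by blast
  show ?thesis using germ_value_germ[OF U(1-3)] section_value[OF U(3,2)] U(4) by simp
qed

lemma germ_value_inj:
  assumes g: "g \<in> stalk_carrier A P"
    and h: "h \<in> stalk_carrier A P"
    and e: "germ_value A P g = germ_value A P h"
  shows "g = h"
proof -
  obtain U s where U: "zariski_open A U" "P \<in> U" "s \<in> sections A U" "g = germ A P U s"
    using stalk_carrierE[OF g] by blast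
  obtain V t where V: "zariski_open A V" "P \<in> V" "t \<in> sections A V" "h = germ A P V t"
    using stalk_carrierE[OF h] by blast
  have "s P = t P" using e germ_value_germ[OF U(1-3)] germ_value_germ[OF V(1-3)] U(4) V(4) by simp
  thus ?thesis using germ_eq[OF U(1-3) V(1-3)] U(4) V(4) by simp
qed

lemma germ_in_stalk: "zariski_open A U \<Longrightarrow> P \<in> U \<Longrightarrow> s \<in> sections A U \<Longrightarrow> germ A P U s \<in> stalk_carrier A P"
  unfolding stalk_carrier_def by blast

lemma germ_value_surj:
  assumes P: "P \<in> Spec A" and c: "c \<in> loc_carrier A (K - P)"
  shows "\<exists>g\<in>stalk_carrier A P. c = germ_value A P g"
proof -
  obtain a f where 1: "a \<in> K" "f \<in> K" "f \<notin> P" "c = frac A (K - P) a f"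
    using loc_carrier_fracE[OF P c] by blast
  let ?U = "{Q\<in>Spec A. f \<notin> Q}"
  have U: "zariski_open A ?U" "P \<in> ?U" using zariski_open_basic[OF 1(2)] P 1(3) by auto
  have fz: "f \<noteq> \<zero>" using 1(3) P by auto
  note s = frac_sect_section[OF U(1) 1(1,2) fz]
  have "germ_value A P (germ A P ?U (frac_sect A ?U a f)) = c"
    using germ_value_germ[OF U s(1)] U(2) 1(4) unfolding frac_sect_def by simp
  thus ?thesis using germ_in_stalk[OF U s(1)] by (metis (no_types, lifting) mem_Collect_eq)
qed

lemma stalk_mul_germ_value:
  assumes g: "g \<in> stalk_carrier A P" and h: "h \<in> stalk_carrier A P"
  shows "hmul (stalk A P) g h \<in> stalk_carrier A P"
    "germ_value A P (hmul (stalk A P) g h) = loc_mul A (K - P) (germ_value A P g) (germ_value A P h)"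
proof -
  obtain U s where x: "(SOME x. x \<in> g) = (U,s)" by fastforce
  obtain V t where y: "(SOME x. x \<in> h) = (V,t)" by fastforce
  note sg = stalk_some_rep[OF g, unfolded x, simplified]
  note sh = stalk_some_rep[OF h, unfolded y, simplified]
  have o: "zariski_open A (U \<inter> V)" using zariski_open_Int sg sh by blast
  have P: "P \<in> U \<inter> V" using sg sh by blast
  have r1: "restrict s (U \<inter> V) \<in> sections A (U \<inter> V)"
    using restrict_section[OF o sg(2) _ sg(4)] by blast
  have r2: "restrict t (U \<inter> V) \<in> sections A (U \<inter> V)"
    using restrict_section[OF o sh(2) _ sh(4)] by blast
  have m: "hmul (OX A (U \<inter> V)) (restrict s (U \<inter> V)) (restrict t (U \<inter> V)) \<in> sections A (U \<inter> V)"
    using OX_mul_section[OF o r1 r2] .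
  have e: "hmul (stalk A P) g h = germ A P (U \<inter> V) (hmul (OX A (U \<inter> V)) (restrict s (U \<inter> V)) (restrict t (U \<inter> V)))"
    unfolding stalk_def using x y by simp
  show "hmul (stalk A P) g h \<in> stalk_carrier A P" using e germ_in_stalk[OF o P m] by simp
  have "germ_value A P (hmul (stalk A P) g h) = loc_mul A (K - P) (s P) (t P)"
    unfolding e germ_value_germ[OF o P m] using P unfolding OX_def by simp
  thus "germ_value A P (hmul (stalk A P) g h) = loc_mul A (K - P) (germ_value A P g) (germ_value A P h)"
    using sg(5) sh(5) by simp
qed

lemma stalk_zero_germ_value:
  assumes P: "P \<in> Spec A"
  shows "hzero (stalk A P) \<in> stalk_carrier A P" "germ_value A P (hzero (stalk A P)) = loc_class A (K - P) \<zero> \<one>"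
proof -
  have z: "hzero (stalk A P) = germ A P (Spec A) (hzero (OX A (Spec A)))" unfolding stalk_def by simp
  show "hzero (stalk A P) \<in> stalk_carrier A P"
    using z germ_in_stalk[OF zariski_open_Spec P OX_zero_section[OF zariski_open_Spec]] by simp
  show "germ_value A P (hzero (stalk A P)) = loc_class A (K - P) \<zero> \<one>"
    using z germ_value_germ[OF zariski_open_Spec P OX_zero_section[OF zariski_open_Spec]] P unfolding OX_def by simp
qed

lemma germ_frac_sect:
  assumes g: "g \<in> stalk_carrier A P" "germ_value A P g = frac A (K - P) a f"
    and W: "zariski_open A W" "P \<in> W" and af: "a \<in> K" "f \<in> K" "f \<noteq> \<zero>" "\<And>Q. Q \<in> W \<Longrightarrow> f \<notin> Q"
  shows "germ A P W (frac_sect A W a f) = g"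
proof -
  obtain U s where U: "zariski_open A U" "P \<in> U" "s \<in> sections A U" "g = germ A P U s"
    using stalk_carrierE[OF g(1)] by blast
  have "s P = germ_value A P g" using germ_value_germ[OF U(1-3)] U(4) by simp
  hence "frac_sect A W a f P = s P" using g(2) W(2) unfolding frac_sect_def by simp
  thus ?thesis using germ_eq[OF W frac_sect_section(1)[OF W(1) af] U(1-3)] U(4) by simp
qed

lemma frac_sect_add:
  assumes W: "zariski_open A W" and ab: "a \<in> K" "b \<in> K" and fk: "f \<in> K" "k \<in> K" "f \<noteq> \<zero>" "k \<noteq> \<zero>"
    and notin: "\<And>Q. Q \<in> W \<Longrightarrow> f \<notin> Q \<and> k \<notin> Q" and y: "y \<in> (a \<cdot> k) \<oplus> (f \<cdot> b)"
  shows "frac_sect A W y (f \<cdot> k) \<in> hadd (OX A W) (frac_sect A W a f) (frac_sect A W b k)"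
proof -
  have WS: "W \<subseteq> Spec A" using zariski_open_subset[OF W] .
  have "f \<cdot> k \<notin> Q" if "Q \<in> W" for Q using prime_mul_notin notin[OF that] WS that fk by blast
  hence r: "frac_sect A W y (f \<cdot> k) \<in> sections A W"
    using frac_sect_section(1)[OF W add_closed[OF _ _ y] mul_closed[OF fk(1,2)] mul_nonzero[OF fk]] ab fk by auto
  have "frac A (K - Q) y (f \<cdot> k) \<in> loc_add A (K - Q) (frac A (K - Q) a f) (frac A (K - Q) b k)"
    if Q: "Q \<in> W" for Q
    unfolding loc_add_frac[OF subsetD[OF WS Q] ab fk(1,2) conjunct1[OF notin[OF Q]] conjunct2[OF notin[OF Q]]]
    using y by blast
  thus ?thesis unfolding OX_def frac_sect_def using r unfolding frac_sect_def by simp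
qed

lemma loc_add_subset_stalk_add:
  assumes g: "g \<in> stalk_carrier A P" and h: "h \<in> stalk_carrier A P"
  shows "loc_add A (K - P) (germ_value A P g) (germ_value A P h) \<subseteq> germ_value A P ` hadd (stalk A P) g h"
proof
  fix c assume c: "c \<in> loc_add A (K - P) (germ_value A P g) (germ_value A P h)"
  have P: "P \<in> Spec A" using stalk_carrier_Spec[OF g] .
  obtain a f where 1: "a \<in> K" "f \<in> K" "f \<notin> P" "germ_value A P g = frac A (K - P) a f"
    using loc_carrier_fracE[OF P germ_value_closed[OF g]] by blast
  obtain b k where 2: "b \<in> K" "k \<in> K" "k \<notin> P" "germ_value A P h = frac A (K - P) b k"
    using loc_carrier_fracE[OF P germ_value_closed[OF h]] by blast
  obtain y where y: "y \<in> (a \<cdot> k) \<oplus> (f \<cdot> b)" "c = frac A (K - P) y (f \<cdot> k)"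
    using c unfolding 1(4) 2(4) loc_add_frac[OF P 1(1) 2(1) 1(2) 2(2) 1(3) 2(3)] by blast
  have fk: "f \<noteq> \<zero>" "k \<noteq> \<zero>" using 1(3) 2(3) P by auto
  hence fk: "f \<cdot> k \<in> K" "f \<cdot> k \<noteq> \<zero>" "f \<noteq> \<zero>" "k \<noteq> \<zero>"
    using 1(2) 2(2) mul_nonzero by auto
  let ?W = "{Q\<in>Spec A. f \<cdot> k \<notin> Q}"
  have W: "zariski_open A ?W" "P \<in> ?W"
    using zariski_open_basic[OF fk(1)] P prime_mul_notin[OF P 1(2) 2(2) 1(3) 2(3)] by auto
  have notin: "f \<notin> Q \<and> k \<notin> Q" if "Q \<in> ?W" for Q
    using that prime_mul_right[of Q f k] SpecD(5)[of Q f k] 1(2) 2(2) by blast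
  have r: "frac_sect A ?W y (f \<cdot> k) \<in> sections A ?W"
    using frac_sect_section(1)[OF W(1) add_closed[OF _ _ y(1)] fk(1,2)] 1 2 by auto
  have s: "frac_sect A ?W a f \<in> sections A ?W" "frac_sect A ?W b k \<in> sections A ?W"
    by (rule frac_sect_section(1)[OF W(1) 1(1,2) fk(3)], use notin in blast)
      (rule frac_sect_section(1)[OF W(1) 2(1,2) fk(4)], use notin in blast)
  have "zariski_open A ?W \<and> P \<in> ?W \<and> (\<exists>s t. s \<in> sections A ?W \<and> t \<in> sections A ?W \<and>
      germ A P ?W s = g \<and> germ A P ?W t = h \<and> frac_sect A ?W y (f \<cdot> k) \<in> hadd (OX A ?W) s t)"
    using W s germ_frac_sect[OF g 1(4) W 1(1,2) fk(3)] germ_frac_sect[OF h 2(4) W 2(1,2) fk(4)] notin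
      frac_sect_add[OF W(1) 1(1) 2(1) 1(2) 2(2) fk(3,4) notin y(1)] by blast
  hence "germ A P ?W (frac_sect A ?W y (f \<cdot> k)) \<in> hadd (stalk A P) g h"
    unfolding stalk_def by auto
  moreover have "germ_value A P (germ A P ?W (frac_sect A ?W y (f \<cdot> k))) = c"
    using germ_value_germ[OF W r] W(2) y(2) unfolding frac_sect_def by simp
  ultimately show "c \<in> germ_value A P ` hadd (stalk A P) g h" by blast
qed

lemma stalk_add_germ_value:
  assumes g: "g \<in> stalk_carrier A P" and h: "h \<in> stalk_carrier A P"
  shows "hadd (stalk A P) g h \<subseteq> stalk_carrier A P"
    "germ_value A P ` hadd (stalk A P) g h = loc_add A (K - P) (germ_value A P g) (germ_value A P h)"
proof -
  have H: "hadd (stalk A P) g h = {germ A P W r | W r. zariski_open A W \<and> P \<in> W \<and>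
        (\<exists>s t. s \<in> sections A W \<and> t \<in> sections A W \<and> germ A P W s = g \<and> germ A P W t = h \<and>
               r \<in> hadd (OX A W) s t)}" unfolding stalk_def by simp
  have OXa: "\<And>W s t. hadd (OX A W) s t = {r \<in> sections A W. \<forall>Q\<in>W. r Q \<in> loc_add A (K - Q) (s Q) (t Q)}"
    unfolding OX_def by simp
  show "hadd (stalk A P) g h \<subseteq> stalk_carrier A P" unfolding H OXa using germ_in_stalk by blast
  have "germ_value A P ` hadd (stalk A P) g h \<subseteq> loc_add A (K - P) (germ_value A P g) (germ_value A P h)"
  proof
    fix c assume "c \<in> germ_value A P ` hadd (stalk A P) g h"
    then obtain W r s t where W: "zariski_open A W" "P \<in> W" "s \<in> sections A W" "t \<in> sections A W"
      "germ A P W s = g" "germ A P W t = h" "r \<in> sections A W" "\<forall>Q\<in>W. r Q \<in> loc_add A (K - Q) (s Q) (t Q)"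
      "c = germ_value A P (germ A P W r)" unfolding H OXa by blast
    have "c = r P" using W(9) germ_value_germ[OF W(1,2,7)] by simp
    moreover have "s P = germ_value A P g" "t P = germ_value A P h"
      using germ_value_germ[OF W(1,2,3)] germ_value_germ[OF W(1,2,4)] W(5,6) by auto
    ultimately show "c \<in> loc_add A (K - P) (germ_value A P g) (germ_value A P h)" using W(8) W(2) by auto
  qed
  thus "germ_value A P ` hadd (stalk A P) g h = loc_add A (K - P) (germ_value A P g) (germ_value A P h)"
    using loc_add_subset_stalk_add[OF g h] by blast
qed

lemma stalk_iso_localization:
  assumes P: "P \<in> Spec A"
  shows "hyperring_iso (stalk A P) (localization A (K - P)) (germ_value A P)"
proof
  have cS: "carrier (stalk A P) = stalk_carrier A P" unfolding stalk_def by simp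
  have "inj_on (germ_value A P) (stalk_carrier A P)" unfolding inj_on_def using germ_value_inj by blast
  moreover have "germ_value A P ` stalk_carrier A P = loc_carrier A (K - P)"
  proof
    show "germ_value A P ` stalk_carrier A P \<subseteq> loc_carrier A (K - P)"
      using germ_value_closed by blast
    show "loc_carrier A (K - P) \<subseteq> germ_value A P ` stalk_carrier A P"
    proof
      fix c assume "c \<in> loc_carrier A (K - P)"
      then obtain g where "g \<in> stalk_carrier A P" "c = germ_value A P g"
        using germ_value_surj[OF P] by blast
      thus "c \<in> germ_value A P ` stalk_carrier A P" by blast
    qed
  qed
  ultimately show "bij_betw (germ_value A P) (carrier (stalk A P)) (carrier (localization A (K - P)))"
    unfolding cS localization_simps bij_betw_def by blast
  fix x y assume x: "x \<in> carrier (stalk A P)" and y: "y \<in> carrier (stalk A P)"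
  show "hadd (stalk A P) x y \<subseteq> carrier (stalk A P)" using stalk_add_germ_value(1) x y cS by simp
  show "germ_value A P ` hadd (stalk A P) x y = hadd (localization A (K - P)) (germ_value A P x) (germ_value A P y)"
    using stalk_add_germ_value(2) x y cS localization_simps by simp
  show "hmul (stalk A P) x y \<in> carrier (stalk A P)" using stalk_mul_germ_value(1) x y cS by simp
  show "germ_value A P (hmul (stalk A P) x y) = hmul (localization A (K - P)) (germ_value A P x) (germ_value A P y)"
    using stalk_mul_germ_value(2) x y cS localization_simps by simp
next
  show "hzero (stalk A P) \<in> carrier (stalk A P)"
    using stalk_zero_germ_value(1)[OF P] unfolding stalk_def by simp
  show "germ_value A P (hzero (stalk A P)) = hzero (localization A (K - P))"
    using stalk_zero_germ_value(2)[OF P] localization_simps by simp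
  fix x assume "x \<in> carrier (localization A (K - P))"
  thus "\<exists>!y. y \<in> carrier (localization A (K - P)) \<and>
     hzero (localization A (K - P)) \<in> hadd (localization A (K - P)) x y"
    using localization_neg_ex1[OF P] localization_simps by simp
qed

lemma maximal_hyperideal_stalk_iff:
  assumes P: "P \<in> Spec A"
  shows "maximal_hyperideal (stalk A P) m \<longleftrightarrow> m = stalk_maximal_ideal A P"
proof -
  interpret I: hyperring_iso "stalk A P" "localization A (K - P)" "germ_value A P"
    using stalk_iso_localization[OF P] .
  have "loc_maximal_ideal A P \<subseteq> carrier (localization A (K - P))"
    unfolding loc_maximal_ideal_def localization_simps by blast
  hence "m \<subseteq> carrier (stalk A P) \<and> germ_value A P ` m = loc_maximal_ideal A P \<longleftrightarrow> m = stalk_maximal_ideal A P"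
    using I.image_eq_iff_preimage[of m] unfolding stalk_maximal_ideal_def carrier_stalk by auto
  thus ?thesis using I.maximal_hyperideal_image_iff maximal_hyperideal_localization_iff[OF P] by simp
qed

end

section \<open>The morphism of spectra induced by a homomorphism\<close>

text \<open>At a point \<open>Q\<close> of \<open>Spec H\<close>, a section \<open>s\<close> over \<open>U\<close> is sent to \<open>\<phi> a / \<phi> f\<close>, where
  \<open>a/f\<close> is the representative of \<open>s(\<phi>\<inverse>(Q))\<close> chosen by \<open>sect_rep\<close>; by \<open>induced_frac\<close>
  every representative with \<open>f \<notin> \<phi>\<inverse>(Q)\<close> gives the same value.\<close>

definition induced_sheaf_map :: "'a hyperring \<Rightarrow> 'b hyperring \<Rightarrow> ('a \<Rightarrow> 'b) \<Rightarrow> ('a, 'b) sheaf_map" where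
  "induced_sheaf_map R H \<phi> = (\<lambda>U. if zariski_open R U then
     (\<lambda>s\<in>sections R U. \<lambda>Q\<in>preimg (spec_map R H \<phi>) (Spec H) U.
        frac H (carrier H - Q) (\<phi> (fst (sect_rep s (spec_map R H \<phi> Q)))) (\<phi> (snd (sect_rep s (spec_map R H \<phi> Q)))))
     else undefined)"

locale hdomain_pair = R: hdomain R + H: hdomain H for R :: "'a hyperring" and H :: "'b hyperring"
begin

abbreviation "KR \<equiv> carrier R"
abbreviation "KH \<equiv> carrier H"

lemma global_hom_apply:
  assumes "r \<in> KR" "h \<in> KH" "global_canon H h = snd m (Spec R) (global_canon R r)"
  shows "global_hom R H m r = h"
proof -
  have "(THE h. h \<in> KH \<and> global_canon H h = snd m (Spec R) (global_canon R r)) = h"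
    using assms H.global_canon_inj by (intro the_equality) auto
  thus ?thesis unfolding global_hom_def using assms(1) by simp
qed

end

locale hdomain_hom = hdomain_pair + fixes \<phi> :: "'a \<Rightarrow> 'b" assumes hom: "hyperring_hom R H \<phi>"
begin

abbreviation "comap \<equiv> spec_map R H \<phi>"

lemma hom_closed: "a \<in> carrier R \<Longrightarrow> \<phi> a \<in> carrier H"
  using hom unfolding hyperring_hom_def by blast
lemma hom_add: "a \<in> carrier R \<Longrightarrow> b \<in> carrier R \<Longrightarrow> y \<in> hadd R a b \<Longrightarrow> \<phi> y \<in> hadd H (\<phi> a) (\<phi> b)"
  using hom unfolding hyperring_hom_def by blast
lemma hom_mul: "a \<in> carrier R \<Longrightarrow> b \<in> carrier R \<Longrightarrow> \<phi> (hmul R a b) = hmul H (\<phi> a) (\<phi> b)"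
  using hom unfolding hyperring_hom_def by blast
lemma hom_zero: "\<phi> (hzero R) = hzero H" using hom unfolding hyperring_hom_def by blast
lemma hom_one: "\<phi> (hone R) = hone H" using hom unfolding hyperring_hom_def by blast
lemma hom_neg:
  assumes a: "a \<in> carrier R"
  shows "\<phi> (hneg R a) = hneg H (\<phi> a)"
proof -
  have "hzero H \<in> hadd H (\<phi> a) (\<phi> (hneg R a))"
    using hom_add[OF a R.neg_closed[OF a] R.zero_in_add_neg[OF a]] hom_zero by simp
  thus ?thesis using H.neg_unique[OF hom_closed[OF a] hom_closed[OF R.neg_closed[OF a]]] by simp
qed

lemma comap_apply: "Q \<in> Spec H \<Longrightarrow> comap Q = {x \<in> carrier R. \<phi> x \<in> Q}"
  unfolding spec_map_def by simp

lemma hyperideal_comap: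
  assumes Q: "Q \<in> Spec H"
  shows "hyperideal R {x \<in> carrier R. \<phi> x \<in> Q}" (is "hyperideal R ?P")
proof -
  note QD = H.SpecD[OF Q]
  have i1: "?P \<subseteq> carrier R" by (rule Collect_restrict)
  have "hzero R \<in> ?P" using hom_zero H.zero_in_prime[OF Q] R.zero_closed by simp
  hence i2: "?P \<noteq> {}" using equals0D by metis
  have i3: "\<forall>a\<in>?P. \<forall>b\<in>?P. hadd R a b \<subseteq> ?P"
  proof (intro ballI subsetI)
    fix a b y assume a: "a \<in> ?P" and b: "b \<in> ?P" and y: "y \<in> hadd R a b"
    have ab: "a \<in> carrier R" "b \<in> carrier R" "\<phi> a \<in> Q" "\<phi> b \<in> Q" using a b by auto
    have "\<phi> y \<in> hadd H (\<phi> a) (\<phi> b)" using hom_add[OF ab(1,2) y] .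
    hence "\<phi> y \<in> Q" using QD(3)[OF ab(3,4)] by blast
    moreover have "y \<in> carrier R" using R.add_closed[OF ab(1,2) y] .
    ultimately show "y \<in> ?P" by blast
  qed
  have i4: "\<forall>a\<in>?P. hneg R a \<in> ?P"
  proof
    fix a assume a: "a \<in> ?P"
    have "\<phi> (hneg R a) = hneg H (\<phi> a)" using hom_neg a by blast
    moreover have "hneg H (\<phi> a) \<in> Q" using QD(4) a by blast
    ultimately show "hneg R a \<in> ?P" using R.neg_closed a by simp
  qed
  have i5: "\<forall>r\<in>carrier R. \<forall>a\<in>?P. hmul R r a \<in> ?P"
  proof (intro ballI)
    fix r a assume r: "r \<in> carrier R" and a: "a \<in> ?P"
    have "\<phi> (hmul R r a) = hmul H (\<phi> r) (\<phi> a)" using hom_mul r a by blast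
    moreover have "hmul H (\<phi> r) (\<phi> a) \<in> Q" using QD(5)[OF hom_closed[OF r]] a by blast
    ultimately show "hmul R r a \<in> ?P" using R.mul_closed r a by simp
  qed
  show ?thesis unfolding hyperideal_def using i1 i2 i3 i4 i5 by (intro conjI)
qed

lemma comap_Spec:
  assumes Q: "Q \<in> Spec H"
  shows "comap Q \<in> Spec R"
proof -
  note QD = H.SpecD[OF Q]
  let ?P = "{x \<in> carrier R. \<phi> x \<in> Q}"
  have i6: "?P \<noteq> carrier R"
  proof
    assume "?P = carrier R"
    hence "hone R \<in> ?P" using R.one_closed by simp
    thus False using hom_one H.one_notin_prime[OF Q] by simp
  qed
  have i7: "\<forall>a\<in>carrier R. \<forall>b\<in>carrier R. hmul R a b \<in> ?P \<longrightarrow> a \<in> ?P \<or> b \<in> ?P"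
  proof (intro ballI impI)
    fix a b assume a: "a \<in> carrier R" and b: "b \<in> carrier R" and ab: "hmul R a b \<in> ?P"
    have "hmul H (\<phi> a) (\<phi> b) \<in> Q" using ab hom_mul[OF a b] by simp
    hence "\<phi> a \<in> Q \<or> \<phi> b \<in> Q" using QD(6)[OF hom_closed[OF a] hom_closed[OF b]] by blast
    thus "a \<in> ?P \<or> b \<in> ?P" using a b by blast
  qed
  have "?P \<in> Spec R"
    unfolding Spec_def prime_hyperideal_def using hyperideal_comap[OF Q] i6 i7 by (intro CollectI conjI)
  thus ?thesis using comap_apply[OF Q] by simp
qed

lemma comap_notin: "Q \<in> Spec H \<Longrightarrow> f \<in> carrier R \<Longrightarrow> f \<notin> comap Q \<Longrightarrow> \<phi> f \<notin> Q"
  using comap_apply by auto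

lemma comap_mem_iff: "Q \<in> Spec H \<Longrightarrow> f \<in> carrier R \<Longrightarrow> f \<in> comap Q \<longleftrightarrow> \<phi> f \<in> Q"
  using comap_apply by auto

lemma preimg_comap_open:
  assumes U: "zariski_open R U"
  shows "zariski_open H (preimg comap (Spec H) U)"
proof -
  obtain S where S: "S \<subseteq> carrier R" "U = {P\<in>Spec R. \<not> S \<subseteq> P}"
    using U unfolding zariski_open_def by blast
  have "preimg comap (Spec H) U = {Q\<in>Spec H. \<not> \<phi> ` S \<subseteq> Q}"
  proof (rule set_eqI)
    fix Q show "Q \<in> preimg comap (Spec H) U \<longleftrightarrow> Q \<in> {Q\<in>Spec H. \<not> \<phi> ` S \<subseteq> Q}"
    proof (cases "Q \<in> Spec H")
      case True
      have "(\<not> S \<subseteq> comap Q) \<longleftrightarrow> \<not> \<phi> ` S \<subseteq> Q"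
        using comap_apply[OF True] S(1) by auto
      thus ?thesis unfolding preimg_def S(2) using comap_Spec[OF True] True by auto
    next
      case False thus ?thesis unfolding preimg_def by simp
    qed
  qed
  moreover have "\<phi> ` S \<subseteq> carrier H" using hom_closed S(1) by blast
  ultimately show ?thesis unfolding zariski_open_def by blast
qed

lemma preimg_comapD: "Q \<in> preimg comap (Spec H) U \<Longrightarrow> Q \<in> Spec H \<and> comap Q \<in> U"
  unfolding preimg_def by simp

lemma preimg_comap_Spec: "preimg comap (Spec H) (Spec R) = Spec H"
proof
  show "preimg comap (Spec H) (Spec R) \<subseteq> Spec H" unfolding preimg_def by blast
  show "Spec H \<subseteq> preimg comap (Spec H) (Spec R)"
  proof
    fix Q assume Q: "Q \<in> Spec H"
    thus "Q \<in> preimg comap (Spec H) (Spec R)" unfolding preimg_def using comap_Spec[OF Q] by blast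
  qed
qed

lemma induced_apply:
  assumes U: "zariski_open R U"
    and s: "s \<in> sections R U"
    and Q: "Q \<in> preimg comap (Spec H) U"
  shows "induced_sheaf_map R H \<phi> U s Q = frac H (carrier H - Q) (\<phi> (fst (sect_rep s (comap Q)))) (\<phi> (snd (sect_rep s (comap Q))))"
  unfolding induced_sheaf_map_def using U s Q by simp

lemma induced_extensional:
  assumes U: "zariski_open R U" and s: "s \<in> sections R U"
  shows "induced_sheaf_map R H \<phi> U s \<in> extensional (preimg comap (Spec H) U)"
  unfolding induced_sheaf_map_def using U s by simp

lemma sect_rep_comap:
  assumes U: "zariski_open R U"
    and s: "s \<in> sections R U"
    and Q: "Q \<in> preimg comap (Spec H) U"
  shows "fst (sect_rep s (comap Q)) \<in> carrier R" "snd (sect_rep s (comap Q)) \<in> carrier R" "snd (sect_rep s (comap Q)) \<notin> comap Q"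
    "\<phi> (snd (sect_rep s (comap Q))) \<notin> Q" "\<phi> (snd (sect_rep s (comap Q))) \<in> carrier H" "\<phi> (fst (sect_rep s (comap Q))) \<in> carrier H"
    "\<phi> (snd (sect_rep s (comap Q))) \<noteq> hzero H" "s (comap Q) = frac R (carrier R - comap Q) (fst (sect_rep s (comap Q))) (snd (sect_rep s (comap Q)))"
    "sect_rep s (comap Q) \<in> s (comap Q)"
proof -
  have QQ: "Q \<in> Spec H" "comap Q \<in> U" using preimg_comapD[OF Q] by auto
  note p = R.sect_rep_frac[OF s QQ(2)]
  show "fst (sect_rep s (comap Q)) \<in> carrier R" "snd (sect_rep s (comap Q)) \<in> carrier R" "snd (sect_rep s (comap Q)) \<notin> comap Q"
    "s (comap Q) = frac R (carrier R - comap Q) (fst (sect_rep s (comap Q))) (snd (sect_rep s (comap Q)))" "sect_rep s (comap Q) \<in> s (comap Q)"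
    using p by auto
  show n: "\<phi> (snd (sect_rep s (comap Q))) \<notin> Q" using comap_notin[OF QQ(1) p(2,3)] .
  show "\<phi> (snd (sect_rep s (comap Q))) \<in> carrier H" "\<phi> (fst (sect_rep s (comap Q))) \<in> carrier H"
    using hom_closed p by auto
  show "\<phi> (snd (sect_rep s (comap Q))) \<noteq> hzero H" using n H.zero_in_prime[OF QQ(1)] by metis
qed

lemma induced_frac:
  assumes U: "zariski_open R U" and s: "s \<in> sections R U" and Q: "Q \<in> preimg comap (Spec H) U"
    and af: "a \<in> KR" "f \<in> KR" "f \<notin> comap Q" and sQ: "s (comap Q) = frac R (KR - comap Q) a f"
  shows "induced_sheaf_map R H \<phi> U s Q = frac H (KH - Q) (\<phi> a) (\<phi> f)"
proof -
  define a' f' where "a' = fst (sect_rep s (comap Q))" and "f' = snd (sect_rep s (comap Q))"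
  note p = sect_rep_comap[OF U s Q, folded a'_def f'_def]
  have QQ: "Q \<in> Spec H" "comap Q \<in> Spec R" using preimg_comapD[OF Q] comap_Spec by auto
  have "f \<noteq> hzero R" using af(3) R.zero_in_prime[OF QQ(2)] by metis
  hence "hmul R a' f = hmul R a f'"
    using R.frac_of_member(5)[OF QQ(2) af(1,2), of "sect_rep s (comap Q)"] p(9) sQ
    unfolding a'_def f'_def by simp
  hence "hmul H (\<phi> a') (\<phi> f) = hmul H (\<phi> a) (\<phi> f')"
    using hom_mul[OF p(1) af(2)] hom_mul[OF af(1) p(2)] by simp
  moreover have "\<phi> f \<noteq> hzero H"
    using comap_notin[OF QQ(1) af(2,3)] H.zero_in_prime[OF QQ(1)] by metis
  ultimately have "frac H (KH - Q) (\<phi> a') (\<phi> f') = frac H (KH - Q) (\<phi> a) (\<phi> f)"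
    using H.frac_eqI[of "KH - Q" "\<phi> a'" "\<phi> a" "\<phi> f'" "\<phi> f"] p(5-7) hom_closed[OF af(1)] hom_closed[OF af(2)]
    by blast
  thus ?thesis using induced_apply[OF U s Q] unfolding a'_def f'_def by simp
qed

lemma induced_section:
  assumes U: "zariski_open R U" and s: "s \<in> sections R U"
  shows "induced_sheaf_map R H \<phi> U s \<in> sections H (preimg comap (Spec H) U)"
proof (cases "preimg comap (Spec H) U = {}")
  case True
  thus ?thesis
    using induced_extensional[OF U s] H.has_fraction_empty[OF H.zero_closed H.one_closed H.zero_neq_one(2)]
    H.sections_iff_fraction[OF preimg_comap_open[OF U]] by (simp, blast)
next
  case False
  then obtain Q0 where Q0: "Q0 \<in> preimg comap (Spec H) U" by blast
  note f0 = sect_rep_comap[OF U s Q0]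
  have "has_fraction H (preimg comap (Spec H) U) (induced_sheaf_map R H \<phi> U s) (\<phi> (fst (sect_rep s (comap Q0)))) (\<phi> (snd (sect_rep s (comap Q0))))"
    unfolding has_fraction_def
  proof (intro conjI ballI f0(5,6,7))
    fix Q assume Q: "Q \<in> preimg comap (Spec H) U"
    note f = sect_rep_comap[OF U s Q]
    have QQ: "Q \<in> Spec H" "comap Q \<in> U" using preimg_comapD[OF Q] by auto
    have "hmul R (fst (sect_rep s (comap Q))) (snd (sect_rep s (comap Q0))) = hmul R (fst (sect_rep s (comap Q0))) (snd (sect_rep s (comap Q)))"
      using R.sect_rep_cross[OF s QQ(2) preimg_comapD[OF Q0, THEN conjunct2]] .
    hence e: "hmul H (\<phi> (fst (sect_rep s (comap Q)))) (\<phi> (snd (sect_rep s (comap Q0)))) = hmul H (\<phi> (fst (sect_rep s (comap Q0)))) (\<phi> (snd (sect_rep s (comap Q))))"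
      using hom_mul f(1,2) f0(1,2) by metis
    have "induced_sheaf_map R H \<phi> U s Q = frac H (carrier H - Q) (\<phi> (fst (sect_rep s (comap Q)))) (\<phi> (snd (sect_rep s (comap Q))))"
      using induced_apply[OF U s Q] .
    also have "\<dots> = frac H (carrier H - Q) (\<phi> (fst (sect_rep s (comap Q0)))) (\<phi> (snd (sect_rep s (comap Q0))))"
      using H.frac_eqI[OF _ f(6) f0(6) f(5) f0(5) f(7) f0(7) e] by blast
    finally show "induced_sheaf_map R H \<phi> U s Q = frac H (carrier H - Q) (\<phi> (fst (sect_rep s (comap Q0)))) (\<phi> (snd (sect_rep s (comap Q0))))" .
    have "frac H (carrier H - Q) (\<phi> (fst (sect_rep s (comap Q)))) (\<phi> (snd (sect_rep s (comap Q)))) \<noteq> {}"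
      using H.frac_nonempty[OF QQ(1) f(6) f(5) f(4)] .
    thus "frac H (carrier H - Q) (\<phi> (fst (sect_rep s (comap Q0)))) (\<phi> (snd (sect_rep s (comap Q0)))) \<noteq> {}"
      using \<open>frac H (carrier H - Q) _ _ = frac H (carrier H - Q) _ _\<close> by simp
  qed
  thus ?thesis using H.sections_iff_fraction[OF preimg_comap_open[OF U]] induced_extensional[OF U s] by blast
qed

lemma induced_add:
  assumes U: "zariski_open R U" and s: "s \<in> sections R U" and t: "t \<in> sections R U"
    and r: "r \<in> hadd (OX R U) s t"
  shows "induced_sheaf_map R H \<phi> U r
    \<in> hadd (OX H (preimg comap (Spec H) U)) (induced_sheaf_map R H \<phi> U s) (induced_sheaf_map R H \<phi> U t)"
proof -
  have rs: "r \<in> sections R U" and rP: "\<And>P. P \<in> U \<Longrightarrow> r P \<in> loc_add R (KR - P) (s P) (t P)"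
    using r unfolding OX_def by auto
  have "induced_sheaf_map R H \<phi> U r Q
      \<in> loc_add H (KH - Q) (induced_sheaf_map R H \<phi> U s Q) (induced_sheaf_map R H \<phi> U t Q)"
    if Q: "Q \<in> preimg comap (Spec H) U" for Q
  proof -
    have QQ: "Q \<in> Spec H" "comap Q \<in> U" "comap Q \<in> Spec R"
      using preimg_comapD[OF Q] comap_Spec by auto
    define a f b g where "a = fst (sect_rep s (comap Q))" and "f = snd (sect_rep s (comap Q))"
      and "b = fst (sect_rep t (comap Q))" and "g = snd (sect_rep t (comap Q))"
    note fs = sect_rep_comap[OF U s Q, folded a_def f_def] and ft = sect_rep_comap[OF U t Q, folded b_def g_def]
    obtain y where y: "y \<in> hadd R (hmul R a g) (hmul R f b)" "r (comap Q) = frac R (KR - comap Q) y (hmul R f g)"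
      using rP[OF QQ(2)] unfolding fs(8) ft(8) R.loc_add_frac[OF QQ(3) fs(1) ft(1) fs(2) ft(2) fs(3) ft(3)] by blast
    have yK: "y \<in> KR" using R.add_closed[OF _ _ y(1)] fs(1,2) ft(1,2) by simp
    have fg: "hmul R f g \<in> KR" "hmul R f g \<notin> comap Q"
      using R.prime_mul_notin[OF QQ(3)] fs(2,3) ft(2,3) by auto
    have "\<phi> y \<in> hadd H (hmul H (\<phi> a) (\<phi> g)) (hmul H (\<phi> f) (\<phi> b))"
      using hom_add[OF _ _ y(1)] hom_mul fs(1,2) ft(1,2) by simp
    thus ?thesis
      unfolding induced_frac[OF U rs Q yK fg y(2)] induced_apply[OF U s Q] induced_apply[OF U t Q]
        a_def[symmetric] f_def[symmetric] b_def[symmetric] g_def[symmetric]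
        H.loc_add_frac[OF QQ(1) fs(6) ft(6) fs(5) ft(5) fs(4) ft(4)] hom_mul[OF fs(2) ft(2)]
      by blast
  qed
  thus ?thesis using induced_section[OF U rs] unfolding OX_def by simp
qed

lemma induced_mul:
  assumes U: "zariski_open R U" and s: "s \<in> sections R U" and t: "t \<in> sections R U"
  shows "induced_sheaf_map R H \<phi> U (hmul (OX R U) s t)
    = hmul (OX H (preimg comap (Spec H) U)) (induced_sheaf_map R H \<phi> U s) (induced_sheaf_map R H \<phi> U t)"
proof (rule extensionalityI)
  have st: "hmul (OX R U) s t \<in> sections R U" using R.OX_mul_section[OF U s t] .
  show "induced_sheaf_map R H \<phi> U (hmul (OX R U) s t) \<in> extensional (preimg comap (Spec H) U)"
    using induced_extensional[OF U st] .
  show "hmul (OX H (preimg comap (Spec H) U)) (induced_sheaf_map R H \<phi> U s) (induced_sheaf_map R H \<phi> U t)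
      \<in> extensional (preimg comap (Spec H) U)"
    unfolding OX_def by simp
  fix Q assume Q: "Q \<in> preimg comap (Spec H) U"
  have QQ: "Q \<in> Spec H" "comap Q \<in> U" "comap Q \<in> Spec R"
    using preimg_comapD[OF Q] comap_Spec by auto
  define a f b g where "a = fst (sect_rep s (comap Q))" and "f = snd (sect_rep s (comap Q))"
    and "b = fst (sect_rep t (comap Q))" and "g = snd (sect_rep t (comap Q))"
  note fs = sect_rep_comap[OF U s Q, folded a_def f_def] and ft = sect_rep_comap[OF U t Q, folded b_def g_def]
  have "hmul (OX R U) s t (comap Q) = frac R (KR - comap Q) (hmul R a b) (hmul R f g)"
    unfolding OX_def using QQ(2) fs(8) ft(8) R.loc_mul_frac[OF QQ(3) fs(1) ft(1) fs(2) ft(2) fs(3) ft(3)] by simp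
  moreover have fg: "hmul R f g \<in> KR" "hmul R f g \<notin> comap Q"
    using R.prime_mul_notin[OF QQ(3)] fs(2,3) ft(2,3) by auto
  ultimately have "induced_sheaf_map R H \<phi> U (hmul (OX R U) s t) Q
      = frac H (KH - Q) (hmul H (\<phi> a) (\<phi> b)) (hmul H (\<phi> f) (\<phi> g))"
    using induced_frac[OF U st Q R.mul_closed[OF fs(1) ft(1)] fg] hom_mul fs(1,2) ft(1,2) by simp
  also have "\<dots> = loc_mul H (KH - Q) (induced_sheaf_map R H \<phi> U s Q) (induced_sheaf_map R H \<phi> U t Q)"
    unfolding induced_apply[OF U s Q] induced_apply[OF U t Q] a_def[symmetric] f_def[symmetric]
      b_def[symmetric] g_def[symmetric] H.loc_mul_frac[OF QQ(1) fs(6) ft(6) fs(5) ft(5) fs(4) ft(4)] ..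
  finally show "induced_sheaf_map R H \<phi> U (hmul (OX R U) s t) Q
      = hmul (OX H (preimg comap (Spec H) U)) (induced_sheaf_map R H \<phi> U s) (induced_sheaf_map R H \<phi> U t) Q"
    unfolding OX_def using Q by simp
qed

lemma induced_const:
  assumes U: "zariski_open R U" and c: "c \<in> KR"
  shows "induced_sheaf_map R H \<phi> U (\<lambda>P\<in>U. loc_class R (KR - P) c (hone R))
    = (\<lambda>P\<in>preimg comap (Spec H) U. loc_class H (KH - P) (\<phi> c) (hone H))"
proof (rule extensionalityI)
  have cs: "(\<lambda>P\<in>U. loc_class R (KR - P) c (hone R)) \<in> sections R U"
    using R.const_has_fraction[OF R.zariski_open_subset[OF U] c] R.sections_iff_fraction[OF U] by auto
  show "induced_sheaf_map R H \<phi> U (\<lambda>P\<in>U. loc_class R (KR - P) c (hone R)) \<in> extensional (preimg comap (Spec H) U)"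
    using induced_extensional[OF U cs] .
  fix Q assume Q: "Q \<in> preimg comap (Spec H) U"
  have QQ: "Q \<in> Spec H" "comap Q \<in> U" "comap Q \<in> Spec R"
    using preimg_comapD[OF Q] comap_Spec by auto
  show "induced_sheaf_map R H \<phi> U (\<lambda>P\<in>U. loc_class R (KR - P) c (hone R)) Q
      = (\<lambda>P\<in>preimg comap (Spec H) U. loc_class H (KH - P) (\<phi> c) (hone H)) Q"
    using induced_frac[OF U cs Q c R.one_closed R.one_notin_prime[OF QQ(3)]] Q QQ(2)
      R.loc_class_eq_frac[OF QQ(3) c R.one_closed R.one_notin_prime[OF QQ(3)]]
      H.loc_class_eq_frac[OF QQ(1) hom_closed[OF c] H.one_closed H.one_notin_prime[OF QQ(1)]] hom_one
    by simp
qed (simp)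

lemma induced_hom:
  assumes U: "zariski_open R U"
  shows "hyperring_hom (OX R U) (OX H (preimg comap (Spec H) U)) (induced_sheaf_map R H \<phi> U)"
  unfolding hyperring_hom_def
proof (intro conjI ballI)
  have cR: "carrier (OX R U) = sections R U" and cH: "carrier (OX H (preimg comap (Spec H) U)) = sections H (preimg comap (Spec H) U)"
    unfolding OX_def by simp_all
  show "induced_sheaf_map R H \<phi> U \<in> carrier (OX R U) \<rightarrow> carrier (OX H (preimg comap (Spec H) U))"
    unfolding cR cH using induced_section[OF U] by blast
  fix s t assume s: "s \<in> carrier (OX R U)" and t: "t \<in> carrier (OX R U)"
  show "induced_sheaf_map R H \<phi> U ` hadd (OX R U) s t \<subseteq> hadd (OX H (preimg comap (Spec H) U)) (induced_sheaf_map R H \<phi> U s) (induced_sheaf_map R H \<phi> U t)"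
    using induced_add[OF U s[unfolded cR] t[unfolded cR]] by blast
  show "induced_sheaf_map R H \<phi> U (hmul (OX R U) s t) = hmul (OX H (preimg comap (Spec H) U)) (induced_sheaf_map R H \<phi> U s) (induced_sheaf_map R H \<phi> U t)"
    using induced_mul[OF U s[unfolded cR] t[unfolded cR]] .
next
  show "induced_sheaf_map R H \<phi> U (hzero (OX R U)) = hzero (OX H (preimg comap (Spec H) U))"
    unfolding OX_def using induced_const[OF U R.zero_closed] hom_zero by (simp add: OX_def)
  show "induced_sheaf_map R H \<phi> U (hone (OX R U)) = hone (OX H (preimg comap (Spec H) U))"
    unfolding OX_def using induced_const[OF U R.one_closed] hom_one by (simp add: OX_def)
qed

lemma induced_restrict:
  assumes U: "zariski_open R U" and V: "zariski_open R V" "V \<subseteq> U" and s: "s \<in> sections R U"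
  shows "induced_sheaf_map R H \<phi> V (restrict s V) = restrict (induced_sheaf_map R H \<phi> U s) (preimg comap (Spec H) V)"
proof (rule extensionalityI)
  have rs: "restrict s V \<in> sections R V" using R.restrict_section[OF V(1) U V(2) s] .
  show "induced_sheaf_map R H \<phi> V (restrict s V) \<in> extensional (preimg comap (Spec H) V)"
    using induced_extensional[OF V(1) rs] .
  fix Q assume Q: "Q \<in> preimg comap (Spec H) V"
  have QV: "comap Q \<in> V" and QU: "Q \<in> preimg comap (Spec H) U"
    using Q V(2) unfolding preimg_def by auto
  have "sect_rep (restrict s V) (comap Q) = sect_rep s (comap Q)" unfolding sect_rep_def using QV by simp
  thus "induced_sheaf_map R H \<phi> V (restrict s V) Q = restrict (induced_sheaf_map R H \<phi> U s) (preimg comap (Spec H) V) Q"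
    using induced_apply[OF V(1) rs Q] induced_apply[OF U s QU] Q by simp
qed simp

lemma stalk_map_induced:
  assumes P: "P \<in> Spec H" and g: "g \<in> stalk_carrier R (comap P)"
  shows "stalk_map H comap (induced_sheaf_map R H \<phi>) P g \<in> stalk_carrier H P"
    "g \<in> stalk_maximal_ideal R (comap P) \<longleftrightarrow> stalk_map H comap (induced_sheaf_map R H \<phi>) P g \<in> stalk_maximal_ideal H P"
proof -
  obtain U s where x: "(SOME x. x \<in> g) = (U,s)" by fastforce
  note sg = R.stalk_some_rep[OF g, unfolded x, simplified]
  have sm_e: "stalk_map H comap (induced_sheaf_map R H \<phi>) P g = germ H P (preimg comap (Spec H) U) (induced_sheaf_map R H \<phi> U s)"
    unfolding stalk_map_def x by simp
  have PU: "P \<in> preimg comap (Spec H) U" unfolding preimg_def using P sg(3) by blast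
  note o = preimg_comap_open[OF sg(2)] and fsec = induced_section[OF sg(2) sg(4)]
  show "stalk_map H comap (induced_sheaf_map R H \<phi>) P g \<in> stalk_carrier H P"
    using H.germ_in_stalk[OF o PU fsec] sm_e by simp
  have pvH: "germ_value H P (stalk_map H comap (induced_sheaf_map R H \<phi>) P g) = induced_sheaf_map R H \<phi> U s P"
    using H.germ_value_germ[OF o PU fsec] sm_e by simp
  note f = sect_rep_comap[OF sg(2) sg(4) PU]
  have PS: "comap P \<in> Spec R" using comap_Spec[OF P] .
  have "g \<in> stalk_maximal_ideal R (comap P) \<longleftrightarrow> germ_value R (comap P) g \<in> loc_maximal_ideal R (comap P)" unfolding stalk_maximal_ideal_def
    using g by blast
  also have "\<dots> \<longleftrightarrow> fst (sect_rep s (comap P)) \<in> comap P"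
    using sg(5) f(8) R.frac_in_loc_maximal_ideal[OF PS f(1,2,3)] by simp
  also have "\<dots> \<longleftrightarrow> \<phi> (fst (sect_rep s (comap P))) \<in> P"
    using comap_mem_iff[OF P f(1)] .
  also have "\<dots> \<longleftrightarrow> induced_sheaf_map R H \<phi> U s P \<in> loc_maximal_ideal H P"
    using induced_apply[OF sg(2) sg(4) PU] H.frac_in_loc_maximal_ideal[OF P f(6,5,4)] by simp
  also have "\<dots> \<longleftrightarrow> stalk_map H comap (induced_sheaf_map R H \<phi>) P g \<in> stalk_maximal_ideal H P"
    unfolding stalk_maximal_ideal_def using pvH H.germ_in_stalk[OF o PU fsec] sm_e by simp
  finally show "g \<in> stalk_maximal_ideal R (comap P) \<longleftrightarrow> stalk_map H comap (induced_sheaf_map R H \<phi>) P g \<in> stalk_maximal_ideal H P" .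
qed

lemma induced_morphism: "(comap, induced_sheaf_map R H \<phi>) \<in> lhs_morphisms H R"
proof -
  have smS: "comap \<in> Spec H \<rightarrow> Spec R" using comap_Spec by blast
  have loc: "\<forall>P\<in>Spec H. \<forall>m n. maximal_hyperideal (stalk R (comap P)) m \<and> maximal_hyperideal (stalk H P) n \<longrightarrow>
        {g \<in> carrier (stalk R (comap P)). stalk_map H comap (induced_sheaf_map R H \<phi>) P g \<in> n} = m"
  proof (intro ballI allI impI)
    fix P m n assume P: "P \<in> Spec H" and mn: "maximal_hyperideal (stalk R (comap P)) m \<and> maximal_hyperideal (stalk H P) n"
    have m: "m = stalk_maximal_ideal R (comap P)"
      using mn R.maximal_hyperideal_stalk_iff[OF comap_Spec[OF P]] by blast
    have n: "n = stalk_maximal_ideal H P" using mn H.maximal_hyperideal_stalk_iff[OF P] by blast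
    show "{g \<in> carrier (stalk R (comap P)). stalk_map H comap (induced_sheaf_map R H \<phi>) P g \<in> n} = m"
      unfolding m n carrier_stalk using stalk_map_induced[OF P] unfolding stalk_maximal_ideal_def by blast
  qed
  have "is_lhs_morphism H R comap (induced_sheaf_map R H \<phi>)" unfolding is_lhs_morphism_def
    using smS preimg_comap_open induced_hom induced_restrict loc by blast
  moreover have "comap \<in> extensional (Spec H)" unfolding spec_map_def by simp
  moreover have "\<forall>U. if zariski_open R U then induced_sheaf_map R H \<phi> U \<in> extensional (sections R U) else induced_sheaf_map R H \<phi> U = undefined"
    unfolding induced_sheaf_map_def by simp
  ultimately show ?thesis unfolding lhs_morphisms_def by blast
qed

lemma induced_global_canon:
  assumes r: "r \<in> KR"
  shows "induced_sheaf_map R H \<phi> (Spec R) (global_canon R r) = global_canon H (\<phi> r)"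
  using induced_const[OF R.zariski_open_Spec r] preimg_comap_Spec unfolding global_canon_def by simp

lemma global_hom_induced:
  assumes "\<phi> \<in> extensional KR"
  shows "global_hom R H (comap, induced_sheaf_map R H \<phi>) = \<phi>"
proof
  fix r show "global_hom R H (comap, induced_sheaf_map R H \<phi>) r = \<phi> r"
  proof (cases "r \<in> KR")
    case True
    thus ?thesis using global_hom_apply[OF True hom_closed[OF True]] induced_global_canon[OF True] by simp
  next
    case False
    thus ?thesis using assms unfolding global_hom_def extensional_def by simp
  qed
qed

end

section \<open>Morphisms are induced by their global sections\<close>

context hdomain begin

text \<open>The identity \<open>s \<cdot> g/1 = a/1\<close> on the basic open set where \<open>s = a/g\<close> is the relation
  through which a morphism of structure sheaves is pinned down by its global sections.\<close>

lemma restrict_section_mul_denominator: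
  assumes U: "zariski_open A U" and s: "s \<in> sections A U" and P: "P \<in> U"
    and ag: "a \<in> K" "g \<in> K" "g \<notin> P" "s P = frac A (K - P) a g"
  defines "W \<equiv> U \<inter> {Q\<in>Spec A. g \<notin> Q}"
  shows "zariski_open A W" "P \<in> W" "restrict s W \<in> sections A W"
    "hmul (OX A W) (restrict s W) (restrict (global_canon A g) W) = restrict (global_canon A a) W"
proof -
  have PS: "P \<in> Spec A" using section_domain_Spec[OF s P] .
  have gz: "g \<noteq> \<zero>" using ag(3) PS by auto
  show W: "zariski_open A W" unfolding W_def using zariski_open_Int[OF U zariski_open_basic[OF ag(2)]] .
  show "P \<in> W" unfolding W_def using P PS ag(3) by blast
  have WU: "W \<subseteq> U" and WX: "W \<subseteq> Spec A" unfolding W_def by auto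
  show "restrict s W \<in> sections A W" using restrict_section[OF W U WU s] .
  obtain a0 f0 where v0: "has_fraction A U s a0 f0" using section_has_fraction[OF s] P by blast
  have "sect_rep s P \<in> frac A (K - P) a0 f0"
    using sect_rep_frac(5)[OF s P] has_fractionD(4)[OF v0 P] by simp
  moreover have "(a, g) \<in> frac A (K - P) a g" using frac_self ag by simp
  ultimately have "a \<cdot> f0 = a0 \<cdot> g"
    using frac_eq_fracD[OF PS ag(1) has_fractionD(1) [OF v0] ag(2) has_fractionD(2)[OF v0]]
      has_fractionD(4)[OF v0 P] ag(4) by metis
  hence vs: "has_fraction A W (restrict s W) a g"
    using has_fraction_cong[OF has_fraction_mono[OF v0 WU] ag(1,2) gz] by simp
  have vg: "has_fraction A W (restrict (global_canon A g) W) g \<one>"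
    using has_fraction_mono[OF global_canon_has_fraction[OF ag(2)] WX] by simp
  have va: "has_fraction A W (restrict (global_canon A a) W) a \<one>"
    using has_fraction_mono[OF global_canon_has_fraction[OF ag(1)] WX] by simp
  show "hmul (OX A W) (restrict s W) (restrict (global_canon A g) W) = restrict (global_canon A a) W"
    by (rule has_fraction_eq[OF _ _ OX_mul_has_fraction[OF WX vs vg] va]) (use ag in \<open>simp_all add: OX_def\<close>)
qed

end

locale hdomain_morphism = hdomain_pair +
  fixes f :: "'b set \<Rightarrow> 'a set" and fs :: "('a, 'b) sheaf_map"
  assumes morphism: "(f, fs) \<in> lhs_morphisms H R"
begin

abbreviation "\<psi> \<equiv> global_hom R H (f, fs)"

lemma morphismD:
  "f \<in> Spec H \<rightarrow> Spec R"
  "\<And>U. zariski_open R U \<Longrightarrow> zariski_open H (preimg f (Spec H) U)"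
  "\<And>U. zariski_open R U \<Longrightarrow> hyperring_hom (OX R U) (OX H (preimg f (Spec H) U)) (fs U)"
  "\<And>U V s. zariski_open R U \<Longrightarrow> zariski_open R V \<Longrightarrow> V \<subseteq> U \<Longrightarrow> s \<in> sections R U \<Longrightarrow>
        fs V (restrict s V) = restrict (fs U s) (preimg f (Spec H) V)"
  "\<And>P m n. P \<in> Spec H \<Longrightarrow> maximal_hyperideal (stalk R (f P)) m \<Longrightarrow> maximal_hyperideal (stalk H P) n \<Longrightarrow>
        {g \<in> carrier (stalk R (f P)). stalk_map H f fs P g \<in> n} = m"
  "f \<in> extensional (Spec H)"
  "\<And>U. zariski_open R U \<Longrightarrow> fs U \<in> extensional (sections R U)"
  "\<And>U. \<not> zariski_open R U \<Longrightarrow> fs U = undefined"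
  using morphism unfolding lhs_morphisms_def is_lhs_morphism_def by auto

lemma map_Spec: "P \<in> Spec H \<Longrightarrow> f P \<in> Spec R"
  using morphismD(1) by blast

lemma preimg_Spec: "preimg f (Spec H) (Spec R) = Spec H"
  unfolding preimg_def using map_Spec by blast

lemma preimgD: "Q \<in> preimg f (Spec H) U \<Longrightarrow> Q \<in> Spec H \<and> f Q \<in> U"
  unfolding preimg_def by simp

lemma fs_hom:
  assumes U: "zariski_open R U"
  shows "\<And>s. s \<in> sections R U \<Longrightarrow> fs U s \<in> sections H (preimg f (Spec H) U)"
    "\<And>s t. s \<in> sections R U \<Longrightarrow> t \<in> sections R U \<Longrightarrow>
      fs U ` hadd (OX R U) s t \<subseteq> hadd (OX H (preimg f (Spec H) U)) (fs U s) (fs U t)"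
    "\<And>s t. s \<in> sections R U \<Longrightarrow> t \<in> sections R U \<Longrightarrow>
      fs U (hmul (OX R U) s t) = hmul (OX H (preimg f (Spec H) U)) (fs U s) (fs U t)"
    "fs U (hzero (OX R U)) = hzero (OX H (preimg f (Spec H) U))"
    "fs U (hone (OX R U)) = hone (OX H (preimg f (Spec H) U))"
  using morphismD(3)[OF U] unfolding hyperring_hom_def OX_def by auto

lemmas fs_global_hom = fs_hom[OF R.zariski_open_Spec, unfolded preimg_Spec]

lemma psi_global_canon:
  assumes r: "r \<in> KR"
  shows "\<psi> r \<in> KH" "global_canon H (\<psi> r) = fs (Spec R) (global_canon R r)"
proof -
  obtain h where "h \<in> KH" "fs (Spec R) (global_canon R r) = global_canon H h"
    using H.global_section_canon fs_global_hom(1)[OF R.global_canon_section[OF r]] by blast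
  moreover have "\<psi> r = h" if "h \<in> KH" "fs (Spec R) (global_canon R r) = global_canon H h" for h
    using global_hom_apply[OF r that(1)] that(2) by simp
  ultimately show "\<psi> r \<in> KH" "global_canon H (\<psi> r) = fs (Spec R) (global_canon R r)" by auto
qed

lemma psi_add:
  assumes a: "a \<in> KR" and b: "b \<in> KR" and y: "y \<in> hadd R a b"
  shows "\<psi> y \<in> hadd H (\<psi> a) (\<psi> b)"
proof -
  have yK: "y \<in> KR" using R.add_closed[OF a b y] .
  have "fs (Spec R) (global_canon R y)
      \<in> hadd (OX H (Spec H)) (fs (Spec R) (global_canon R a)) (fs (Spec R) (global_canon R b))"
    using fs_global_hom(2)[OF R.global_canon_section[OF a] R.global_canon_section[OF b]] R.global_canon_add[OF a b y]
    by blast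
  thus ?thesis
    using H.global_canon_addD[OF psi_global_canon(1)[OF a] psi_global_canon(1)[OF b] psi_global_canon(1)[OF yK]]
      psi_global_canon(2) a b yK by simp
qed

lemma psi_mul:
  assumes a: "a \<in> KR" and b: "b \<in> KR"
  shows "\<psi> (hmul R a b) = hmul H (\<psi> a) (\<psi> b)"
proof -
  have ab: "hmul R a b \<in> KR" using R.mul_closed[OF a b] .
  have "global_canon H (\<psi> (hmul R a b)) = fs (Spec R) (hmul (OX R (Spec R)) (global_canon R a) (global_canon R b))"
    using psi_global_canon(2)[OF ab] R.global_canon_mul[OF a b] by simp
  also have "\<dots> = hmul (OX H (Spec H)) (global_canon H (\<psi> a)) (global_canon H (\<psi> b))"
    using fs_global_hom(3)[OF R.global_canon_section[OF a] R.global_canon_section[OF b]] psi_global_canon(2) a b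
    by simp
  also have "\<dots> = global_canon H (hmul H (\<psi> a) (\<psi> b))"
    using H.global_canon_mul psi_global_canon(1) a b by simp
  finally show ?thesis
    using H.global_canon_inj[OF psi_global_canon(1)[OF ab] H.mul_closed[OF psi_global_canon(1)[OF a] psi_global_canon(1)[OF b]]]
    by simp
qed

lemma psi_zero: "\<psi> (hzero R) = hzero H"
  using psi_global_canon[OF R.zero_closed] fs_global_hom(4) H.global_canon_inj[OF _ H.zero_closed]
  unfolding R.OX_zero_global_canon H.OX_zero_global_canon by simp

lemma psi_one: "\<psi> (hone R) = hone H"
  using psi_global_canon[OF R.one_closed] fs_global_hom(5) H.global_canon_inj[OF _ H.one_closed]
  unfolding R.OX_one_global_canon H.OX_one_global_canon by simp

lemma psi_hom: "\<psi> \<in> hyperring_homs R H"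
proof -
  have "\<psi> \<in> extensional KR" unfolding global_hom_def by simp
  thus ?thesis unfolding hyperring_homs_def hyperring_hom_def
    using psi_global_canon(1) psi_add psi_mul psi_zero psi_one by blast
qed

lemma stalk_map_germ_global_canon:
  assumes P: "P \<in> Spec H" and r: "r \<in> KR"
  defines "g \<equiv> germ R (f P) (Spec R) (global_canon R r)"
  shows "stalk_map H f fs P g \<in> stalk_carrier H P"
    "germ_value H P (stalk_map H f fs P g) = frac H (KH - P) (\<psi> r) (hone H)"
proof -
  have fP: "f P \<in> Spec R" using map_Spec[OF P] .
  note gc = R.global_canon_section[OF r]
  have "g \<in> stalk_carrier R (f P)" unfolding g_def using R.germ_in_stalk[OF R.zariski_open_Spec fP gc] .
  then obtain U s where x: "(SOME x. x \<in> g) = (U,s)" and sg: "zariski_open R U" "f P \<in> U" "s \<in> sections R U"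
    "s (f P) = germ_value R (f P) g"
    using R.stalk_some_rep by (metis prod.collapse)
  have UX: "U \<subseteq> Spec R" using R.zariski_open_subset[OF sg(1)] .
  have "s (f P) = global_canon R r (f P)"
    using sg(4) R.germ_value_germ[OF R.zariski_open_Spec fP gc] g_def by simp
  hence "s = restrict (global_canon R r) U"
    using R.section_eq_restrict[OF UX sg(3) gc sg(2)] by simp
  hence fsU: "fs U s = restrict (global_canon H (\<psi> r)) (preimg f (Spec H) U)"
    using morphismD(4)[OF R.zariski_open_Spec sg(1) UX gc] psi_global_canon(2)[OF r] preimg_Spec by simp
  have sm: "stalk_map H f fs P g = germ H P (preimg f (Spec H) U) (fs U s)"
    unfolding stalk_map_def x by simp
  have PU: "P \<in> preimg f (Spec H) U" unfolding preimg_def using P sg(2) by blast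
  note o = morphismD(2)[OF sg(1)] and fsec = fs_hom(1)[OF sg(1) sg(3)]
  show "stalk_map H f fs P g \<in> stalk_carrier H P" using H.germ_in_stalk[OF o PU fsec] sm by simp
  show "germ_value H P (stalk_map H f fs P g) = frac H (KH - P) (\<psi> r) (hone H)"
    using H.germ_value_germ[OF o PU fsec] sm fsU PU H.global_canon_apply[OF P psi_global_canon(1)[OF r]] by simp
qed

text \<open>Locality of the stalk maps, tested on the germ of \<open>r/1\<close>, says exactly that
  \<open>r \<in> f(P)\<close> iff \<open>\<psi>(r) \<in> P\<close>.\<close>

lemma map_mem_iff:
  assumes P: "P \<in> Spec H" and r: "r \<in> KR"
  shows "r \<in> f P \<longleftrightarrow> \<psi> r \<in> P"
proof -
  have fP: "f P \<in> Spec R" using map_Spec[OF P] .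
  define g where "g = germ R (f P) (Spec R) (global_canon R r)"
  note gc = R.global_canon_section[OF r]
  have gS: "g \<in> stalk_carrier R (f P)" unfolding g_def
    using R.germ_in_stalk[OF R.zariski_open_Spec fP gc] .
  have "{g \<in> carrier (stalk R (f P)). stalk_map H f fs P g \<in> stalk_maximal_ideal H P} = stalk_maximal_ideal R (f P)"
    using morphismD(5)[OF P] R.maximal_hyperideal_stalk_iff[OF fP] H.maximal_hyperideal_stalk_iff[OF P] by simp
  hence "g \<in> stalk_maximal_ideal R (f P) \<longleftrightarrow> stalk_map H f fs P g \<in> stalk_maximal_ideal H P"
    using gS carrier_stalk by blast
  moreover have "g \<in> stalk_maximal_ideal R (f P) \<longleftrightarrow> r \<in> f P"
    using gS R.germ_value_germ[OF R.zariski_open_Spec fP gc] R.global_canon_apply[OF fP r]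
      R.frac_in_loc_maximal_ideal[OF fP r R.one_closed R.one_notin_prime[OF fP]]
    unfolding stalk_maximal_ideal_def g_def by simp
  moreover have "stalk_map H f fs P g \<in> stalk_maximal_ideal H P \<longleftrightarrow> \<psi> r \<in> P"
    using stalk_map_germ_global_canon[OF P r, folded g_def] psi_global_canon(1)[OF r]
      H.frac_in_loc_maximal_ideal[OF P _ H.one_closed H.one_notin_prime[OF P]]
    unfolding stalk_maximal_ideal_def by simp
  ultimately show ?thesis by simp
qed

lemma map_eq_spec_map: "f = spec_map R H \<psi>"
proof (rule extensionalityI[OF morphismD(6)])
  show "spec_map R H \<psi> \<in> extensional (Spec H)" unfolding spec_map_def by simp
  fix P assume P: "P \<in> Spec H"
  have "f P \<subseteq> KR" using R.SpecD(1)[OF map_Spec[OF P]] .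
  hence "f P = {x \<in> KR. \<psi> x \<in> P}" using map_mem_iff[OF P] by blast
  thus "f P = spec_map R H \<psi> P" unfolding spec_map_def using P by simp
qed

lemma fs_frac:
  assumes U: "zariski_open R U" and s: "s \<in> sections R U" and Q: "Q \<in> preimg f (Spec H) U"
    and ag: "a \<in> KR" "g \<in> KR" "g \<notin> f Q" "s (f Q) = frac R (KR - f Q) a g"
  shows "fs U s Q = frac H (KH - Q) (\<psi> a) (\<psi> g)"
proof -
  have QQ: "Q \<in> Spec H" "f Q \<in> U" using preimgD[OF Q] by auto
  define W where "W = U \<inter> {P'\<in>Spec R. g \<notin> P'}"
  note W = R.restrict_section_mul_denominator[OF U s QQ(2) ag, folded W_def]
  have WU: "W \<subseteq> U" and WX: "W \<subseteq> Spec R" unfolding W_def by auto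
  have gcs: "global_canon R a \<in> sections R (Spec R)" "global_canon R g \<in> sections R (Spec R)"
    using R.global_canon_section ag(1,2) by auto
  have QW: "Q \<in> preimg f (Spec H) W" unfolding preimg_def using QQ(1) W(2) by blast
  have "global_canon H (\<psi> a) Q = loc_mul H (KH - Q) (fs U s Q) (global_canon H (\<psi> g) Q)"
    using arg_cong[OF fs_hom(3)[OF W(1) W(3) R.restrict_section[OF W(1) R.zariski_open_Spec WX gcs(2)]], of "\<lambda>x. x Q"]
      W(4) morphismD(4)[OF U W(1) WU s] morphismD(4)[OF R.zariski_open_Spec W(1) WX gcs(1)]
      morphismD(4)[OF R.zariski_open_Spec W(1) WX gcs(2)] psi_global_canon(2) ag(1,2) QW
    unfolding OX_def by simp
  moreover obtain b h where bh: "b \<in> KH" "h \<in> KH" "h \<notin> Q" "fs U s Q = frac H (KH - Q) b h"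
    using H.loc_carrier_fracE[OF QQ(1) H.section_value[OF fs_hom(1)[OF U s] Q]] by blast
  moreover have "\<psi> a \<in> KH" "\<psi> g \<in> KH" "\<psi> g \<notin> Q"
    using psi_global_canon(1) ag map_mem_iff[OF QQ(1) ag(2)] by auto
  ultimately have "frac H (KH - Q) (\<psi> a) (hone H) = frac H (KH - Q) (hmul H b (\<psi> g)) (hmul H h (hone H))"
    using H.global_canon_apply[OF QQ(1)] H.loc_mul_frac[OF QQ(1) bh(1) _ bh(2) H.one_closed bh(3) H.one_notin_prime[OF QQ(1)]]
    by simp
  hence "hmul H b (\<psi> g) = hmul H (\<psi> a) h"
    using H.frac_eq_fracD[OF QQ(1) _ H.mul_closed[OF bh(1)] H.one_closed H.mul_closed[OF bh(2) H.one_closed]]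
      H.frac_self[of "\<psi> a" "hone H" "KH - Q"] bh \<open>\<psi> a \<in> KH\<close> \<open>\<psi> g \<in> KH\<close> H.one_notin_prime[OF QQ(1)] by auto
  thus ?thesis
    using bh(4) H.frac_eqI[of "KH - Q" b "\<psi> a" h "\<psi> g"] bh(1-3) \<open>\<psi> a \<in> KH\<close> \<open>\<psi> g \<in> KH\<close> \<open>\<psi> g \<notin> Q\<close>
      H.zero_in_prime[OF QQ(1)] by (metis Diff_subset)
qed

lemma fs_eq_induced: "fs = induced_sheaf_map R H \<psi>"
proof -
  interpret \<psi>: hdomain_hom R H \<psi> using psi_hom unfolding hyperring_homs_def by unfold_locales blast
  show ?thesis
  proof
    fix U show "fs U = induced_sheaf_map R H \<psi> U"
    proof (cases "zariski_open R U")
      case False thus ?thesis using morphismD(8) unfolding induced_sheaf_map_def by simp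
    next
      case U: True
      show ?thesis
      proof (rule extensionalityI[OF morphismD(7)[OF U]])
        show "induced_sheaf_map R H \<psi> U \<in> extensional (sections R U)" unfolding induced_sheaf_map_def
          using U by simp
        fix s assume s: "s \<in> sections R U"
        show "fs U s = induced_sheaf_map R H \<psi> U s"
        proof (rule extensionalityI)
          show "fs U s \<in> extensional (preimg f (Spec H) U)"
            using H.section_extensional[OF fs_hom(1)[OF U s]] .
          show "induced_sheaf_map R H \<psi> U s \<in> extensional (preimg f (Spec H) U)"
            using \<psi>.induced_extensional[OF U s] map_eq_spec_map by simp
          fix Q assume Q: "Q \<in> preimg f (Spec H) U"
          note rep = R.sect_rep_frac[OF s conjunct2[OF preimgD[OF Q]]]
          show "fs U s Q = induced_sheaf_map R H \<psi> U s Q"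
            using fs_frac[OF U s Q rep(1-4)] \<psi>.induced_apply[OF U s] Q map_eq_spec_map by simp
        qed
      qed
    qed
  qed
qed

end


theorem proposition4p31:
  fixes R :: "'a hyperring" and H :: "'b hyperring"
  assumes "hyperdomain R" and "hyperdomain H"
  shows "\<exists>\<Phi>. bij_betw \<Phi> (hyperring_homs R H) (lhs_morphisms H R) \<and>
           (\<forall>\<phi>\<in>hyperring_homs R H. fst (\<Phi> \<phi>) = spec_map R H \<phi> \<and> global_hom R H (\<Phi> \<phi>) = \<phi>)"
proof -
  interpret hdomain_pair R H by unfold_locales (use assms in auto)
  define \<Phi> where "\<Phi> = (\<lambda>\<phi>. (spec_map R H \<phi>, induced_sheaf_map R H \<phi>))"
  have forward: "\<Phi> \<phi> \<in> lhs_morphisms H R \<and> global_hom R H (\<Phi> \<phi>) = \<phi>" if "\<phi> \<in> hyperring_homs R H" for \<phi>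
  proof -
    interpret hdomain_hom R H \<phi> using that unfolding hyperring_homs_def by unfold_locales blast
    show ?thesis
      unfolding \<Phi>_def using induced_morphism global_hom_induced that unfolding hyperring_homs_def by simp
  qed
  have backward: "global_hom R H m \<in> hyperring_homs R H \<and> \<Phi> (global_hom R H m) = m"
    if "m \<in> lhs_morphisms H R" for m
  proof -
    obtain f fs where m: "m = (f, fs)" by fastforce
    interpret hdomain_morphism R H f fs using that m by unfold_locales simp
    show ?thesis unfolding \<Phi>_def m using psi_hom map_eq_spec_map fs_eq_induced by simp
  qed
  have "bij_betw \<Phi> (hyperring_homs R H) (lhs_morphisms H R)"
    by (rule bij_betw_byWitness[where f' = "global_hom R H"]) (use forward backward in auto)
  thus ?thesis using forward unfolding \<Phi>_def by auto
qed

end
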